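(* Let $\mathcal H$ be a Hopf algebra over a commutative ring $k$ with bijective antipode $S$, and let $C$ be a left $\mathcal H$-module coalgebra. Then the map on the $k$-module $C\otimes \mathcal H$ $$\Delta(a\otimes g)=\big(a^{(0)}\otimes g^{(1)}\big)\otimes\big(S^{-1}(g^{(0)}S(g^{(2)}))\cdot a^{(1)}\otimes g^{(3)}\big)$$ is a coassociative comultiplication with counit $\epsilon_C\otimes\epsilon_{\mathcal H}$. The resulting coalgebra is denoted $C>\!\!\blacktriangleleft\mathcal H$.
   Context: Sweedler notation: for a coalgebra element $c$, $\Delta c=c^{(0)}\otimes c^{(1)}$, $\Delta^n c=c^{(0)}\otimes\cdots\otimes c^{(n)}$ (summation understood); same notation in $\mathcal H$. A left $\mathcal H$-module coalgebra is a coalgebra $(C,\Delta,\epsilon_C)$ which is a left $\mathcal H$-module, $h\otimes c\mapsto h\cdot c$, such that $\Delta(h\cdot c)=h^{(0)}\cdot c^{(0)}\otimes h^{(1)}\cdot c^{(1)}$ and $\epsilon_C(h\cdot c)=\epsilon(h)\epsilon_C(c)$. *)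

theory Defs
  imports Main "HOL-Library.Poly_Mapping"
begin

record ('k, 'a) kmod =
  mcarrier :: "'a set"
  madd :: "'a \<Rightarrow> 'a \<Rightarrow> 'a"
  mzero :: 'a
  msmult :: "'k \<Rightarrow> 'a \<Rightarrow> 'a"

definition kmodule :: "('k::comm_ring_1, 'a) kmod \<Rightarrow> bool" where
  "kmodule M \<longleftrightarrow>
     mzero M \<in> mcarrier M \<and>
     (\<forall>x\<in>mcarrier M. \<forall>y\<in>mcarrier M. madd M x y \<in> mcarrier M) \<and>
     (\<forall>r. \<forall>x\<in>mcarrier M. msmult M r x \<in> mcarrier M) \<and>
     (\<forall>x\<in>mcarrier M. \<forall>y\<in>mcarrier M. \<forall>z\<in>mcarrier M.
        madd M (madd M x y) z = madd M x (madd M y z)) \<and>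
     (\<forall>x\<in>mcarrier M. \<forall>y\<in>mcarrier M. madd M x y = madd M y x) \<and>
     (\<forall>x\<in>mcarrier M. madd M (mzero M) x = x) \<and>
     (\<forall>x\<in>mcarrier M. \<exists>y\<in>mcarrier M. madd M x y = mzero M) \<and>
     (\<forall>r. \<forall>x\<in>mcarrier M. \<forall>y\<in>mcarrier M.
        msmult M r (madd M x y) = madd M (msmult M r x) (msmult M r y)) \<and>
     (\<forall>r s. \<forall>x\<in>mcarrier M. msmult M (r + s) x = madd M (msmult M r x) (msmult M s x)) \<and>
     (\<forall>r s. \<forall>x\<in>mcarrier M. msmult M (r * s) x = msmult M r (msmult M s x)) \<and>
     (\<forall>x\<in>mcarrier M. msmult M 1 x = x)"

definition kself :: "('k::comm_ring_1, 'k) kmod" where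
  "kself = \<lparr>mcarrier = UNIV, madd = (+), mzero = 0, msmult = (*)\<rparr>"

definition msum :: "('k, 'a) kmod \<Rightarrow> ('i \<Rightarrow> 'a) \<Rightarrow> 'i set \<Rightarrow> 'a" where
  "msum M f A = Finite_Set.fold (\<lambda>i acc. madd M (f i) acc) (mzero M) A"

definition linear_map :: "('k, 'a) kmod \<Rightarrow> ('k, 'b) kmod \<Rightarrow> ('a \<Rightarrow> 'b) \<Rightarrow> bool" where
  "linear_map M N f \<longleftrightarrow>
     (\<forall>x\<in>mcarrier M. f x \<in> mcarrier N) \<and>
     (\<forall>x\<in>mcarrier M. \<forall>y\<in>mcarrier M. f (madd M x y) = madd N (f x) (f y)) \<and>
     (\<forall>r. \<forall>x\<in>mcarrier M. f (msmult M r x) = msmult N r (f x))"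

definition bilinear_map ::
  "('k, 'a) kmod \<Rightarrow> ('k, 'b) kmod \<Rightarrow> ('k, 'c) kmod \<Rightarrow> ('a \<Rightarrow> 'b \<Rightarrow> 'c) \<Rightarrow> bool" where
  "bilinear_map M N P f \<longleftrightarrow>
     (\<forall>x\<in>mcarrier M. linear_map N P (f x)) \<and>
     (\<forall>y\<in>mcarrier N. linear_map M P (\<lambda>x. f x y))"

section \<open>Tensor product M \<otimes>_k N as the free module on M \<times> N modulo bilinearity\<close>

type_synonym ('k, 'a, 'b) tens = "(('a \<times> 'b) \<Rightarrow>\<^sub>0 'k) set"

definition fscale :: "'k::comm_ring_1 \<Rightarrow> ('i \<Rightarrow>\<^sub>0 'k) \<Rightarrow> ('i \<Rightarrow>\<^sub>0 'k)" where
  "fscale r F = Poly_Mapping.map ((*) r) F"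

definition fdelta :: "'a \<Rightarrow> 'b \<Rightarrow> (('a \<times> 'b) \<Rightarrow>\<^sub>0 'k::comm_ring_1)" where
  "fdelta a b = Poly_Mapping.single (a, b) 1"

definition fspan :: "('i \<Rightarrow>\<^sub>0 'k::comm_ring_1) set \<Rightarrow> ('i \<Rightarrow>\<^sub>0 'k) set" where
  "fspan X = {(\<Sum>x\<in>I. fscale (c x) x) | I c. finite I \<and> I \<subseteq> X}"

definition tensor_rels ::
  "('k::comm_ring_1, 'a) kmod \<Rightarrow> ('k, 'b) kmod \<Rightarrow> (('a \<times> 'b) \<Rightarrow>\<^sub>0 'k) set" where
  "tensor_rels M N =
     {fdelta (madd M a a') b - fdelta a b - fdelta a' b | a a' b.
        a \<in> mcarrier M \<and> a' \<in> mcarrier M \<and> b \<in> mcarrier N} \<union>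
     {fdelta a (madd N b b') - fdelta a b - fdelta a b' | a b b'.
        a \<in> mcarrier M \<and> b \<in> mcarrier N \<and> b' \<in> mcarrier N} \<union>
     {fdelta (msmult M r a) b - fscale r (fdelta a b) | r a b.
        a \<in> mcarrier M \<and> b \<in> mcarrier N} \<union>
     {fdelta a (msmult N r b) - fscale r (fdelta a b) | r a b.
        a \<in> mcarrier M \<and> b \<in> mcarrier N}"

definition tensor_sub ::
  "('k::comm_ring_1, 'a) kmod \<Rightarrow> ('k, 'b) kmod \<Rightarrow> (('a \<times> 'b) \<Rightarrow>\<^sub>0 'k) set" where
  "tensor_sub M N = fspan (tensor_rels M N)"

definition tclass ::
  "('k::comm_ring_1, 'a) kmod \<Rightarrow> ('k, 'b) kmod \<Rightarrow> (('a \<times> 'b) \<Rightarrow>\<^sub>0 'k) \<Rightarrow> ('k, 'a, 'b) tens" where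
  "tclass M N F = (\<lambda>G. F + G) ` tensor_sub M N"

definition tensor ::
  "('k::comm_ring_1, 'a) kmod \<Rightarrow> ('k, 'b) kmod \<Rightarrow> ('k, ('k, 'a, 'b) tens) kmod" where
  "tensor M N =
     \<lparr>mcarrier = tclass M N ` {F. Poly_Mapping.keys F \<subseteq> mcarrier M \<times> mcarrier N},
      madd = (\<lambda>X Y. {x + y | x y. x \<in> X \<and> y \<in> Y}),
      mzero = tensor_sub M N,
      msmult = (\<lambda>r X. {fscale r x + g | x g. x \<in> X \<and> g \<in> tensor_sub M N})\<rparr>"

definition tp :: "('k::comm_ring_1, 'a) kmod \<Rightarrow> ('k, 'b) kmod \<Rightarrow> 'a \<Rightarrow> 'b \<Rightarrow> ('k, 'a, 'b) tens" where
  "tp M N a b = tclass M N (fdelta a b)"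

text \<open>The linear map M \<otimes> N \<rightarrow> P induced by a bilinear map f (universal property);
  this is how Sweedler-notation formulas are made precise.\<close>
definition tlift ::
  "('k::comm_ring_1, 'a) kmod \<Rightarrow> ('k, 'b) kmod \<Rightarrow> ('k, 'c) kmod \<Rightarrow> ('a \<Rightarrow> 'b \<Rightarrow> 'c)
     \<Rightarrow> ('k, 'a, 'b) tens \<Rightarrow> 'c" where
  "tlift M N P f X =
     (let F = (SOME F. F \<in> X)
      in msum P (\<lambda>p. msmult P (Poly_Mapping.lookup F p) (f (fst p) (snd p))) (Poly_Mapping.keys F))"

definition tmap ::
  "('k::comm_ring_1, 'a) kmod \<Rightarrow> ('k, 'b) kmod \<Rightarrow> ('k, 'c) kmod \<Rightarrow> ('k, 'd) kmod
     \<Rightarrow> ('a \<Rightarrow> 'c) \<Rightarrow> ('b \<Rightarrow> 'd) \<Rightarrow> ('k, 'a, 'b) tens \<Rightarrow> ('k, 'c, 'd) tens" where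
  "tmap M N M' N' f g = tlift M N (tensor M' N') (\<lambda>a b. tp M' N' (f a) (g b))"

definition tassoc ::
  "('k::comm_ring_1, 'a) kmod \<Rightarrow> ('k, 'b) kmod \<Rightarrow> ('k, 'c) kmod
     \<Rightarrow> ('k, ('k, 'a, 'b) tens, 'c) tens \<Rightarrow> ('k, 'a, ('k, 'b, 'c) tens) tens" where
  "tassoc M N P = tlift (tensor M N) P (tensor M (tensor N P))
     (\<lambda>u z. tlift M N (tensor M (tensor N P)) (\<lambda>x y. tp M (tensor N P) x (tp N P y z)) u)"

definition coalgebra ::
  "('k::comm_ring_1, 'a) kmod \<Rightarrow> ('a \<Rightarrow> ('k, 'a, 'a) tens) \<Rightarrow> ('a \<Rightarrow> 'k) \<Rightarrow> bool" where
  "coalgebra M D e \<longleftrightarrow>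
     kmodule M \<and>
     linear_map M (tensor M M) D \<and>
     linear_map M kself e \<and>
     (\<forall>m\<in>mcarrier M.
        tassoc M M M (tlift M M (tensor (tensor M M) M) (\<lambda>x y. tp (tensor M M) M (D x) y) (D m))
        = tlift M M (tensor M (tensor M M)) (\<lambda>x y. tp M (tensor M M) x (D y)) (D m)) \<and>
     (\<forall>m\<in>mcarrier M. tlift M M M (\<lambda>x y. msmult M (e x) y) (D m) = m) \<and>
     (\<forall>m\<in>mcarrier M. tlift M M M (\<lambda>x y. msmult M (e y) x) (D m) = m)"

definition kalgebra ::
  "('k::comm_ring_1, 'a) kmod \<Rightarrow> ('a \<Rightarrow> 'a \<Rightarrow> 'a) \<Rightarrow> 'a \<Rightarrow> bool" where
  "kalgebra A mult one \<longleftrightarrow>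
     kmodule A \<and> bilinear_map A A A mult \<and> one \<in> mcarrier A \<and>
     (\<forall>x\<in>mcarrier A. \<forall>y\<in>mcarrier A. \<forall>z\<in>mcarrier A.
        mult (mult x y) z = mult x (mult y z)) \<and>
     (\<forall>x\<in>mcarrier A. mult one x = x \<and> mult x one = x)"

definition tensor_mult ::
  "('k::comm_ring_1, 'a) kmod \<Rightarrow> ('a \<Rightarrow> 'a \<Rightarrow> 'a)
     \<Rightarrow> ('k, 'a, 'a) tens \<Rightarrow> ('k, 'a, 'a) tens \<Rightarrow> ('k, 'a, 'a) tens" where
  "tensor_mult A mult X Y =
     tlift A A (tensor A A)
       (\<lambda>a b. tlift A A (tensor A A) (\<lambda>c d. tp A A (mult a c) (mult b d)) Y) X"

definition bialgebra ::
  "('k::comm_ring_1, 'a) kmod \<Rightarrow> ('a \<Rightarrow> 'a \<Rightarrow> 'a) \<Rightarrow> 'a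
     \<Rightarrow> ('a \<Rightarrow> ('k, 'a, 'a) tens) \<Rightarrow> ('a \<Rightarrow> 'k) \<Rightarrow> bool" where
  "bialgebra A mult one D e \<longleftrightarrow>
     kalgebra A mult one \<and> coalgebra A D e \<and>
     (\<forall>x\<in>mcarrier A. \<forall>y\<in>mcarrier A. D (mult x y) = tensor_mult A mult (D x) (D y)) \<and>
     D one = tp A A one one \<and>
     (\<forall>x\<in>mcarrier A. \<forall>y\<in>mcarrier A. e (mult x y) = e x * e y) \<and>
     e one = 1"

definition hopf_algebra ::
  "('k::comm_ring_1, 'a) kmod \<Rightarrow> ('a \<Rightarrow> 'a \<Rightarrow> 'a) \<Rightarrow> 'a
     \<Rightarrow> ('a \<Rightarrow> ('k, 'a, 'a) tens) \<Rightarrow> ('a \<Rightarrow> 'k) \<Rightarrow> ('a \<Rightarrow> 'a) \<Rightarrow> bool" where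
  "hopf_algebra A mult one D e S \<longleftrightarrow>
     bialgebra A mult one D e \<and> linear_map A A S \<and>
     (\<forall>h\<in>mcarrier A. tlift A A A (\<lambda>x y. mult (S x) y) (D h) = msmult A (e h) one) \<and>
     (\<forall>h\<in>mcarrier A. tlift A A A (\<lambda>x y. mult x (S y)) (D h) = msmult A (e h) one)"

definition module_coalgebra ::
  "('k::comm_ring_1, 'h) kmod \<Rightarrow> ('h \<Rightarrow> 'h \<Rightarrow> 'h) \<Rightarrow> 'h
     \<Rightarrow> ('h \<Rightarrow> ('k, 'h, 'h) tens) \<Rightarrow> ('h \<Rightarrow> 'k)
     \<Rightarrow> ('k, 'c) kmod \<Rightarrow> ('c \<Rightarrow> ('k, 'c, 'c) tens) \<Rightarrow> ('c \<Rightarrow> 'k)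
     \<Rightarrow> ('h \<Rightarrow> 'c \<Rightarrow> 'c) \<Rightarrow> bool" where
  "module_coalgebra H mult one D e C DC eC act \<longleftrightarrow>
     coalgebra C DC eC \<and>
     bilinear_map H C C act \<and>
     (\<forall>g\<in>mcarrier H. \<forall>h\<in>mcarrier H. \<forall>c\<in>mcarrier C. act (mult g h) c = act g (act h c)) \<and>
     (\<forall>c\<in>mcarrier C. act one c = c) \<and>
     (\<forall>h\<in>mcarrier H. \<forall>c\<in>mcarrier C.
        DC (act h c) = tlift H H (tensor C C) (\<lambda>h0 h1. tmap C C C C (act h0) (act h1) (DC c)) (D h)) \<and>
     (\<forall>h\<in>mcarrier H. \<forall>c\<in>mcarrier C. eC (act h c) = e h * eC c)"

text \<open>Value on a simple tensor a \<otimes> g, with Sweedler notation made explicit: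
  \<Delta>C a = a0 \<otimes> a1, \<Delta> g = x \<otimes> y, \<Delta> x = x1 \<otimes> x2, \<Delta> y = y1 \<otimes> y2, so that
  \<Delta>^3 g = g0 \<otimes> g1 \<otimes> g2 \<otimes> g3 with g0 = x1, g1 = x2, g2 = y1, g3 = y2.\<close>
definition smash_comult_simple ::
  "('k::comm_ring_1, 'h) kmod \<Rightarrow> ('h \<Rightarrow> 'h \<Rightarrow> 'h) \<Rightarrow> ('h \<Rightarrow> ('k, 'h, 'h) tens) \<Rightarrow> ('h \<Rightarrow> 'h)
     \<Rightarrow> ('k, 'c) kmod \<Rightarrow> ('c \<Rightarrow> ('k, 'c, 'c) tens) \<Rightarrow> ('h \<Rightarrow> 'c \<Rightarrow> 'c)
     \<Rightarrow> 'c \<Rightarrow> 'h \<Rightarrow> ('k, ('k, 'c, 'h) tens, ('k, 'c, 'h) tens) tens" where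
  "smash_comult_simple H mult D S C DC act a g =
     (let P = tensor (tensor C H) (tensor C H);
          Sinv = inv_into (mcarrier H) S
      in tlift C C P (\<lambda>a0 a1.
           tlift H H P (\<lambda>x y.
             tlift H H P (\<lambda>x1 x2.
               tlift H H P (\<lambda>y1 y2.
                 tp (tensor C H) (tensor C H)
                    (tp C H a0 x2)
                    (tp C H (act (Sinv (mult x1 (S y1))) a1) y2))
               (D y))
             (D x))
           (D g))
         (DC a))"

definition smash_comult ::
  "('k::comm_ring_1, 'h) kmod \<Rightarrow> ('h \<Rightarrow> 'h \<Rightarrow> 'h) \<Rightarrow> ('h \<Rightarrow> ('k, 'h, 'h) tens) \<Rightarrow> ('h \<Rightarrow> 'h)
     \<Rightarrow> ('k, 'c) kmod \<Rightarrow> ('c \<Rightarrow> ('k, 'c, 'c) tens) \<Rightarrow> ('h \<Rightarrow> 'c \<Rightarrow> 'c)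
     \<Rightarrow> ('k, 'c, 'h) tens \<Rightarrow> ('k, ('k, 'c, 'h) tens, ('k, 'c, 'h) tens) tens" where
  "smash_comult H mult D S C DC act =
     tlift C H (tensor (tensor C H) (tensor C H)) (smash_comult_simple H mult D S C DC act)"

definition smash_counit ::
  "('k::comm_ring_1, 'h) kmod \<Rightarrow> ('h \<Rightarrow> 'k) \<Rightarrow> ('k, 'c) kmod \<Rightarrow> ('c \<Rightarrow> 'k)
     \<Rightarrow> ('k, 'c, 'h) tens \<Rightarrow> 'k" where
  "smash_counit H e C eC = tlift C H kself (\<lambda>a g. eC a * e g)"

end

theory Submission
  imports Defs
begin

text \<open>Write \<open>S'\<close> for the inverse of the antipode. Since \<open>S'\<close> is an anti-automorphism of
  the algebra \<open>\<H>\<close>, the coefficient in the formula is \<open>S'(g0 S(g2)) = g2 S'(g0)\<close>.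
  The counit laws then follow from those of \<open>C\<close> and \<open>\<H>\<close> together with
  \<open>h1 S'(h0) = \<epsilon>(h)\<close>. For coassociativity both sides are expanded on a simple tensor
  \<open>a \<otimes> g\<close>: the module-coalgebra law \<open>\<Delta>(h\<cdot>c) = h0\<cdot>c0 \<otimes> h1\<cdot>c1\<close>, multiplicativity
  of \<open>\<Delta>\<close> and the anti-comultiplicativity \<open>\<Delta>(S' h) = S' h1 \<otimes> S' h0\<close> turn the right-hand
  side into a sum over the ninefold coproduct \<open>g0, \<dots>, g8\<close> of \<open>g\<close> containing the factor
  \<open>S'(g5) g4\<close>; contracting it to \<open>\<epsilon>\<close> and regrouping by coassociativity gives the
  left-hand side.\<close>

context
  fixes M :: "('k::comm_ring_1, 'a) kmod"
  assumes km: "kmodule M"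
begin

lemma kmodule_zero_closed[simp]: "mzero M \<in> mcarrier M"
  using km unfolding kmodule_def by meson

lemma kmodule_add_closed[simp]: "x \<in> mcarrier M \<Longrightarrow> y \<in> mcarrier M \<Longrightarrow> madd M x y \<in> mcarrier M"
  using km unfolding kmodule_def by meson

lemma kmodule_smult_closed[simp]: "x \<in> mcarrier M \<Longrightarrow> msmult M r x \<in> mcarrier M"
  using km unfolding kmodule_def by meson

lemma kmodule_add_assoc: "x \<in> mcarrier M \<Longrightarrow> y \<in> mcarrier M \<Longrightarrow> z \<in> mcarrier M \<Longrightarrow>
   madd M (madd M x y) z = madd M x (madd M y z)"
  using km unfolding kmodule_def by meson

lemma kmodule_add_commute: "x \<in> mcarrier M \<Longrightarrow> y \<in> mcarrier M \<Longrightarrow> madd M x y = madd M y x"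
  using km unfolding kmodule_def by meson

lemma kmodule_add_zero_left[simp]: "x \<in> mcarrier M \<Longrightarrow> madd M (mzero M) x = x"
  using km unfolding kmodule_def by meson

lemma kmodule_add_zero_right[simp]: "x \<in> mcarrier M \<Longrightarrow> madd M x (mzero M) = x"
  using kmodule_add_zero_left kmodule_add_commute kmodule_zero_closed by metis

lemma kmodule_add_inverse: "x \<in> mcarrier M \<Longrightarrow> \<exists>y\<in>mcarrier M. madd M x y = mzero M"
  using km unfolding kmodule_def by meson

lemma kmodule_smult_add_right: "x \<in> mcarrier M \<Longrightarrow> y \<in> mcarrier M \<Longrightarrow>
   msmult M r (madd M x y) = madd M (msmult M r x) (msmult M r y)"
  using km unfolding kmodule_def by meson

lemma kmodule_smult_add_left: "x \<in> mcarrier M \<Longrightarrow> msmult M (r + s) x = madd M (msmult M r x) (msmult M s x)"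
  using km unfolding kmodule_def by meson

lemma kmodule_smult_smult: "x \<in> mcarrier M \<Longrightarrow> msmult M (r * s) x = msmult M r (msmult M s x)"
  using km unfolding kmodule_def by meson

lemma kmodule_smult_one[simp]: "x \<in> mcarrier M \<Longrightarrow> msmult M 1 x = x"
  using km unfolding kmodule_def by meson

lemma kmodule_add_left_commute: "x \<in> mcarrier M \<Longrightarrow> y \<in> mcarrier M \<Longrightarrow> z \<in> mcarrier M \<Longrightarrow>
   madd M x (madd M y z) = madd M y (madd M x z)"
  by (metis kmodule_add_assoc kmodule_add_commute)

lemma kmodule_add_left_cancel:
  assumes "x \<in> mcarrier M" "y \<in> mcarrier M" "z \<in> mcarrier M" "madd M x y = madd M x z"
  shows "y = z"
proof -
  obtain w where w: "w \<in> mcarrier M" "madd M x w = mzero M" using kmodule_add_inverse assms by blast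
  have wx: "madd M w x = mzero M" using w assms kmodule_add_commute by metis
  have "madd M w (madd M x y) = madd M w (madd M x z)" using assms by simp
  then have "madd M (madd M w x) y = madd M (madd M w x) z" using w assms by (simp add: kmodule_add_assoc)
  then show ?thesis using wx assms by simp
qed

lemma kmodule_zero_unique:
  assumes "x \<in> mcarrier M" "y \<in> mcarrier M" "madd M x y = x" shows "y = mzero M"
  using kmodule_add_left_cancel[of x y "mzero M"] assms by simp

lemma kmodule_smult_zero_left[simp]: "x \<in> mcarrier M \<Longrightarrow> msmult M 0 x = mzero M"
proof -
  assume x: "x \<in> mcarrier M"
  have "msmult M (0 + 0) x = madd M (msmult M 0 x) (msmult M 0 x)" by (rule kmodule_smult_add_left[OF x])
  then have "madd M (msmult M 0 x) (msmult M 0 x) = msmult M 0 x" by simp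
  then show ?thesis using kmodule_zero_unique x kmodule_smult_closed by blast
qed

lemma kmodule_smult_zero_right[simp]: "msmult M r (mzero M) = mzero M"
proof -
  have "msmult M r (madd M (mzero M) (mzero M)) = madd M (msmult M r (mzero M)) (msmult M r (mzero M))"
    by (rule kmodule_smult_add_right) simp_all
  then have "madd M (msmult M r (mzero M)) (msmult M r (mzero M)) = msmult M r (mzero M)" by simp
  then show ?thesis using kmodule_zero_unique kmodule_smult_closed kmodule_zero_closed by blast
qed

lemma kmodule_smult_commute: "x \<in> mcarrier M \<Longrightarrow> msmult M r (msmult M s x) = msmult M s (msmult M r x)"
  by (metis kmodule_smult_smult mult.commute)

end

context
  fixes M :: "('k::comm_ring_1, 'a) kmod"
  assumes km: "kmodule M"
begin

text \<open>\<open>madd M\<close> commutes only on the carrier, so \<open>msum\<close> is compared with the fold of a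
  step function that does nothing outside the carrier and is therefore left-commutative.\<close>

private definition gstep where
  "gstep f i acc = (if acc \<in> mcarrier M then madd M (f i) acc else acc)"

private lemma fold_graph_madd_imp_gstep:
  assumes "fold_graph (\<lambda>i acc. madd M (f i) acc) z A y" "z \<in> mcarrier M" "f ` A \<subseteq> mcarrier M"
  shows "y \<in> mcarrier M \<and> fold_graph (gstep f) z A y"
  using assms
proof (induction rule: fold_graph.induct)
  case emptyI
  then show ?case by (auto intro: fold_graph.intros)
next
  case (insertI x A y)
  then have y: "y \<in> mcarrier M" "fold_graph (gstep f) z A y" by auto
  have "fold_graph (gstep f) z (insert x A) (gstep f x y)"
    by (rule fold_graph.insertI) (use insertI y in auto)
  moreover have "gstep f x y = madd M (f x) y" using y by (simp add: gstep_def)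
  ultimately show ?case using insertI km y by auto
qed

private lemma fold_graph_gstep_imp_madd:
  assumes "fold_graph (gstep f) z A y" "z \<in> mcarrier M" "f ` A \<subseteq> mcarrier M"
  shows "y \<in> mcarrier M \<and> fold_graph (\<lambda>i acc. madd M (f i) acc) z A y"
  using assms
proof (induction rule: fold_graph.induct)
  case emptyI
  then show ?case by (auto intro: fold_graph.intros)
next
  case (insertI x A y)
  then have y: "y \<in> mcarrier M" "fold_graph (\<lambda>i acc. madd M (f i) acc) z A y" by auto
  have "fold_graph (\<lambda>i acc. madd M (f i) acc) z (insert x A) (madd M (f x) y)"
    by (rule fold_graph.insertI[where f="\<lambda>i acc. madd M (f i) acc", simplified]) (use insertI y in auto)
  moreover have "gstep f x y = madd M (f x) y" using y by (simp add: gstep_def)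
  ultimately show ?case using insertI km y by auto
qed

private lemma msum_gstep:
  assumes "f ` A \<subseteq> mcarrier M"
  shows "msum M f A = Finite_Set.fold (gstep f) (mzero M) A"
proof -
  have "\<And>y. fold_graph (\<lambda>i acc. madd M (f i) acc) (mzero M) A y = fold_graph (gstep f) (mzero M) A y"
  proof -
    fix y
    show "fold_graph (\<lambda>i acc. madd M (f i) acc) (mzero M) A y = fold_graph (gstep f) (mzero M) A y"
      using fold_graph_madd_imp_gstep[of f "mzero M" A y] fold_graph_gstep_imp_madd[of f "mzero M" A y] assms km
      by (auto simp del: kmodule_zero_closed simp add: kmodule_zero_closed[OF km])
  qed
  then have "fold_graph (\<lambda>i acc. madd M (f i) acc) (mzero M) A = fold_graph (gstep f) (mzero M) A"
    by (intro ext)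
  then show ?thesis unfolding msum_def Finite_Set.fold_def by simp
qed

private lemma gstep_in: "acc \<in> mcarrier M \<Longrightarrow> gstep f i acc = madd M (f i) acc"
  by (simp add: gstep_def)

private lemma gstep_commute: "comp_fun_commute_on {i. f i \<in> mcarrier M} (gstep f)"
proof
  fix x y assume xy: "x \<in> {i. f i \<in> mcarrier M}" "y \<in> {i. f i \<in> mcarrier M}"
  show "gstep f y \<circ> gstep f x = gstep f x \<circ> gstep f y"
  proof (rule ext)
    fix acc show "(gstep f y \<circ> gstep f x) acc = (gstep f x \<circ> gstep f y) acc"
      using km xy by (cases "acc \<in> mcarrier M") (simp_all add: gstep_def kmodule_add_left_commute[OF km])
  qed
qed

lemma msum_empty[simp]: "msum M f {} = mzero M"
  by (simp add: msum_def)

lemmas kmodule_simps[simp] = kmodule_zero_closed[OF km] kmodule_add_closed[OF km] kmodule_smult_closed[OF km] kmodule_add_zero_left[OF km] kmodule_add_zero_right[OF km]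
  kmodule_smult_one[OF km] kmodule_smult_zero_left[OF km] kmodule_smult_zero_right[OF km]

private lemma fold_gstep_insert:
  assumes "finite A" "i \<notin> A" "f i \<in> mcarrier M" "f ` A \<subseteq> mcarrier M"
  shows "Finite_Set.fold (gstep f) z (insert i A) = gstep f i (Finite_Set.fold (gstep f) z A)"
  by (rule comp_fun_commute_on.fold_insert[OF gstep_commute]) (use assms in auto)

private lemma msum_closed_aux:
  "finite A \<Longrightarrow> f ` A \<subseteq> mcarrier M \<Longrightarrow> Finite_Set.fold (gstep f) (mzero M) A \<in> mcarrier M"
proof (induction A rule: finite_induct)
  case empty then show ?case using km by simp
next
  case (insert x F)
  then show ?case
    using fold_gstep_insert[of F x f "mzero M"] km
    by (auto simp: gstep_in)
qed

lemma msum_closed[simp]: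
  assumes "\<And>i. i \<in> A \<Longrightarrow> f i \<in> mcarrier M"
  shows "msum M f A \<in> mcarrier M"
proof (cases "finite A")
  case True
  then show ?thesis using assms msum_closed_aux[of A f] msum_gstep[of f A] by (simp add: image_subset_iff)
qed (simp add: msum_def)

lemma msum_insert:
  assumes "finite A" "i \<notin> A" "f i \<in> mcarrier M" "\<And>j. j \<in> A \<Longrightarrow> f j \<in> mcarrier M"
  shows "msum M f (insert i A) = madd M (f i) (msum M f A)"
proof -
  have "msum M f (insert i A) = gstep f i (Finite_Set.fold (gstep f) (mzero M) A)"
    using msum_gstep[of f "insert i A"] assms
      fold_gstep_insert[of A i f "mzero M"] by (auto simp: image_subset_iff)
  also have "\<dots> = madd M (f i) (msum M f A)"
    using msum_closed_aux[of A f] assms msum_gstep[of f A] by (simp add: gstep_in image_subset_iff)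
  finally show ?thesis .
qed

lemma msum_infinite: "infinite A \<Longrightarrow> msum M f A = mzero M"
  by (simp add: msum_def)

lemma msum_cong:
  assumes "\<And>i. i \<in> A \<Longrightarrow> f i = g i" "\<And>i. i \<in> A \<Longrightarrow> f i \<in> mcarrier M"
  shows "msum M f A = msum M g A"
proof (cases "finite A")
  case True
  then show ?thesis using assms
  proof (induction A rule: finite_induct)
    case (insert x F)
    have "msum M f (insert x F) = madd M (f x) (msum M f F)"
      using insert by (intro msum_insert) auto
    also have "\<dots> = madd M (g x) (msum M g F)" using insert by auto
    also have "\<dots> = msum M g (insert x F)"
      using insert by (intro msum_insert[symmetric]) auto
    finally show ?case .
  qed simp
qed (simp add: msum_infinite)

lemma msum_single[simp]: "f i \<in> mcarrier M \<Longrightarrow> msum M f {i} = f i"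
  using msum_insert[of "{}" i f] km by simp

lemma msum_add:
  assumes "\<And>i. i \<in> A \<Longrightarrow> f i \<in> mcarrier M" "\<And>i. i \<in> A \<Longrightarrow> g i \<in> mcarrier M"
  shows "msum M (\<lambda>i. madd M (f i) (g i)) A = madd M (msum M f A) (msum M g A)"
proof (cases "finite A")
  case True
  then show ?thesis using assms
  proof (induction A rule: finite_induct)
    case (insert x F)
    have c: "msum M f F \<in> mcarrier M" "msum M g F \<in> mcarrier M" "f x \<in> mcarrier M" "g x \<in> mcarrier M"
      using insert by auto
    have "msum M (\<lambda>i. madd M (f i) (g i)) (insert x F) = madd M (madd M (f x) (g x)) (msum M (\<lambda>i. madd M (f i) (g i)) F)"
      using insert by (intro msum_insert) auto
    also have "\<dots> = madd M (madd M (f x) (g x)) (madd M (msum M f F) (msum M g F))"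
      using insert by auto
    also have "\<dots> = madd M (madd M (f x) (msum M f F)) (madd M (g x) (msum M g F))"
      using c by (simp add: kmodule_add_assoc[OF km] kmodule_add_left_commute[OF km])
    also have "\<dots> = madd M (msum M f (insert x F)) (msum M g (insert x F))"
      using insert by (simp add: msum_insert)
    finally show ?case .
  qed simp
qed (simp add: msum_infinite)

lemma msum_smult:
  assumes "\<And>i. i \<in> A \<Longrightarrow> f i \<in> mcarrier M"
  shows "msmult M r (msum M f A) = msum M (\<lambda>i. msmult M r (f i)) A"
proof (cases "finite A")
  case True
  then show ?thesis using assms
  proof (induction A rule: finite_induct)
    case (insert x F)
    then show ?case by (simp add: msum_insert kmodule_smult_add_right[OF km])
  qed simp
qed (simp add: msum_infinite)

lemma msum_zero[simp]: "msum M (\<lambda>i. mzero M) A = mzero M"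
proof (cases "finite A")
  case True
  then show ?thesis
  proof (induction A rule: finite_induct)
    case (insert x F)
    then show ?case by (simp add: msum_insert)
  qed simp
qed (simp add: msum_infinite)

lemma msum_neutral:
  assumes "finite B" "A \<subseteq> B" "\<And>i. i \<in> B - A \<Longrightarrow> f i = mzero M" "\<And>i. i \<in> A \<Longrightarrow> f i \<in> mcarrier M"
  shows "msum M f B = msum M f A"
proof -
  have fin: "finite (B - A)" using assms by auto
  have fA: "finite A" using assms finite_subset by blast
  have "\<And>C. C \<subseteq> B - A \<Longrightarrow> msum M f (A \<union> C) = msum M f A"
  proof -
    fix C assume C: "C \<subseteq> B - A"
    have "finite C" using C fin finite_subset by blast
    then show "msum M f (A \<union> C) = msum M f A" using C
    proof (induction C rule: finite_induct)
      case (insert x F)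
      have "msum M f (A \<union> insert x F) = msum M f (insert x (A \<union> F))" by simp
      also have "\<dots> = madd M (f x) (msum M f (A \<union> F))"
        using insert assms fA by (intro msum_insert) auto
      also have "\<dots> = msum M f A" using insert assms by auto
      finally show ?case .
    qed simp
  qed
  from this[of "B - A"] show ?thesis using assms by (simp add: Un_absorb1[OF assms(2)])
qed

end

lemma msum_swap:
  assumes km: "kmodule M" and "finite A" "finite B" "\<And>i j. i \<in> A \<Longrightarrow> j \<in> B \<Longrightarrow> f i j \<in> mcarrier M"
  shows "msum M (\<lambda>i. msum M (\<lambda>j. f i j) B) A = msum M (\<lambda>j. msum M (\<lambda>i. f i j) A) B"
  using assms(2,4)
proof (induction A rule: finite_induct)
  case empty then show ?case using km by simp
next
  case (insert x F)
  have "msum M (\<lambda>i. msum M (f i) B) (insert x F) = madd M (msum M (f x) B) (msum M (\<lambda>i. msum M (f i) B) F)"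
    using insert km by (intro msum_insert) auto
  also have "\<dots> = madd M (msum M (f x) B) (msum M (\<lambda>j. msum M (\<lambda>i. f i j) F) B)"
    using insert by simp
  also have "\<dots> = msum M (\<lambda>j. madd M (f x j) (msum M (\<lambda>i. f i j) F)) B"
    using insert km by (subst msum_add) auto
  also have "\<dots> = msum M (\<lambda>j. msum M (\<lambda>i. f i j) (insert x F)) B"
    using insert km by (intro msum_cong) (auto simp: msum_insert)
  finally show ?case .
qed

lemma linear_mapD:
  "linear_map M N f \<Longrightarrow> x \<in> mcarrier M \<Longrightarrow> f x \<in> mcarrier N"
  "linear_map M N f \<Longrightarrow> x \<in> mcarrier M \<Longrightarrow> y \<in> mcarrier M \<Longrightarrow> f (madd M x y) = madd N (f x) (f y)"
  "linear_map M N f \<Longrightarrow> x \<in> mcarrier M \<Longrightarrow> f (msmult M r x) = msmult N r (f x)"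
  unfolding linear_map_def by blast+

lemma linear_map_zero:
  assumes "kmodule M" "kmodule N" "linear_map M N f"
  shows "f (mzero M) = mzero N"
proof -
  have "f (msmult M 0 (mzero M)) = msmult N 0 (f (mzero M))"
    using assms linear_mapD by (metis kmodule_zero_closed)
  then show ?thesis using assms by (simp add: linear_mapD)
qed

lemma msum_linear:
  assumes "kmodule M" "kmodule N" "linear_map M N L" "\<And>i. i \<in> A \<Longrightarrow> f i \<in> mcarrier M"
  shows "L (msum M f A) = msum N (\<lambda>i. L (f i)) A"
proof (cases "finite A")
  case True
  then show ?thesis using assms(4)
  proof (induction A rule: finite_induct)
    case empty then show ?case using assms linear_map_zero by simp
  next
    case (insert x F)
    then show ?case using assms
      by (simp add: msum_insert linear_mapD)
  qed
qed (simp add: msum_infinite assms linear_map_zero)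

lemma linear_mapI:
  assumes "\<And>x. x \<in> mcarrier M \<Longrightarrow> f x \<in> mcarrier N"
    "\<And>x y. x \<in> mcarrier M \<Longrightarrow> y \<in> mcarrier M \<Longrightarrow> f (madd M x y) = madd N (f x) (f y)"
    "\<And>r x. x \<in> mcarrier M \<Longrightarrow> f (msmult M r x) = msmult N r (f x)"
  shows "linear_map M N f"
  using assms unfolding linear_map_def by blast

lemma bilinear_mapI:
  assumes "\<And>a. a \<in> mcarrier M \<Longrightarrow> linear_map N P (\<lambda>b. f a b)"
    "\<And>b. b \<in> mcarrier N \<Longrightarrow> linear_map M P (\<lambda>a. f a b)"
  shows "bilinear_map M N P f"
  using assms unfolding bilinear_map_def by blast

lemma bilinear_mapD:
  assumes "bilinear_map M N P f"
  shows "a \<in> mcarrier M \<Longrightarrow> b \<in> mcarrier N \<Longrightarrow> f a b \<in> mcarrier P"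
    and "a \<in> mcarrier M \<Longrightarrow> a' \<in> mcarrier M \<Longrightarrow> b \<in> mcarrier N \<Longrightarrow> f (madd M a a') b = madd P (f a b) (f a' b)"
    and "a \<in> mcarrier M \<Longrightarrow> b \<in> mcarrier N \<Longrightarrow> b' \<in> mcarrier N \<Longrightarrow> f a (madd N b b') = madd P (f a b) (f a b')"
    and "a \<in> mcarrier M \<Longrightarrow> b \<in> mcarrier N \<Longrightarrow> f (msmult M r a) b = msmult P r (f a b)"
    and "a \<in> mcarrier M \<Longrightarrow> b \<in> mcarrier N \<Longrightarrow> f a (msmult N r b) = msmult P r (f a b)"
  using assms unfolding bilinear_map_def linear_map_def by auto

lemma bilinear_map_linear_left: "bilinear_map M N P f \<Longrightarrow> b \<in> mcarrier N \<Longrightarrow> linear_map M P (\<lambda>a. f a b)"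
  unfolding bilinear_map_def by blast

lemma bilinear_map_linear_right: "bilinear_map M N P f \<Longrightarrow> a \<in> mcarrier M \<Longrightarrow> linear_map N P (\<lambda>b. f a b)"
  unfolding bilinear_map_def by blast

lemma linear_map_id: "linear_map M M (\<lambda>x. x)"
  unfolding linear_map_def by blast

lemma linear_map_comp:
  assumes "linear_map N P L" "linear_map Q N g"
  shows "linear_map Q P (\<lambda>x. L (g x))"
  using assms unfolding linear_map_def by auto

lemma linear_bilinear_left:
  assumes "bilinear_map M N P f" "linear_map Q M g" "b \<in> mcarrier N"
  shows "linear_map Q P (\<lambda>x. f (g x) b)"
  using linear_map_comp[OF bilinear_map_linear_left[OF assms(1,3)] assms(2)] .

lemma linear_bilinear_right:
  assumes "bilinear_map M N P f" "a \<in> mcarrier M" "linear_map Q N g"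
  shows "linear_map Q P (\<lambda>x. f a (g x))"
  using linear_map_comp[OF bilinear_map_linear_right[OF assms(1,2)] assms(3)] .

definition trilinear_map ::
  "('k, 'a) kmod \<Rightarrow> ('k, 'b) kmod \<Rightarrow> ('k, 'c) kmod \<Rightarrow> ('k, 'd) kmod \<Rightarrow> ('a \<Rightarrow> 'b \<Rightarrow> 'c \<Rightarrow> 'd) \<Rightarrow> bool"
  where
  "trilinear_map M N Q P f \<longleftrightarrow>
     (\<forall>y\<in>mcarrier N. \<forall>z\<in>mcarrier Q. linear_map M P (\<lambda>x. f x y z)) \<and>
     (\<forall>x\<in>mcarrier M. \<forall>z\<in>mcarrier Q. linear_map N P (\<lambda>y. f x y z)) \<and>
     (\<forall>x\<in>mcarrier M. \<forall>y\<in>mcarrier N. linear_map Q P (\<lambda>z. f x y z))"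

lemma trilinear_mapI:
  assumes "\<And>y z. y \<in> mcarrier N \<Longrightarrow> z \<in> mcarrier Q \<Longrightarrow> linear_map M P (\<lambda>x. f x y z)"
    and "\<And>x z. x \<in> mcarrier M \<Longrightarrow> z \<in> mcarrier Q \<Longrightarrow> linear_map N P (\<lambda>y. f x y z)"
    and "\<And>x y. x \<in> mcarrier M \<Longrightarrow> y \<in> mcarrier N \<Longrightarrow> linear_map Q P (\<lambda>z. f x y z)"
  shows "trilinear_map M N Q P f"
  using assms unfolding trilinear_map_def by blast

lemma trilinear_map_bilinear:
  "trilinear_map M N Q P f \<Longrightarrow> x \<in> mcarrier M \<Longrightarrow> bilinear_map N Q P (f x)"
  unfolding trilinear_map_def bilinear_map_def by blast

lemma trilinear_map_linear_left:
  "trilinear_map M N Q P f \<Longrightarrow> y \<in> mcarrier N \<Longrightarrow> z \<in> mcarrier Q \<Longrightarrow> linear_map M P (\<lambda>x. f x y z)"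
  unfolding trilinear_map_def by blast

lemma kself_simps[simp]:
  "mcarrier kself = UNIV" "madd kself = (+)" "mzero kself = 0" "msmult kself = (*)"
  by (simp_all add: kself_def)

lemma kmodule_kself[simp]: "kmodule (kself :: ('k::comm_ring_1, 'k) kmod)"
  by (simp add: kmodule_def algebra_simps) (metis add.right_inverse)

lemma linear_smult_right:
  assumes "kmodule P" "linear_map Q P g"
  shows "linear_map Q P (\<lambda>x. msmult P r (g x))"
  using assms by (intro linear_mapI) (auto simp: linear_mapD kmodule_smult_add_right kmodule_smult_commute)

lemma linear_smult_left:
  assumes "kmodule P" "linear_map Q kself \<phi>" "v \<in> mcarrier P"
  shows "linear_map Q P (\<lambda>x. msmult P (\<phi> x) v)"
  using assms by (intro linear_mapI) (auto simp: linear_mapD kmodule_smult_add_left kmodule_smult_smult)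

lemma linear_kmult_right:
  assumes "linear_map Q kself \<phi>"
  shows "linear_map Q kself (\<lambda>x. c * \<phi> x)"
  using assms by (intro linear_mapI) (auto simp: linear_mapD algebra_simps)

lemma linear_kmult_left:
  assumes "linear_map Q kself \<phi>"
  shows "linear_map Q kself (\<lambda>x. \<phi> x * c)"
  using assms by (intro linear_mapI) (auto simp: linear_mapD algebra_simps)

section \<open>Tensor products\<close>

lemma lookup_fscale[simp]: "Poly_Mapping.lookup (fscale r F) p = r * Poly_Mapping.lookup F p"
  by (simp add: fscale_def map.rep_eq when_def)

lemma fscale_add: "fscale r (F + G) = fscale r F + fscale r G"
  by (rule poly_mapping_eqI) (simp add: lookup_add distrib_left)

lemma fscale_add_left: "fscale (r + s) F = fscale r F + fscale s F"
  by (rule poly_mapping_eqI) (simp add: lookup_add distrib_right)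

lemma fscale_mult: "fscale (r * s) F = fscale r (fscale s F)"
  by (rule poly_mapping_eqI) (simp add: mult.assoc)

lemma fscale_one[simp]: "fscale 1 F = F"
  by (rule poly_mapping_eqI) simp

lemma fscale_zero_left[simp]: "fscale 0 F = 0"
  by (rule poly_mapping_eqI) simp

lemma fscale_minus_one: "fscale (-1) F = - F"
  by (rule poly_mapping_eqI) simp

lemma fscale_diff: "fscale r (F - G) = fscale r F - fscale r G"
  by (rule poly_mapping_eqI) (simp add: lookup_minus right_diff_distrib)

lemma keys_fscale: "Poly_Mapping.keys (fscale r F) \<subseteq> Poly_Mapping.keys F"
  by (auto simp: in_keys_iff)

lemma fscale_sum: "fscale r (sum G I) = sum (\<lambda>x. fscale r (G x)) I"
  by (rule poly_mapping_eqI) (simp add: lookup_sum sum_distrib_left)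

lemma fspan_zero[simp]: "0 \<in> fspan X"
  unfolding fspan_def by (rule CollectI, rule exI[of _ "{}"]) auto

lemma fspan_base: "x \<in> X \<Longrightarrow> x \<in> fspan X"
  unfolding fspan_def
  by (rule CollectI, rule exI[of _ "{x}"], rule exI[of _ "\<lambda>_. 1"]) auto

lemma fspan_add:
  assumes "F \<in> fspan X" "G \<in> fspan X" shows "F + G \<in> fspan X"
proof -
  obtain I c where I: "F = (\<Sum>x\<in>I. fscale (c x) x)" "finite I" "I \<subseteq> X"
    using assms(1) unfolding fspan_def by blast
  obtain J d where J: "G = (\<Sum>x\<in>J. fscale (d x) x)" "finite J" "J \<subseteq> X"
    using assms(2) unfolding fspan_def by blast
  define c' where "c' x = (if x \<in> I then c x else 0)" for x
  define d' where "d' x = (if x \<in> J then d x else 0)" for x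
  have "F = (\<Sum>x\<in>I \<union> J. fscale (c' x) x)"
    unfolding I(1) using I J by (intro sum.mono_neutral_cong_left) (auto simp: c'_def)
  moreover have "G = (\<Sum>x\<in>I \<union> J. fscale (d' x) x)"
    unfolding J(1) using I J by (intro sum.mono_neutral_cong_left) (auto simp: d'_def)
  ultimately have "F + G = (\<Sum>x\<in>I \<union> J. fscale (c' x + d' x) x)"
    by (simp add: fscale_add_left sum.distrib)
  then show ?thesis unfolding fspan_def using I J
    by (intro CollectI exI[of _ "I \<union> J"] exI[of _ "\<lambda>x. c' x + d' x"]) simp
qed

lemma fspan_scale:
  assumes "F \<in> fspan X" shows "fscale r F \<in> fspan X"
proof -
  obtain I c where I: "F = (\<Sum>x\<in>I. fscale (c x) x)" "finite I" "I \<subseteq> X"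
    using assms(1) unfolding fspan_def by blast
  have "fscale r F = (\<Sum>x\<in>I. fscale (r * c x) x)"
    unfolding I(1) by (simp add: fscale_sum fscale_mult)
  then show ?thesis unfolding fspan_def using I
    by (intro CollectI exI[of _ "I"] exI[of _ "\<lambda>x. r * c x"]) simp
qed

lemma fspan_uminus: "F \<in> fspan X \<Longrightarrow> - F \<in> fspan X"
  using fspan_scale[of F X "-1"] by (simp add: fscale_minus_one)

lemma fspan_diff: "F \<in> fspan X \<Longrightarrow> G \<in> fspan X \<Longrightarrow> F - G \<in> fspan X"
  using fspan_add[of F X "- G"] fspan_uminus[of G X] by simp

lemma fspan_induct[consumes 1, case_names zero step]:
  assumes "F \<in> fspan X" "P 0"
    "\<And>x r G. x \<in> X \<Longrightarrow> G \<in> fspan X \<Longrightarrow> P G \<Longrightarrow> P (fscale r x + G)"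
  shows "P F"
proof -
  obtain I c where I: "F = (\<Sum>x\<in>I. fscale (c x) x)" "finite I" "I \<subseteq> X"
    using assms(1) unfolding fspan_def by blast
  have "(\<Sum>x\<in>I. fscale (c x) x) \<in> fspan X \<and> P (\<Sum>x\<in>I. fscale (c x) x)"
    using I(2,3)
  proof (induction I rule: finite_induct)
    case empty then show ?case using assms by simp
  next
    case (insert x F)
    then show ?case using assms(3)[of x "\<Sum>x\<in>F. fscale (c x) x" "c x"]
      by (auto intro: fspan_add fspan_scale fspan_base)
  qed
  then show ?thesis using I by simp
qed

lemma keys_fspan: "F \<in> fspan X \<Longrightarrow> (\<And>x. x \<in> X \<Longrightarrow> Poly_Mapping.keys x \<subseteq> K) \<Longrightarrow> Poly_Mapping.keys F \<subseteq> K"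
proof (induction rule: fspan_induct)
  case zero then show ?case by simp
next
  case (step x r G)
  then show ?case using keys_add[of "fscale r x" G] keys_fscale[of r x] by blast
qed

lemma keys_fdelta: "Poly_Mapping.keys (fdelta a b :: ('a \<times> 'b) \<Rightarrow>\<^sub>0 'k::comm_ring_1) \<subseteq> {(a, b)}"
  by (simp add: fdelta_def)

lemma keys_diff_sub: "Poly_Mapping.keys F \<subseteq> K \<Longrightarrow> Poly_Mapping.keys G \<subseteq> K \<Longrightarrow> Poly_Mapping.keys (F - G) \<subseteq> K"
  using keys_diff[of F G] by blast

lemma keys_add_sub: "Poly_Mapping.keys F \<subseteq> K \<Longrightarrow> Poly_Mapping.keys G \<subseteq> K \<Longrightarrow> Poly_Mapping.keys (F + G) \<subseteq> K"
  using keys_add[of F G] by blast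

lemma keys_fscale_sub: "Poly_Mapping.keys F \<subseteq> K \<Longrightarrow> Poly_Mapping.keys (fscale r F) \<subseteq> K"
  using keys_fscale[of r F] by blast

lemma keys_fdelta_sub: "a \<in> A \<Longrightarrow> b \<in> B \<Longrightarrow> Poly_Mapping.keys (fdelta a b :: _ \<Rightarrow>\<^sub>0 'k::comm_ring_1) \<subseteq> A \<times> B"
  using keys_fdelta[of a b] by blast

lemma keys_tensor_rels:
  assumes "kmodule M" "kmodule N" "x \<in> tensor_rels M N"
  shows "Poly_Mapping.keys x \<subseteq> mcarrier M \<times> mcarrier N"
  using assms(3) unfolding tensor_rels_def
  by (elim UnE CollectE exE conjE; hypsubst; intro keys_diff_sub keys_fdelta_sub keys_fscale_sub)
    (simp_all add: assms(1,2))

lemma keys_tensor_sub: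
  fixes M :: "('k::comm_ring_1, 'a) kmod"
  assumes "kmodule M" "kmodule N" "x \<in> tensor_sub M N"
  shows "Poly_Mapping.keys x \<subseteq> mcarrier M \<times> mcarrier N"
  using assms(3) unfolding tensor_sub_def
  by (rule keys_fspan) (rule keys_tensor_rels[OF assms(1,2)])

lemma tensor_sub_zero[simp]: "0 \<in> tensor_sub M N"
  by (simp add: tensor_sub_def)

lemma tensor_sub_add: "F \<in> tensor_sub M N \<Longrightarrow> G \<in> tensor_sub M N \<Longrightarrow> F + G \<in> tensor_sub M N"
  by (simp add: tensor_sub_def fspan_add)

lemma tensor_sub_diff: "F \<in> tensor_sub M N \<Longrightarrow> G \<in> tensor_sub M N \<Longrightarrow> F - G \<in> tensor_sub M N"
  by (simp add: tensor_sub_def fspan_diff)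

lemma tensor_sub_fscale: "F \<in> tensor_sub M N \<Longrightarrow> fscale r F \<in> tensor_sub M N"
  by (simp add: tensor_sub_def fspan_scale)

lemma tensor_sub_rel: "F \<in> tensor_rels M N \<Longrightarrow> F \<in> tensor_sub M N"
  by (simp add: tensor_sub_def fspan_base)

lemma mem_tclass: "H \<in> tclass M N F \<longleftrightarrow> H - F \<in> tensor_sub M N"
  unfolding tclass_def
proof
  assume "H \<in> (+) F ` tensor_sub M N" then show "H - F \<in> tensor_sub M N" by auto
next
  assume "H - F \<in> tensor_sub M N"
  then show "H \<in> (+) F ` tensor_sub M N" by (intro image_eqI[of _ _ "H - F"]) auto
qed

lemma tclass_self[simp]: "F \<in> tclass M N F"
  by (simp add: mem_tclass)

lemma tclass_eq_iff: "tclass M N F = tclass M N G \<longleftrightarrow> F - G \<in> tensor_sub M N"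
proof
  assume "tclass M N F = tclass M N G"
  then have "F \<in> tclass M N G" using tclass_self by metis
  then show "F - G \<in> tensor_sub M N" by (simp add: mem_tclass)
next
  assume a: "F - G \<in> tensor_sub M N"
  have "H \<in> tclass M N F \<longleftrightarrow> H \<in> tclass M N G" for H
  proof -
    have "H - G = (H - F) + (F - G)" "H - F = (H - G) - (F - G)" by simp_all
    then show ?thesis using a tensor_sub_add tensor_sub_diff unfolding mem_tclass by metis
  qed
  then show "tclass M N F = tclass M N G" by blast
qed

lemma tclassI: "F - G \<in> tensor_sub M N \<Longrightarrow> tclass M N F = tclass M N G"
  by (simp add: tclass_eq_iff)

lemma tensor_simps:
  "mcarrier (tensor M N) = tclass M N ` {F. Poly_Mapping.keys F \<subseteq> mcarrier M \<times> mcarrier N}"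
  "madd (tensor M N) X Y = {x + y | x y. x \<in> X \<and> y \<in> Y}"
  "mzero (tensor M N) = tensor_sub M N"
  "msmult (tensor M N) r X = {fscale r x + g | x g. x \<in> X \<and> g \<in> tensor_sub M N}"
  by (simp_all add: tensor_def)

lemma tensor_zero_tclass: "mzero (tensor M N) = tclass M N 0"
  unfolding tensor_simps tclass_def by simp

lemma tclass_add: "madd (tensor M N) (tclass M N F) (tclass M N G) = tclass M N (F + G)"
proof -
  have "H \<in> madd (tensor M N) (tclass M N F) (tclass M N G) \<longleftrightarrow> H \<in> tclass M N (F + G)" for H
  proof
    assume "H \<in> madd (tensor M N) (tclass M N F) (tclass M N G)"
    then obtain x y where "H = x + y" "x - F \<in> tensor_sub M N" "y - G \<in> tensor_sub M N"
      by (auto simp: tensor_simps mem_tclass)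
    moreover have "x + y - (F + G) = (x - F) + (y - G)" by simp
    ultimately show "H \<in> tclass M N (F + G)" unfolding mem_tclass by (metis tensor_sub_add)
  next
    assume "H \<in> tclass M N (F + G)"
    then have "H - F - G \<in> tensor_sub M N" by (simp add: mem_tclass diff_diff_eq)
    then have "H - G \<in> tclass M N F" unfolding mem_tclass by (metis diff_right_commute)
    moreover have "H = (H - G) + G" by simp
    ultimately show "H \<in> madd (tensor M N) (tclass M N F) (tclass M N G)"
      unfolding tensor_simps using tclass_self by blast
  qed
  then show ?thesis by blast
qed

lemma tclass_smult: "msmult (tensor M N) r (tclass M N F) = tclass M N (fscale r F)"
proof -
  have "H \<in> msmult (tensor M N) r (tclass M N F) \<longleftrightarrow> H \<in> tclass M N (fscale r F)" for H
  proof
    assume "H \<in> msmult (tensor M N) r (tclass M N F)"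
    then obtain x g where "H = fscale r x + g" "x - F \<in> tensor_sub M N" "g \<in> tensor_sub M N"
      by (auto simp: tensor_simps mem_tclass)
    moreover have "fscale r x + g - fscale r F = fscale r (x - F) + g" by (simp add: fscale_diff)
    ultimately show "H \<in> tclass M N (fscale r F)" unfolding mem_tclass by (metis tensor_sub_add tensor_sub_fscale)
  next
    assume "H \<in> tclass M N (fscale r F)"
    then have "H - fscale r F \<in> tensor_sub M N" by (simp add: mem_tclass)
    moreover have "H = fscale r F + (H - fscale r F)" by simp
    ultimately show "H \<in> msmult (tensor M N) r (tclass M N F)"
      unfolding tensor_simps mem_tclass by (intro CollectI exI[of _ F] exI[of _ "H - fscale r F"]) simp
  qed
  then show ?thesis by blast
qed

lemma tensor_carrier_iff:
  "X \<in> mcarrier (tensor M N) \<longleftrightarrow> (\<exists>F. Poly_Mapping.keys F \<subseteq> mcarrier M \<times> mcarrier N \<and> X = tclass M N F)"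
  by (auto simp: tensor_simps)

lemma tclass_in_carrier[intro]:
  "Poly_Mapping.keys F \<subseteq> mcarrier M \<times> mcarrier N \<Longrightarrow> tclass M N F \<in> mcarrier (tensor M N)"
  by (auto simp: tensor_simps)

lemma ball_tensor_carrier:
  "(\<forall>X\<in>mcarrier (tensor M N). P X) \<longleftrightarrow>
     (\<forall>F. Poly_Mapping.keys F \<subseteq> mcarrier M \<times> mcarrier N \<longrightarrow> P (tclass M N F))"
  by (auto simp: tensor_simps)

lemma kmodule_tensor[simp]: "kmodule (tensor M N)"
proof -
  let ?K = "mcarrier M \<times> mcarrier N"
  have inverse: "\<exists>Y\<in>mcarrier (tensor M N). madd (tensor M N) (tclass M N F) Y = tclass M N 0"
    if "Poly_Mapping.keys F \<subseteq> ?K" for F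
    using that by (intro bexI[of _ "tclass M N (- F)"] tclass_in_carrier) (simp_all add: tclass_add)
  show ?thesis unfolding kmodule_def ball_tensor_carrier
    by (auto simp: tclass_add tclass_smult tensor_zero_tclass inverse add_ac fscale_add
        fscale_add_left fscale_mult keys_add_sub keys_fscale_sub tclass_in_carrier)
qed

definition free_lift :: "('k::comm_ring_1, 'p) kmod \<Rightarrow> ('a \<Rightarrow> 'b \<Rightarrow> 'p) \<Rightarrow> ('a \<times> 'b \<Rightarrow>\<^sub>0 'k) \<Rightarrow> 'p" where
  "free_lift P f F = msum P (\<lambda>p. msmult P (Poly_Mapping.lookup F p) (f (fst p) (snd p))) (Poly_Mapping.keys F)"

definition tensor_rep :: "('k, 'a, 'b) tens \<Rightarrow> ('a \<times> 'b \<Rightarrow>\<^sub>0 'k)" where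
  "tensor_rep X = (SOME F. F \<in> X)"

lemma tlift_tensor_rep: "tlift M N P f X = free_lift P f (tensor_rep X)"
  by (simp add: tlift_def free_lift_def tensor_rep_def Let_def)

context
  fixes P :: "('k::comm_ring_1, 'p) kmod" and f :: "'a \<Rightarrow> 'b \<Rightarrow> 'p" and A :: "'a set" and B :: "'b set"
  assumes kp: "kmodule P"
    and free_lift_dom: "\<And>a b. a \<in> A \<Longrightarrow> b \<in> B \<Longrightarrow> f a b \<in> mcarrier P"
begin

lemma free_lift_dom_pair: "p \<in> A \<times> B \<Longrightarrow> f (fst p) (snd p) \<in> mcarrier P"
  using free_lift_dom by (cases p) auto

lemma free_lift_superset:
  assumes "finite K" "Poly_Mapping.keys F \<subseteq> K" "K \<subseteq> A \<times> B"
  shows "free_lift P f F = msum P (\<lambda>p. msmult P (Poly_Mapping.lookup F p) (f (fst p) (snd p))) K"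
proof -
  have "\<And>p. p \<in> Poly_Mapping.keys F \<Longrightarrow> msmult P (Poly_Mapping.lookup F p) (f (fst p) (snd p)) \<in> mcarrier P"
    using assms free_lift_dom_pair kp by (meson kmodule_smult_closed subsetD)
  then show ?thesis
    unfolding free_lift_def using assms free_lift_dom_pair
    by (intro msum_neutral[OF kp, symmetric]) (auto simp: kp in_keys_iff)
qed

lemma free_lift_closed[simp]:
  "Poly_Mapping.keys F \<subseteq> A \<times> B \<Longrightarrow> free_lift P f F \<in> mcarrier P"
  unfolding free_lift_def using free_lift_dom_pair kp by (intro msum_closed) auto

lemma free_lift_add:
  assumes "Poly_Mapping.keys F \<subseteq> A \<times> B" "Poly_Mapping.keys G \<subseteq> A \<times> B"
  shows "free_lift P f (F + G) = madd P (free_lift P f F) (free_lift P f G)"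
proof -
  let ?K = "Poly_Mapping.keys F \<union> Poly_Mapping.keys G"
  have K: "finite ?K" "?K \<subseteq> A \<times> B" using assms by auto
  have "free_lift P f (F + G) = msum P (\<lambda>p. msmult P (Poly_Mapping.lookup (F + G) p) (f (fst p) (snd p))) ?K"
    using K keys_add[of F G] by (intro free_lift_superset) auto
  also have "\<dots> = msum P (\<lambda>p. madd P (msmult P (Poly_Mapping.lookup F p) (f (fst p) (snd p)))
                     (msmult P (Poly_Mapping.lookup G p) (f (fst p) (snd p)))) ?K"
    using K free_lift_dom_pair kp by (intro msum_cong) (auto simp: lookup_add kmodule_smult_add_left)
  also have "\<dots> = madd P (free_lift P f F) (free_lift P f G)"
    using K free_lift_dom_pair kp by (subst msum_add[OF kp]) (auto simp: free_lift_superset[of ?K])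
  finally show ?thesis .
qed

lemma free_lift_fscale:
  assumes "Poly_Mapping.keys F \<subseteq> A \<times> B"
  shows "free_lift P f (fscale r F) = msmult P r (free_lift P f F)"
proof -
  have "free_lift P f (fscale r F) = msum P (\<lambda>p. msmult P (Poly_Mapping.lookup (fscale r F) p) (f (fst p) (snd p))) (Poly_Mapping.keys F)"
    using assms keys_fscale[of r F] by (intro free_lift_superset) auto
  also have "\<dots> = msum P (\<lambda>p. msmult P r (msmult P (Poly_Mapping.lookup F p) (f (fst p) (snd p)))) (Poly_Mapping.keys F)"
    using assms free_lift_dom_pair kp by (intro msum_cong) (auto simp: kmodule_smult_smult)
  also have "\<dots> = msmult P r (free_lift P f F)"
    unfolding free_lift_def using assms free_lift_dom_pair kp by (subst msum_smult[OF kp]) auto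
  finally show ?thesis .
qed

lemma free_lift_fdelta:
  assumes "a \<in> A" "b \<in> B"
  shows "free_lift P f (fdelta a b) = f a b"
proof -
  have "free_lift P f (fdelta a b) = msum P (\<lambda>p. msmult P (Poly_Mapping.lookup (fdelta a b) p) (f (fst p) (snd p))) {(a, b)}"
    using assms by (intro free_lift_superset) (auto simp: fdelta_def)
  then show ?thesis using assms free_lift_dom kp by (simp add: fdelta_def)
qed

lemma free_lift_diff_eq_zero:
  assumes F: "Poly_Mapping.keys F \<subseteq> A \<times> B" and G: "Poly_Mapping.keys G \<subseteq> A \<times> B"
    and eq: "free_lift P f F = free_lift P f G"
  shows "free_lift P f (F - G) = mzero P"
proof -
  have FG: "Poly_Mapping.keys (F - G) \<subseteq> A \<times> B" using F G by (rule keys_diff_sub)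
  have "madd P (free_lift P f G) (free_lift P f (F - G)) = free_lift P f G"
    using free_lift_add[OF FG G] eq kmodule_add_commute[OF kp] FG G by simp
  then show ?thesis
    by (rule kmodule_zero_unique[OF kp, rotated 2]) (simp_all add: FG G)
qed

end

lemma free_lift_tensor_rels:
  fixes M :: "('k::comm_ring_1, 'a) kmod" and N :: "('k, 'b) kmod"
  assumes km: "kmodule M" and kn: "kmodule N" and kp: "kmodule P" and bl: "bilinear_map M N P f"
    and x: "x \<in> tensor_rels M N"
  shows "free_lift P f x = mzero P"
proof -
  note f_closed = bilinear_mapD(1)[OF bl]
  have diff: "free_lift P f (F - G) = mzero P"
    if "Poly_Mapping.keys F \<subseteq> mcarrier M \<times> mcarrier N" "Poly_Mapping.keys G \<subseteq> mcarrier M \<times> mcarrier N"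
      "free_lift P f F = free_lift P f G" for F G
    using free_lift_diff_eq_zero[OF kp f_closed that] .
  show ?thesis using x unfolding tensor_rels_def diff_diff_eq
    by (elim UnE CollectE exE conjE; hypsubst; intro diff)
      (simp_all add: km kn keys_fdelta_sub keys_add_sub keys_fscale_sub bilinear_mapD[OF bl]
        free_lift_add[OF kp f_closed] free_lift_fdelta[OF kp f_closed] free_lift_fscale[OF kp f_closed])
qed

lemma free_lift_tensor_sub:
  fixes M :: "('k::comm_ring_1, 'a) kmod" and N :: "('k, 'b) kmod"
  assumes km: "kmodule M" and kn: "kmodule N" and kp: "kmodule P" and bl: "bilinear_map M N P f"
    and x: "x \<in> tensor_sub M N"
  shows "free_lift P f x = mzero P"
  using x unfolding tensor_sub_def
proof (induction rule: fspan_induct)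
  case zero then show ?case using kp by (simp add: free_lift_def)
next
  case (step x r G)
  note fd = bilinear_mapD(1)[OF bl]
  have kx: "Poly_Mapping.keys x \<subseteq> mcarrier M \<times> mcarrier N" using keys_tensor_rels[OF km kn step(1)] .
  have kG: "Poly_Mapping.keys G \<subseteq> mcarrier M \<times> mcarrier N"
    using keys_tensor_sub[OF km kn, of G] step(2) by (simp add: tensor_sub_def)
  have "free_lift P f (fscale r x + G) = madd P (msmult P r (free_lift P f x)) (free_lift P f G)"
    using kx kG by (simp add: free_lift_add[where A="mcarrier M" and B="mcarrier N", OF kp fd] free_lift_fscale[where A="mcarrier M" and B="mcarrier N", OF kp fd] keys_fscale_sub)
  then show ?case using step free_lift_tensor_rels[OF km kn kp bl step(1)] kp by simp
qed

lemma free_lift_eq_if_diff_sub: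
  fixes M :: "('k::comm_ring_1, 'a) kmod" and N :: "('k, 'b) kmod"
  assumes km: "kmodule M" and kn: "kmodule N" and kp: "kmodule P" and bl: "bilinear_map M N P f"
    and "F - G \<in> tensor_sub M N" "Poly_Mapping.keys F \<subseteq> mcarrier M \<times> mcarrier N"
    "Poly_Mapping.keys G \<subseteq> mcarrier M \<times> mcarrier N"
  shows "free_lift P f F = free_lift P f G"
proof -
  note fd = bilinear_mapD(1)[OF bl]
  have kd: "Poly_Mapping.keys (F - G) \<subseteq> mcarrier M \<times> mcarrier N"
    by (rule keys_diff_sub) (fact assms(6), fact assms(7))
  have "free_lift P f F = free_lift P f (G + (F - G))" by simp
  also have "\<dots> = madd P (free_lift P f G) (free_lift P f (F - G))"
    by (rule free_lift_add[where A="mcarrier M" and B="mcarrier N", OF kp fd]) (use assms(7) kd in auto)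
  also have "\<dots> = free_lift P f G"
    using free_lift_tensor_sub[OF km kn kp bl assms(5)] free_lift_closed[where A="mcarrier M" and B="mcarrier N", OF kp fd assms(7)] kp by simp
  finally show ?thesis .
qed

lemma tensor_rep:
  fixes M :: "('k::comm_ring_1, 'a) kmod" and N :: "('k, 'b) kmod"
  assumes km: "kmodule M" and kn: "kmodule N" and X: "X \<in> mcarrier (tensor M N)"
  shows "tensor_rep X \<in> X" "Poly_Mapping.keys (tensor_rep X) \<subseteq> mcarrier M \<times> mcarrier N"
    "tclass M N (tensor_rep X) = X"
proof -
  obtain F where F: "Poly_Mapping.keys F \<subseteq> mcarrier M \<times> mcarrier N" "X = tclass M N F"
    using X by (auto simp: tensor_carrier_iff)
  have "F \<in> X" using F by simp
  then show r: "tensor_rep X \<in> X" unfolding tensor_rep_def by (rule someI)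
  then have d: "tensor_rep X - F \<in> tensor_sub M N" using F by (simp add: mem_tclass)
  have "Poly_Mapping.keys (F + (tensor_rep X - F)) \<subseteq> mcarrier M \<times> mcarrier N"
    by (rule keys_add_sub) (fact F(1), rule keys_tensor_sub[OF km kn d])
  then show "Poly_Mapping.keys (tensor_rep X) \<subseteq> mcarrier M \<times> mcarrier N" by simp
  show "tclass M N (tensor_rep X) = X" using d F by (simp add: tclass_eq_iff)
qed

lemma tlift_tclass:
  fixes M :: "('k::comm_ring_1, 'a) kmod" and N :: "('k, 'b) kmod"
  assumes km: "kmodule M" and kn: "kmodule N" and kp: "kmodule P" and bl: "bilinear_map M N P f"
    and F: "Poly_Mapping.keys F \<subseteq> mcarrier M \<times> mcarrier N"
  shows "tlift M N P f (tclass M N F) = free_lift P f F"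
proof -
  have X: "tclass M N F \<in> mcarrier (tensor M N)" using F by auto
  have "tensor_rep (tclass M N F) - F \<in> tensor_sub M N"
    using tensor_rep(1)[OF km kn X] by (simp add: mem_tclass)
  then show ?thesis unfolding tlift_tensor_rep
    using free_lift_eq_if_diff_sub[OF km kn kp bl _ tensor_rep(2)[OF km kn X] F] by simp
qed

lemma tp_carrier[simp]:
  "a \<in> mcarrier M \<Longrightarrow> b \<in> mcarrier N \<Longrightarrow> tp M N a b \<in> mcarrier (tensor M N)"
  unfolding tp_def by (intro tclass_in_carrier keys_fdelta_sub)

lemma tlift_tp:
  fixes M :: "('k::comm_ring_1, 'a) kmod" and N :: "('k, 'b) kmod"
  assumes km: "kmodule M" and kn: "kmodule N" and kp: "kmodule P" and bl: "bilinear_map M N P f"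
    and a: "a \<in> mcarrier M" and b: "b \<in> mcarrier N"
  shows "tlift M N P f (tp M N a b) = f a b"
proof -
  have "tlift M N P f (tp M N a b) = free_lift P f (fdelta a b)"
    unfolding tp_def by (rule tlift_tclass[OF km kn kp bl]) (rule keys_fdelta_sub[OF a b])
  also have "\<dots> = f a b" by (rule free_lift_fdelta[where A="mcarrier M" and B="mcarrier N", OF kp bilinear_mapD(1)[OF bl] a b])
  finally show ?thesis .
qed

lemma tlift_closed[simp]:
  fixes M :: "('k::comm_ring_1, 'a) kmod" and N :: "('k, 'b) kmod"
  assumes km: "kmodule M" and kn: "kmodule N" and kp: "kmodule P"
    and fd: "\<And>a b. a \<in> mcarrier M \<Longrightarrow> b \<in> mcarrier N \<Longrightarrow> f a b \<in> mcarrier P"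
    and X: "X \<in> mcarrier (tensor M N)"
  shows "tlift M N P f X \<in> mcarrier P"
  unfolding tlift_tensor_rep using free_lift_closed[where A="mcarrier M" and B="mcarrier N", OF kp fd tensor_rep(2)[OF km kn X]] .

lemma tlift_add:
  fixes M :: "('k::comm_ring_1, 'a) kmod" and N :: "('k, 'b) kmod"
  assumes km: "kmodule M" and kn: "kmodule N" and kp: "kmodule P" and bl: "bilinear_map M N P f"
    and X: "X \<in> mcarrier (tensor M N)" and Y: "Y \<in> mcarrier (tensor M N)"
  shows "tlift M N P f (madd (tensor M N) X Y) = madd P (tlift M N P f X) (tlift M N P f Y)"
proof -
  note r = tensor_rep[OF km kn]
  have "madd (tensor M N) X Y = tclass M N (tensor_rep X + tensor_rep Y)"
    using r(3)[OF X] r(3)[OF Y] tclass_add by metis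
  then have "tlift M N P f (madd (tensor M N) X Y) = free_lift P f (tensor_rep X + tensor_rep Y)"
    using r(2)[OF X] r(2)[OF Y] by (simp add: tlift_tclass[OF km kn kp bl] keys_add_sub)
  then show ?thesis
    using r(2)[OF X] r(2)[OF Y] tlift_tensor_rep[of M N P f X] tlift_tensor_rep[of M N P f Y]
    by (simp add: free_lift_add[where A="mcarrier M" and B="mcarrier N", OF kp bilinear_mapD(1)[OF bl]])
qed

lemma tlift_smult:
  fixes M :: "('k::comm_ring_1, 'a) kmod" and N :: "('k, 'b) kmod"
  assumes km: "kmodule M" and kn: "kmodule N" and kp: "kmodule P" and bl: "bilinear_map M N P f"
    and X: "X \<in> mcarrier (tensor M N)"
  shows "tlift M N P f (msmult (tensor M N) r X) = msmult P r (tlift M N P f X)"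
proof -
  note rr = tensor_rep[OF km kn]
  have "msmult (tensor M N) r X = tclass M N (fscale r (tensor_rep X))"
    using rr(3)[OF X] tclass_smult by metis
  then have "tlift M N P f (msmult (tensor M N) r X) = free_lift P f (fscale r (tensor_rep X))"
    using rr(2)[OF X] by (simp add: tlift_tclass[OF km kn kp bl] keys_fscale_sub)
  then show ?thesis
    using rr(2)[OF X] tlift_tensor_rep[of M N P f X]
    by (simp add: free_lift_fscale[where A="mcarrier M" and B="mcarrier N", OF kp bilinear_mapD(1)[OF bl]])
qed

lemma tlift_linear:
  fixes M :: "('k::comm_ring_1, 'a) kmod" and N :: "('k, 'b) kmod"
  assumes km: "kmodule M" and kn: "kmodule N" and kp: "kmodule P" and bl: "bilinear_map M N P f"
  shows "linear_map (tensor M N) P (tlift M N P f)"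
proof -
  have "tlift M N P f X \<in> mcarrier P" if "X \<in> mcarrier (tensor M N)" for X
    by (rule tlift_closed[OF km kn kp _ that]) (rule bilinear_mapD(1)[OF bl])
  then show ?thesis unfolding linear_map_def
    using tlift_add[OF km kn kp bl] tlift_smult[OF km kn kp bl] by blast
qed

lemma tlift_cong:
  fixes M :: "('k::comm_ring_1, 'a) kmod" and N :: "('k, 'b) kmod"
  assumes km: "kmodule M" and kn: "kmodule N" and kp: "kmodule P"
    and fd: "\<And>a b. a \<in> mcarrier M \<Longrightarrow> b \<in> mcarrier N \<Longrightarrow> f a b \<in> mcarrier P"
    and eq: "\<And>a b. a \<in> mcarrier M \<Longrightarrow> b \<in> mcarrier N \<Longrightarrow> f a b = g a b"
    and X: "X \<in> mcarrier (tensor M N)"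
  shows "tlift M N P f X = tlift M N P g X"
proof -
  have K: "\<And>p. p \<in> Poly_Mapping.keys (tensor_rep X) \<Longrightarrow> fst p \<in> mcarrier M \<and> snd p \<in> mcarrier N"
    using tensor_rep(2)[OF km kn X] by (metis mem_Times_iff subsetD)
  show ?thesis unfolding tlift_tensor_rep free_lift_def
  proof (rule msum_cong[OF kp])
    fix i assume i: "i \<in> Poly_Mapping.keys (tensor_rep X)"
    note Ki = K[OF i]
    show "msmult P (Poly_Mapping.lookup (tensor_rep X) i) (f (fst i) (snd i)) =
          msmult P (Poly_Mapping.lookup (tensor_rep X) i) (g (fst i) (snd i))"
      using eq Ki by simp
    show "msmult P (Poly_Mapping.lookup (tensor_rep X) i) (f (fst i) (snd i)) \<in> mcarrier P"
      using fd Ki kp by simp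
  qed
qed

lemma tlift_add_fun:
  fixes M :: "('k::comm_ring_1, 'a) kmod" and N :: "('k, 'b) kmod"
  assumes km: "kmodule M" and kn: "kmodule N" and kp: "kmodule P"
    and fd: "\<And>a b. a \<in> mcarrier M \<Longrightarrow> b \<in> mcarrier N \<Longrightarrow> f a b \<in> mcarrier P"
    and gd: "\<And>a b. a \<in> mcarrier M \<Longrightarrow> b \<in> mcarrier N \<Longrightarrow> g a b \<in> mcarrier P"
    and X: "X \<in> mcarrier (tensor M N)"
  shows "tlift M N P (\<lambda>a b. madd P (f a b) (g a b)) X = madd P (tlift M N P f X) (tlift M N P g X)"
proof -
  have K: "\<And>p. p \<in> Poly_Mapping.keys (tensor_rep X) \<Longrightarrow> p \<in> mcarrier M \<times> mcarrier N"
    using tensor_rep(2)[OF km kn X] by blast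
  have fd': "\<And>p. p \<in> Poly_Mapping.keys (tensor_rep X) \<Longrightarrow> f (fst p) (snd p) \<in> mcarrier P"
    and gd': "\<And>p. p \<in> Poly_Mapping.keys (tensor_rep X) \<Longrightarrow> g (fst p) (snd p) \<in> mcarrier P"
    using K fd gd by (metis mem_Times_iff)+
  have "tlift M N P (\<lambda>a b. madd P (f a b) (g a b)) X =
    msum P (\<lambda>p. madd P (msmult P (Poly_Mapping.lookup (tensor_rep X) p) (f (fst p) (snd p)))
                        (msmult P (Poly_Mapping.lookup (tensor_rep X) p) (g (fst p) (snd p)))) (Poly_Mapping.keys (tensor_rep X))"
    unfolding tlift_tensor_rep free_lift_def using fd' gd' kp by (intro msum_cong[OF kp]) (simp_all add: kmodule_smult_add_right[OF kp])
  also have "\<dots> = madd P (tlift M N P f X) (tlift M N P g X)"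
    unfolding tlift_tensor_rep free_lift_def using fd' gd' kp by (intro msum_add[OF kp]) simp_all
  finally show ?thesis .
qed

lemma tlift_smult_fun:
  fixes M :: "('k::comm_ring_1, 'a) kmod" and N :: "('k, 'b) kmod"
  assumes km: "kmodule M" and kn: "kmodule N" and kp: "kmodule P"
    and fd: "\<And>a b. a \<in> mcarrier M \<Longrightarrow> b \<in> mcarrier N \<Longrightarrow> f a b \<in> mcarrier P"
    and X: "X \<in> mcarrier (tensor M N)"
  shows "tlift M N P (\<lambda>a b. msmult P r (f a b)) X = msmult P r (tlift M N P f X)"
proof -
  have K: "\<And>p. p \<in> Poly_Mapping.keys (tensor_rep X) \<Longrightarrow> p \<in> mcarrier M \<times> mcarrier N"
    using tensor_rep(2)[OF km kn X] by blast
  have fd': "\<And>p. p \<in> Poly_Mapping.keys (tensor_rep X) \<Longrightarrow> f (fst p) (snd p) \<in> mcarrier P"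
    using K fd by (metis mem_Times_iff)
  have "tlift M N P (\<lambda>a b. msmult P r (f a b)) X =
    msum P (\<lambda>p. msmult P r (msmult P (Poly_Mapping.lookup (tensor_rep X) p) (f (fst p) (snd p)))) (Poly_Mapping.keys (tensor_rep X))"
    unfolding tlift_tensor_rep free_lift_def using fd' kp
    by (intro msum_cong[OF kp]) (simp_all add: kmodule_smult_smult[OF kp, symmetric] mult.commute)
  also have "\<dots> = msmult P r (tlift M N P f X)"
    unfolding tlift_tensor_rep free_lift_def using fd' kp by (intro msum_smult[OF kp, symmetric]) simp_all
  finally show ?thesis .
qed

lemma tlift_commute:
  fixes M :: "('k::comm_ring_1, 'a) kmod" and N :: "('k, 'b) kmod"
  assumes km: "kmodule M" and kn: "kmodule N" and kp: "kmodule P" and kq: "kmodule Q"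
    and L: "linear_map P Q L"
    and fd: "\<And>a b. a \<in> mcarrier M \<Longrightarrow> b \<in> mcarrier N \<Longrightarrow> f a b \<in> mcarrier P"
    and X: "X \<in> mcarrier (tensor M N)"
  shows "L (tlift M N P f X) = tlift M N Q (\<lambda>a b. L (f a b)) X"
proof -
  have K: "\<And>p. p \<in> Poly_Mapping.keys (tensor_rep X) \<Longrightarrow> p \<in> mcarrier M \<times> mcarrier N"
    using tensor_rep(2)[OF km kn X] by blast
  have fd': "\<And>p. p \<in> Poly_Mapping.keys (tensor_rep X) \<Longrightarrow> f (fst p) (snd p) \<in> mcarrier P"
    using K fd by (metis mem_Times_iff)
  have "L (tlift M N P f X) = msum Q (\<lambda>p. L (msmult P (Poly_Mapping.lookup (tensor_rep X) p) (f (fst p) (snd p)))) (Poly_Mapping.keys (tensor_rep X))"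
    unfolding tlift_tensor_rep free_lift_def using fd' kp by (intro msum_linear[OF kp kq L]) simp
  also have "\<dots> = tlift M N Q (\<lambda>a b. L (f a b)) X"
    unfolding tlift_tensor_rep free_lift_def using fd' kp kq L
    by (intro msum_cong[OF kq]) (simp_all add: linear_mapD)
  finally show ?thesis .
qed

lemma tlift_swap:
  fixes M :: "('k::comm_ring_1, 'a) kmod" and N :: "('k, 'b) kmod"
    and M' :: "('k, 'c) kmod" and N' :: "('k, 'd) kmod"
  assumes km: "kmodule M" and kn: "kmodule N" and km': "kmodule M'" and kn': "kmodule N'" and kp: "kmodule P"
    and fd: "\<And>a b c d. a \<in> mcarrier M \<Longrightarrow> b \<in> mcarrier N \<Longrightarrow> c \<in> mcarrier M' \<Longrightarrow> d \<in> mcarrier N'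
       \<Longrightarrow> f a b c d \<in> mcarrier P"
    and X: "X \<in> mcarrier (tensor M N)" and Y: "Y \<in> mcarrier (tensor M' N')"
  shows "tlift M N P (\<lambda>a b. tlift M' N' P (\<lambda>c d. f a b c d) Y) X
       = tlift M' N' P (\<lambda>c d. tlift M N P (\<lambda>a b. f a b c d) X) Y"
proof -
  have K: "\<And>p. p \<in> Poly_Mapping.keys (tensor_rep X) \<Longrightarrow> p \<in> mcarrier M \<times> mcarrier N"
    using tensor_rep(2)[OF km kn X] by blast
  have K': "\<And>p. p \<in> Poly_Mapping.keys (tensor_rep Y) \<Longrightarrow> p \<in> mcarrier M' \<times> mcarrier N'"
    using tensor_rep(2)[OF km' kn' Y] by blast
  let ?X = "tensor_rep X" and ?Y = "tensor_rep Y"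
  have fd': "\<And>p q. p \<in> Poly_Mapping.keys ?X \<Longrightarrow> q \<in> Poly_Mapping.keys ?Y \<Longrightarrow>
      f (fst p) (snd p) (fst q) (snd q) \<in> mcarrier P"
    using K K' fd by (metis mem_Times_iff)
  have "tlift M N P (\<lambda>a b. tlift M' N' P (\<lambda>c d. f a b c d) Y) X =
    msum P (\<lambda>p. msum P (\<lambda>q. msmult P (Poly_Mapping.lookup ?X p) (msmult P (Poly_Mapping.lookup ?Y q)
        (f (fst p) (snd p) (fst q) (snd q)))) (Poly_Mapping.keys ?Y)) (Poly_Mapping.keys ?X)"
    unfolding tlift_tensor_rep free_lift_def using fd' kp
    by (intro msum_cong[OF kp]) (simp_all add: msum_smult[OF kp])
  also have "\<dots> = msum P (\<lambda>q. msum P (\<lambda>p. msmult P (Poly_Mapping.lookup ?X p) (msmult P (Poly_Mapping.lookup ?Y q)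
        (f (fst p) (snd p) (fst q) (snd q)))) (Poly_Mapping.keys ?X)) (Poly_Mapping.keys ?Y)"
    using fd' kp by (intro msum_swap[OF kp]) auto
  also have "\<dots> = msum P (\<lambda>q. msum P (\<lambda>p. msmult P (Poly_Mapping.lookup ?Y q) (msmult P (Poly_Mapping.lookup ?X p)
        (f (fst p) (snd p) (fst q) (snd q)))) (Poly_Mapping.keys ?X)) (Poly_Mapping.keys ?Y)"
    using fd' kp by (intro msum_cong[OF kp]) (simp_all add: kmodule_smult_commute)
  also have "\<dots> = tlift M' N' P (\<lambda>c d. tlift M N P (\<lambda>a b. f a b c d) X) Y"
    unfolding tlift_tensor_rep free_lift_def using fd' kp
    by (intro msum_cong[OF kp]) (simp_all add: msum_smult[OF kp])
  finally show ?thesis .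
qed

lemma tp_add_left:
  fixes M :: "('k::comm_ring_1, 'a) kmod" and N :: "('k, 'b) kmod"
  assumes "a \<in> mcarrier M" "a' \<in> mcarrier M" "b \<in> mcarrier N"
  shows "tp M N (madd M a a') b = madd (tensor M N) (tp M N a b) (tp M N a' b)"
  unfolding tp_def tclass_add
  by (rule tclassI, rule tensor_sub_rel) (auto simp: tensor_rels_def diff_diff_eq intro!: exI assms)

lemma tp_add_right:
  fixes M :: "('k::comm_ring_1, 'a) kmod" and N :: "('k, 'b) kmod"
  assumes "a \<in> mcarrier M" "b \<in> mcarrier N" "b' \<in> mcarrier N"
  shows "tp M N a (madd N b b') = madd (tensor M N) (tp M N a b) (tp M N a b')"
  unfolding tp_def tclass_add
  by (rule tclassI, rule tensor_sub_rel) (auto simp: tensor_rels_def diff_diff_eq intro!: exI assms)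

lemma tp_smult_left:
  fixes M :: "('k::comm_ring_1, 'a) kmod" and N :: "('k, 'b) kmod"
  assumes "a \<in> mcarrier M" "b \<in> mcarrier N"
  shows "tp M N (msmult M r a) b = msmult (tensor M N) r (tp M N a b)"
  unfolding tp_def tclass_smult
  by (rule tclassI, rule tensor_sub_rel) (auto simp: tensor_rels_def intro!: exI assms)

lemma tp_smult_right:
  fixes M :: "('k::comm_ring_1, 'a) kmod" and N :: "('k, 'b) kmod"
  assumes "a \<in> mcarrier M" "b \<in> mcarrier N"
  shows "tp M N a (msmult N r b) = msmult (tensor M N) r (tp M N a b)"
  unfolding tp_def tclass_smult
  by (rule tclassI, rule tensor_sub_rel) (auto simp: tensor_rels_def intro!: exI assms)

lemma tp_bilinear:
  fixes M :: "('k::comm_ring_1, 'a) kmod" and N :: "('k, 'b) kmod"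
  shows "bilinear_map M N (tensor M N) (tp M N)"
  by (intro bilinear_mapI linear_mapI) (simp_all add: tp_add_left tp_add_right tp_smult_left tp_smult_right)

lemma linear_tp_left:
  fixes M :: "('k::comm_ring_1, 'a) kmod" and N :: "('k, 'b) kmod"
  shows "linear_map Q M g \<Longrightarrow> b \<in> mcarrier N \<Longrightarrow> linear_map Q (tensor M N) (\<lambda>x. tp M N (g x) b)"
  by (rule linear_bilinear_left[OF tp_bilinear])

lemma linear_tp_right:
  fixes M :: "('k::comm_ring_1, 'a) kmod" and N :: "('k, 'b) kmod"
  shows "a \<in> mcarrier M \<Longrightarrow> linear_map Q N g \<Longrightarrow> linear_map Q (tensor M N) (\<lambda>x. tp M N a (g x))"
  by (rule linear_bilinear_right[OF tp_bilinear])

lemma linear_tlift: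
  fixes M :: "('k::comm_ring_1, 'a) kmod" and N :: "('k, 'b) kmod"
  assumes "kmodule M" "kmodule N" "kmodule P" "bilinear_map M N P f" "linear_map Q (tensor M N) g"
  shows "linear_map Q P (\<lambda>x. tlift M N P f (g x))"
  by (rule linear_map_comp[OF tlift_linear[OF assms(1-4)] assms(5)])

lemma linear_tlift_fun:
  fixes M :: "('k::comm_ring_1, 'a) kmod" and N :: "('k, 'b) kmod"
  assumes km: "kmodule M" and kn: "kmodule N" and kp: "kmodule P" and kq: "kmodule Q"
    and X: "X \<in> mcarrier (tensor M N)"
    and F: "\<And>a b. a \<in> mcarrier M \<Longrightarrow> b \<in> mcarrier N \<Longrightarrow> linear_map Q P (\<lambda>x. F x a b)"
  shows "linear_map Q P (\<lambda>x. tlift M N P (\<lambda>a b. F x a b) X)"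
proof (rule linear_mapI)
  have Fd: "F x a b \<in> mcarrier P" if "x \<in> mcarrier Q" "a \<in> mcarrier M" "b \<in> mcarrier N" for x a b
    using linear_mapD(1)[OF F] that by blast
  show "tlift M N P (\<lambda>a b. F x a b) X \<in> mcarrier P" if "x \<in> mcarrier Q" for x
    using tlift_closed[OF km kn kp _ X, of "\<lambda>a b. F x a b"] Fd that by blast
  show "tlift M N P (\<lambda>a b. F (madd Q x y) a b) X =
        madd P (tlift M N P (\<lambda>a b. F x a b) X) (tlift M N P (\<lambda>a b. F y a b) X)"
    if "x \<in> mcarrier Q" "y \<in> mcarrier Q" for x y
  proof -
    have "tlift M N P (\<lambda>a b. F (madd Q x y) a b) X = tlift M N P (\<lambda>a b. madd P (F x a b) (F y a b)) X"
      using that kq by (intro tlift_cong[OF km kn kp _ _ X]) (simp_all add: Fd linear_mapD(2)[OF F] kmodule_add_closed[OF kp])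
    also have "\<dots> = madd P (tlift M N P (\<lambda>a b. F x a b) X) (tlift M N P (\<lambda>a b. F y a b) X)"
      using that by (intro tlift_add_fun[OF km kn kp _ _ X]) (simp_all add: Fd kmodule_add_closed[OF kp])
    finally show ?thesis .
  qed
  show "tlift M N P (\<lambda>a b. F (msmult Q r x) a b) X = msmult P r (tlift M N P (\<lambda>a b. F x a b) X)"
    if "x \<in> mcarrier Q" for r x
  proof -
    have "tlift M N P (\<lambda>a b. F (msmult Q r x) a b) X = tlift M N P (\<lambda>a b. msmult P r (F x a b)) X"
      using that kq by (intro tlift_cong[OF km kn kp _ _ X]) (simp_all add: Fd linear_mapD(3)[OF F] kmodule_smult_closed[OF kp])
    also have "\<dots> = msmult P r (tlift M N P (\<lambda>a b. F x a b) X)"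
      using that by (intro tlift_smult_fun[OF km kn kp _ X]) (simp_all add: Fd)
    finally show ?thesis .
  qed
qed

lemma sum_fdelta: "(\<Sum>p\<in>Poly_Mapping.keys F. fscale (Poly_Mapping.lookup F p) (fdelta (fst p) (snd p))) = F"
proof (rule poly_mapping_eqI)
  fix k
  have "Poly_Mapping.lookup (\<Sum>p\<in>Poly_Mapping.keys F. fscale (Poly_Mapping.lookup F p) (fdelta (fst p) (snd p))) k
      = (\<Sum>p\<in>Poly_Mapping.keys F. Poly_Mapping.lookup F p * (if p = k then 1 else 0))"
    by (simp add: lookup_sum fdelta_def lookup_single when_def)
  also have "\<dots> = Poly_Mapping.lookup F k"
    by (cases "k \<in> Poly_Mapping.keys F") (simp_all add: in_keys_iff if_distrib sum.delta cong: if_cong)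
  finally show "Poly_Mapping.lookup (\<Sum>p\<in>Poly_Mapping.keys F. fscale (Poly_Mapping.lookup F p) (fdelta (fst p) (snd p))) k = Poly_Mapping.lookup F k" .
qed

lemma keys_fscale_fdelta: "a \<in> A \<Longrightarrow> b \<in> B \<Longrightarrow> Poly_Mapping.keys (fscale r (fdelta a b :: _ \<Rightarrow>\<^sub>0 'k::comm_ring_1)) \<subseteq> A \<times> B"
  by (rule keys_fscale_sub, rule keys_fdelta_sub)

lemma msum_tclass:
  fixes M :: "('k::comm_ring_1, 'a) kmod" and N :: "('k, 'b) kmod"
  assumes km: "kmodule M" and kn: "kmodule N" and "finite A"
    and G: "\<And>i. i \<in> A \<Longrightarrow> Poly_Mapping.keys (G i) \<subseteq> mcarrier M \<times> mcarrier N"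
  shows "msum (tensor M N) (\<lambda>i. tclass M N (G i)) A = tclass M N (\<Sum>i\<in>A. G i)"
  using assms(3,4)
proof (induction A rule: finite_induct)
  case empty then show ?case by (simp add: tensor_zero_tclass msum_empty[OF kmodule_tensor])
next
  case (insert x F)
  then show ?case
    by (subst msum_insert[OF kmodule_tensor]) (auto simp: tclass_in_carrier tclass_add)
qed

lemma tlift_tp_id:
  fixes M :: "('k::comm_ring_1, 'a) kmod" and N :: "('k, 'b) kmod"
  assumes km: "kmodule M" and kn: "kmodule N" and X: "X \<in> mcarrier (tensor M N)"
  shows "tlift M N (tensor M N) (tp M N) X = X"
proof -
  let ?F = "tensor_rep X"
  have K: "Poly_Mapping.keys ?F \<subseteq> mcarrier M \<times> mcarrier N" using tensor_rep(2)[OF km kn X] .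
  have Kp: "fst p \<in> mcarrier M" "snd p \<in> mcarrier N" if "p \<in> Poly_Mapping.keys ?F" for p
    using K that by auto
  have "tlift M N (tensor M N) (tp M N) X =
     msum (tensor M N) (\<lambda>p. tclass M N (fscale (Poly_Mapping.lookup ?F p) (fdelta (fst p) (snd p)))) (Poly_Mapping.keys ?F)"
    unfolding tlift_tensor_rep free_lift_def using K
    by (intro msum_cong[OF kmodule_tensor]) (auto simp: tp_def tclass_smult tclass_in_carrier keys_fscale_sub keys_fdelta_sub)
  also have "\<dots> = tclass M N ?F"
    by (subst msum_tclass[OF km kn]) (simp_all add: sum_fdelta keys_fscale_fdelta Kp)
  also have "\<dots> = X" using tensor_rep(3)[OF km kn X] .
  finally show ?thesis .
qed

lemma linear_map_eq_tlift_tp: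
  fixes M :: "('k::comm_ring_1, 'a) kmod" and N :: "('k, 'b) kmod"
  assumes km: "kmodule M" and kn: "kmodule N" and kq: "kmodule Q"
    and L: "linear_map (tensor M N) Q L" and X: "X \<in> mcarrier (tensor M N)"
  shows "L X = tlift M N Q (\<lambda>a b. L (tp M N a b)) X"
proof -
  have "L X = L (tlift M N (tensor M N) (tp M N) X)" using tlift_tp_id[OF km kn X] by simp
  also have "\<dots> = tlift M N Q (\<lambda>a b. L (tp M N a b)) X"
    by (rule tlift_commute[OF km kn kmodule_tensor kq L _ X]) simp
  finally show ?thesis .
qed

lemma tensor_ext:
  fixes M :: "('k::comm_ring_1, 'a) kmod" and N :: "('k, 'b) kmod"
  assumes km: "kmodule M" and kn: "kmodule N" and kq: "kmodule Q"
    and L1: "linear_map (tensor M N) Q L1" and L2: "linear_map (tensor M N) Q L2"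
    and eq: "\<And>a b. a \<in> mcarrier M \<Longrightarrow> b \<in> mcarrier N \<Longrightarrow> L1 (tp M N a b) = L2 (tp M N a b)"
    and X: "X \<in> mcarrier (tensor M N)"
  shows "L1 X = L2 X"
  unfolding linear_map_eq_tlift_tp[OF km kn kq L1 X] linear_map_eq_tlift_tp[OF km kn kq L2 X]
  by (rule tlift_cong[OF km kn kq _ _ X]) (simp_all add: eq linear_mapD(1)[OF L2])

lemmas tensor_linear_intros = linear_tlift_fun linear_tlift linear_tp_left linear_tp_right linear_map_id bilinear_mapI kmodule_tensor
  tp_carrier tlift_closed

lemma tassoc_bilinear:
  fixes M :: "('k::comm_ring_1, 'a) kmod" and N :: "('k, 'b) kmod" and P :: "('k, 'c) kmod"
  assumes "kmodule M" "kmodule N" "kmodule P"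
  shows "bilinear_map (tensor M N) P (tensor M (tensor N P))
     (\<lambda>u z. tlift M N (tensor M (tensor N P)) (\<lambda>x y. tp M (tensor N P) x (tp N P y z)) u)"
  using assms by (intro tensor_linear_intros; assumption?)

lemma tassoc_tp:
  fixes M :: "('k::comm_ring_1, 'a) kmod" and N :: "('k, 'b) kmod" and P :: "('k, 'c) kmod"
  assumes km: "kmodule M" and kn: "kmodule N" and kp: "kmodule P"
    and u: "u \<in> mcarrier (tensor M N)" and z: "z \<in> mcarrier P"
  shows "tassoc M N P (tp (tensor M N) P u z) = tlift M N (tensor M (tensor N P)) (\<lambda>x y. tp M (tensor N P) x (tp N P y z)) u"
  unfolding tassoc_def
  by (rule tlift_tp[OF kmodule_tensor kp _ tassoc_bilinear[OF km kn kp] u z]) (simp add: km kn kp)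

lemma tassoc_linear:
  fixes M :: "('k::comm_ring_1, 'a) kmod" and N :: "('k, 'b) kmod" and P :: "('k, 'c) kmod"
  assumes km: "kmodule M" and kn: "kmodule N" and kp: "kmodule P"
  shows "linear_map (tensor (tensor M N) P) (tensor M (tensor N P)) (tassoc M N P)"
  unfolding tassoc_def
  by (rule tlift_linear[OF kmodule_tensor kp _ tassoc_bilinear[OF km kn kp]]) (simp add: km kn kp)

lemma tlift_tmap:
  fixes M :: "('k::comm_ring_1, 'a) kmod" and N :: "('k, 'b) kmod"
  assumes km: "kmodule M" and kn: "kmodule N" and km': "kmodule M'" and kn': "kmodule N'" and kp: "kmodule P"
    and F: "bilinear_map M' N' P F" and f: "linear_map M M' f" and g: "linear_map N N' g"
    and X: "X \<in> mcarrier (tensor M N)"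
  shows "tlift M' N' P F (tmap M N M' N' f g X) = tlift M N P (\<lambda>a b. F (f a) (g b)) X"
proof -
  have kt: "kmodule (tensor M' N')" using km' kn' by simp
  note L = tlift_linear[OF km' kn' kp F]
  have "tlift M' N' P F (tmap M N M' N' f g X) = tlift M N P (\<lambda>a b. tlift M' N' P F (tp M' N' (f a) (g b))) X"
    unfolding tmap_def
    by (rule tlift_commute[OF km kn kt kp L _ X]) (simp add: linear_mapD(1)[OF f] linear_mapD(1)[OF g])
  also have "\<dots> = tlift M N P (\<lambda>a b. F (f a) (g b)) X"
    by (rule tlift_cong[OF km kn kp _ _ X])
       (simp_all add: linear_mapD(1)[OF f] linear_mapD(1)[OF g] tlift_tp[OF km' kn' kp F] bilinear_mapD(1)[OF F])
  finally show ?thesis .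
qed

lemma tlift_trilinear:
  fixes M :: "('k::comm_ring_1, 'a) kmod" and N :: "('k, 'b) kmod" and Q :: "('k, 'c) kmod"
  assumes km: "kmodule M" and kn: "kmodule N" and kq: "kmodule Q" and kp: "kmodule P"
    and f: "trilinear_map M N Q P f"
  shows "linear_map (tensor M (tensor N Q)) P (tlift M (tensor N Q) P (\<lambda>x. tlift N Q P (f x)))"
    and "\<And>x Y. x \<in> mcarrier M \<Longrightarrow> Y \<in> mcarrier (tensor N Q) \<Longrightarrow>
      tlift M (tensor N Q) P (\<lambda>x. tlift N Q P (f x)) (tp M (tensor N Q) x Y) = tlift N Q P (f x) Y"
proof -
  have bl: "bilinear_map M (tensor N Q) P (\<lambda>x. tlift N Q P (f x))"
  proof (rule bilinear_mapI)
    show "linear_map (tensor N Q) P (\<lambda>Y. tlift N Q P (f x) Y)" if "x \<in> mcarrier M" for x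
      using tlift_linear[OF kn kq kp trilinear_map_bilinear[OF f that]] by simp
    show "linear_map M P (\<lambda>x. tlift N Q P (f x) Y)" if "Y \<in> mcarrier (tensor N Q)" for Y
      using linear_tlift_fun[OF kn kq kp km that trilinear_map_linear_left[OF f]] by simp
  qed
  show "linear_map (tensor M (tensor N Q)) P (tlift M (tensor N Q) P (\<lambda>x. tlift N Q P (f x)))"
    by (rule tlift_linear[OF km kmodule_tensor kp bl])
  show "tlift M (tensor N Q) P (\<lambda>x. tlift N Q P (f x)) (tp M (tensor N Q) x Y) = tlift N Q P (f x) Y"
    if "x \<in> mcarrier M" "Y \<in> mcarrier (tensor N Q)" for x Y
    by (rule tlift_tp[OF km kmodule_tensor kp bl that])
qed

lemma tlift_tassoc_tp:
  fixes M :: "('k::comm_ring_1, 'a) kmod" and N :: "('k, 'b) kmod" and Q :: "('k, 'c) kmod"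
  assumes km: "kmodule M" and kn: "kmodule N" and kq: "kmodule Q" and kp: "kmodule P"
    and L: "linear_map (tensor M (tensor N Q)) P L"
    and u: "u \<in> mcarrier (tensor M N)" and z: "z \<in> mcarrier Q"
  shows "L (tassoc M N Q (tp (tensor M N) Q u z)) = tlift M N P (\<lambda>a b. L (tp M (tensor N Q) a (tp N Q b z))) u"
  unfolding tassoc_tp[OF km kn kq u z]
  by (rule tlift_commute[OF km kn kmodule_tensor kp L _ u]) (simp add: z)

section \<open>Coalgebras\<close>

lemma coalgebraD:
  assumes "coalgebra M D e"
  shows "kmodule M" "linear_map M (tensor M M) D" "linear_map M kself e"
    "\<And>m. m \<in> mcarrier M \<Longrightarrow>
        tassoc M M M (tlift M M (tensor (tensor M M) M) (\<lambda>x y. tp (tensor M M) M (D x) y) (D m))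
        = tlift M M (tensor M (tensor M M)) (\<lambda>x y. tp M (tensor M M) x (D y)) (D m)"
    "\<And>m. m \<in> mcarrier M \<Longrightarrow> tlift M M M (\<lambda>x y. msmult M (e x) y) (D m) = m"
    "\<And>m. m \<in> mcarrier M \<Longrightarrow> tlift M M M (\<lambda>x y. msmult M (e y) x) (D m) = m"
  using assms unfolding coalgebra_def by blast+

text \<open>In the statements below \<open>tlift M M P f (D m)\<close> is the Sweedler sum \<open>\<Sum> f m0 m1\<close>, and
  iterated coproducts appear as nested sums.\<close>

lemma coalgebra_sweedler_coassoc:
  fixes M :: "('k::comm_ring_1, 'a) kmod" and P :: "('k, 'p) kmod"
  assumes co: "coalgebra M D e" and kp: "kmodule P" and m: "m \<in> mcarrier M"
    and f: "trilinear_map M M M P f"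
  shows "tlift M M P (\<lambda>x y. tlift M M P (\<lambda>x1 x2. f x1 x2 y) (D x)) (D m)
       = tlift M M P (\<lambda>x y. tlift M M P (\<lambda>y1 y2. f x y1 y2) (D y)) (D m)"
proof -
  note km = coalgebraD(1)[OF co]
  have Dc: "D x \<in> mcarrier (tensor M M)" if "x \<in> mcarrier M" for x
    using linear_mapD(1)[OF coalgebraD(2)[OF co] that] .
  have fc: "f x y z \<in> mcarrier P" if "x \<in> mcarrier M" "y \<in> mcarrier M" "z \<in> mcarrier M" for x y z
    using linear_mapD(1)[OF trilinear_map_linear_left[OF f that(2,3)] that(1)] .
  let ?L = "tlift M (tensor M M) P (\<lambda>x. tlift M M P (f x))"
  note L = tlift_trilinear[OF km km km kp f]
  have "?L (tassoc M M M (tlift M M (tensor (tensor M M) M) (\<lambda>x y. tp (tensor M M) M (D x) y) (D m)))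
      = tlift M M P (\<lambda>x y. ?L (tassoc M M M (tp (tensor M M) M (D x) y))) (D m)"
    by (rule tlift_commute[OF km km kmodule_tensor kp linear_map_comp[OF L(1) tassoc_linear[OF km km km]]])
       (simp_all add: Dc m)
  also have "\<dots> = tlift M M P (\<lambda>x y. tlift M M P (\<lambda>x1 x2. f x1 x2 y) (D x)) (D m)"
    by (rule tlift_cong[OF km km kp _ _ Dc[OF m]])
       (auto simp: Dc fc tlift_tassoc_tp[OF km km km kp L(1)] L(2) tlift_tp[OF km km kp trilinear_map_bilinear[OF f]]
         intro!: tlift_closed[OF km km kp] tlift_cong[OF km km kp])
  finally have LHS: "?L (tassoc M M M (tlift M M (tensor (tensor M M) M) (\<lambda>x y. tp (tensor M M) M (D x) y) (D m)))
      = tlift M M P (\<lambda>x y. tlift M M P (\<lambda>x1 x2. f x1 x2 y) (D x)) (D m)" .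
  have "?L (tlift M M (tensor M (tensor M M)) (\<lambda>x y. tp M (tensor M M) x (D y)) (D m))
      = tlift M M P (\<lambda>x y. ?L (tp M (tensor M M) x (D y))) (D m)"
    by (rule tlift_commute[OF km km kmodule_tensor kp L(1)]) (simp_all add: Dc m)
  also have "\<dots> = tlift M M P (\<lambda>x y. tlift M M P (\<lambda>y1 y2. f x y1 y2) (D y)) (D m)"
    by (rule tlift_cong[OF km km kp _ _ Dc[OF m]])
       (simp_all add: Dc L(2) tlift_closed[OF km km kp] fc)
  finally show ?thesis using LHS coalgebraD(4)[OF co m] by simp
qed

lemma coalgebra_sweedler_counit_left:
  fixes M :: "('k::comm_ring_1, 'a) kmod" and P :: "('k, 'p) kmod"
  assumes co: "coalgebra M D e" and kp: "kmodule P" and F: "linear_map M P F" and m: "m \<in> mcarrier M"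
  shows "tlift M M P (\<lambda>x y. msmult P (e x) (F y)) (D m) = F m"
proof -
  note cd = coalgebraD[OF co]
  note km = cd(1) and Dl = cd(2) and el = cd(3)
  have Dc: "D m \<in> mcarrier (tensor M M)" using linear_mapD(1)[OF Dl m] .
  have "F m = F (tlift M M M (\<lambda>x y. msmult M (e x) y) (D m))" using cd(5)[OF m] by simp
  also have "\<dots> = tlift M M P (\<lambda>x y. F (msmult M (e x) y)) (D m)"
    by (rule tlift_commute[OF km km km kp F _ Dc]) (simp add: km)
  also have "\<dots> = tlift M M P (\<lambda>x y. msmult P (e x) (F y)) (D m)"
    by (rule tlift_cong[OF km km kp _ _ Dc]) (simp_all add: km kp linear_mapD[OF F])
  finally show ?thesis by simp
qed

lemma coalgebra_sweedler_counit_right: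
  fixes M :: "('k::comm_ring_1, 'a) kmod" and P :: "('k, 'p) kmod"
  assumes co: "coalgebra M D e" and kp: "kmodule P" and F: "linear_map M P F" and m: "m \<in> mcarrier M"
  shows "tlift M M P (\<lambda>x y. msmult P (e y) (F x)) (D m) = F m"
proof -
  note cd = coalgebraD[OF co]
  note km = cd(1) and Dl = cd(2) and el = cd(3)
  have Dc: "D m \<in> mcarrier (tensor M M)" using linear_mapD(1)[OF Dl m] .
  have "F m = F (tlift M M M (\<lambda>x y. msmult M (e y) x) (D m))" using cd(6)[OF m] by simp
  also have "\<dots> = tlift M M P (\<lambda>x y. F (msmult M (e y) x)) (D m)"
    by (rule tlift_commute[OF km km km kp F _ Dc]) (simp add: km)
  also have "\<dots> = tlift M M P (\<lambda>x y. msmult P (e y) (F x)) (D m)"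
    by (rule tlift_cong[OF km km kp _ _ Dc]) (simp_all add: km kp linear_mapD[OF F])
  finally show ?thesis by simp
qed

section \<open>Hopf algebras\<close>

locale hopf =
  fixes H :: "('k::comm_ring_1, 'h) kmod" and mult :: "'h \<Rightarrow> 'h \<Rightarrow> 'h" and one :: 'h
    and D :: "'h \<Rightarrow> ('k, 'h, 'h) tens" and e :: "'h \<Rightarrow> 'k" and S :: "'h \<Rightarrow> 'h"
  assumes hopf: "hopf_algebra H mult one D e S"
begin

lemma bialgebra_H: "bialgebra H mult one D e" using hopf unfolding hopf_algebra_def by blast

lemma algebra_H: "kalgebra H mult one" using bialgebra_H unfolding bialgebra_def by blast

lemma coalgebra_H: "coalgebra H D e" using bialgebra_H unfolding bialgebra_def by blast

lemma kmodule_H[simp]: "kmodule H" using algebra_H unfolding kalgebra_def by blast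

lemma mult_bilinear: "bilinear_map H H H mult" using algebra_H unfolding kalgebra_def by blast

lemma one_closed[simp]: "one \<in> mcarrier H" using algebra_H unfolding kalgebra_def by blast

lemma mult_assoc: "x \<in> mcarrier H \<Longrightarrow> y \<in> mcarrier H \<Longrightarrow> z \<in> mcarrier H \<Longrightarrow>
    mult (mult x y) z = mult x (mult y z)"
  using algebra_H unfolding kalgebra_def by blast

lemma mult_one_left[simp]: "x \<in> mcarrier H \<Longrightarrow> mult one x = x"
  using algebra_H unfolding kalgebra_def by blast

lemma mult_one_right[simp]: "x \<in> mcarrier H \<Longrightarrow> mult x one = x"
  using algebra_H unfolding kalgebra_def by blast

lemma D_linear: "linear_map H (tensor H H) D" using coalgebraD(2)[OF coalgebra_H] .

lemma e_linear: "linear_map H kself e" using coalgebraD(3)[OF coalgebra_H] .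

lemma D_mult: "x \<in> mcarrier H \<Longrightarrow> y \<in> mcarrier H \<Longrightarrow>
   D (mult x y) = tlift H H (tensor H H) (\<lambda>a b. tlift H H (tensor H H) (\<lambda>c d. tp H H (mult a c) (mult b d)) (D y)) (D x)"
  using bialgebra_H unfolding bialgebra_def tensor_mult_def by blast

lemma D_one: "D one = tp H H one one" using bialgebra_H unfolding bialgebra_def by blast

lemma e_mult: "x \<in> mcarrier H \<Longrightarrow> y \<in> mcarrier H \<Longrightarrow> e (mult x y) = e x * e y"
  using bialgebra_H unfolding bialgebra_def by blast

lemma e_one[simp]: "e one = 1" using bialgebra_H unfolding bialgebra_def by blast

lemma S_linear: "linear_map H H S" using hopf unfolding hopf_algebra_def by blast

lemma antipode_left: "h \<in> mcarrier H \<Longrightarrow> tlift H H H (\<lambda>x y. mult (S x) y) (D h) = msmult H (e h) one"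
  using hopf unfolding hopf_algebra_def by blast

lemma antipode_right: "h \<in> mcarrier H \<Longrightarrow> tlift H H H (\<lambda>x y. mult x (S y)) (D h) = msmult H (e h) one"
  using hopf unfolding hopf_algebra_def by blast

lemma mult_closed[simp]: "x \<in> mcarrier H \<Longrightarrow> y \<in> mcarrier H \<Longrightarrow> mult x y \<in> mcarrier H"
  using bilinear_mapD(1)[OF mult_bilinear] .

lemma S_closed[simp]: "x \<in> mcarrier H \<Longrightarrow> S x \<in> mcarrier H"
  using linear_mapD(1)[OF S_linear] .

lemma D_closed[simp]: "x \<in> mcarrier H \<Longrightarrow> D x \<in> mcarrier (tensor H H)"
  using linear_mapD(1)[OF D_linear] .

lemma S_smult: "x \<in> mcarrier H \<Longrightarrow> S (msmult H r x) = msmult H r (S x)"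
  using linear_mapD(3)[OF S_linear] .

lemma D_smult: "x \<in> mcarrier H \<Longrightarrow> D (msmult H r x) = msmult (tensor H H) r (D x)"
  using linear_mapD(3)[OF D_linear] .

lemma linear_mult_left: "linear_map Q H g \<Longrightarrow> b \<in> mcarrier H \<Longrightarrow> linear_map Q H (\<lambda>x. mult (g x) b)"
  by (rule linear_bilinear_left[OF mult_bilinear])

lemma linear_mult_right: "a \<in> mcarrier H \<Longrightarrow> linear_map Q H g \<Longrightarrow> linear_map Q H (\<lambda>x. mult a (g x))"
  by (rule linear_bilinear_right[OF mult_bilinear])

lemma linear_S: "linear_map Q H g \<Longrightarrow> linear_map Q H (\<lambda>x. S (g x))"
  by (rule linear_map_comp[OF S_linear])

lemma linear_D: "linear_map Q H g \<Longrightarrow> linear_map Q (tensor H H) (\<lambda>x. D (g x))"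
  by (rule linear_map_comp[OF D_linear])

lemma linear_e: "linear_map Q H g \<Longrightarrow> linear_map Q kself (\<lambda>x. e (g x))"
  by (rule linear_map_comp[OF e_linear])

lemma linear_mult: "a \<in> mcarrier H \<Longrightarrow> linear_map H H (mult a)"
  using bilinear_map_linear_right[OF mult_bilinear] by simp

lemmas hopf_linear_intros = trilinear_mapI linear_tlift_fun linear_tlift linear_tp_left linear_tp_right linear_mult_left linear_mult_right linear_mult S_linear D_linear e_linear linear_S linear_D linear_e
   linear_smult_right linear_smult_left linear_kmult_right linear_kmult_left linear_map_id bilinear_mapI kmodule_tensor kmodule_H kmodule_kself
   tp_carrier tlift_closed mult_closed S_closed D_closed one_closed kmodule_smult_closed

lemma sweedler_coassoc:
  assumes "kmodule P" "m \<in> mcarrier H" "trilinear_map H H H P f"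
  shows "tlift H H P (\<lambda>x y. tlift H H P (\<lambda>x1 x2. f x1 x2 y) (D x)) (D m)
       = tlift H H P (\<lambda>x y. tlift H H P (\<lambda>y1 y2. f x y1 y2) (D y)) (D m)"
  by (rule coalgebra_sweedler_coassoc[OF coalgebra_H assms])

lemma sweedler_counit_left:
  assumes "kmodule P" "linear_map H P F" "m \<in> mcarrier H"
  shows "tlift H H P (\<lambda>x y. msmult P (e x) (F y)) (D m) = F m"
  by (rule coalgebra_sweedler_counit_left[OF coalgebra_H assms])

lemma sweedler_counit_right:
  assumes "kmodule P" "linear_map H P F" "m \<in> mcarrier H"
  shows "tlift H H P (\<lambda>x y. msmult P (e y) (F x)) (D m) = F m"
  by (rule coalgebra_sweedler_counit_right[OF coalgebra_H assms])

lemma sweedler_antipode_left: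
  assumes kp: "kmodule P" and F: "linear_map H P F" and m: "m \<in> mcarrier H"
  shows "tlift H H P (\<lambda>x y. F (mult (S x) y)) (D m) = msmult P (e m) (F one)"
proof -
  have "tlift H H P (\<lambda>x y. F (mult (S x) y)) (D m) = F (tlift H H H (\<lambda>x y. mult (S x) y) (D m))"
    by (rule tlift_commute[OF kmodule_H kmodule_H kmodule_H kp F, symmetric]) (simp_all add: m)
  also have "\<dots> = msmult P (e m) (F one)" using m by (simp add: antipode_left linear_mapD(3)[OF F])
  finally show ?thesis .
qed

lemma sweedler_antipode_right:
  assumes kp: "kmodule P" and F: "linear_map H P F" and m: "m \<in> mcarrier H"
  shows "tlift H H P (\<lambda>x y. F (mult x (S y))) (D m) = msmult P (e m) (F one)"
proof -
  have "tlift H H P (\<lambda>x y. F (mult x (S y))) (D m) = F (tlift H H H (\<lambda>x y. mult x (S y)) (D m))"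
    by (rule tlift_commute[OF kmodule_H kmodule_H kmodule_H kp F, symmetric]) (simp_all add: m)
  also have "\<dots> = msmult P (e m) (F one)" using m by (simp add: antipode_right linear_mapD(3)[OF F])
  finally show ?thesis .
qed

lemma S_one[simp]: "S one = one"
proof -
  have "tlift H H H (\<lambda>x y. mult (S x) y) (D one) = S one"
    by (simp add: D_one tlift_tp[OF kmodule_H kmodule_H kmodule_H] mult_bilinear bilinear_mapI hopf_linear_intros)
  then show ?thesis using antipode_left[OF one_closed] by simp
qed

lemma e_S[simp]: "x \<in> mcarrier H \<Longrightarrow> e (S x) = e x"
proof -
  assume x: "x \<in> mcarrier H"
  have "e (S x) = tlift H H kself (\<lambda>u v. msmult kself (e v) (e (S u))) (D x)"
    by (rule sweedler_counit_right[symmetric]) (simp_all add: x linear_e[OF linear_S[OF linear_map_id]])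
  also have "\<dots> = tlift H H kself (\<lambda>u v. e (mult (S u) v)) (D x)"
    by (rule tlift_cong) (simp_all add: x e_mult)
  also have "\<dots> = e x"
    using sweedler_antipode_left[OF kmodule_kself e_linear x] by simp
  finally show ?thesis .
qed

lemma sweedler_D_mult:
  assumes kp: "kmodule P" and F: "bilinear_map H H P F" and x: "x \<in> mcarrier H" and y: "y \<in> mcarrier H"
  shows "tlift H H P F (D (mult x y)) =
    tlift H H P (\<lambda>a b. tlift H H P (\<lambda>c d. F (mult a c) (mult b d)) (D y)) (D x)"
proof -
  note L = tlift_linear[OF kmodule_H kmodule_H kp F]
  have Fc: "F a b \<in> mcarrier P" if "a \<in> mcarrier H" "b \<in> mcarrier H" for a b
    using bilinear_mapD(1)[OF F that] .
  have "tlift H H P F (D (mult x y)) =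
     tlift H H P (\<lambda>a b. tlift H H P F (tlift H H (tensor H H) (\<lambda>c d. tp H H (mult a c) (mult b d)) (D y))) (D x)"
    unfolding D_mult[OF x y]
    by (rule tlift_commute[OF kmodule_H kmodule_H _ kp L]) (simp_all add: x y)
  also have "\<dots> = tlift H H P (\<lambda>a b. tlift H H P (\<lambda>c d. tlift H H P F (tp H H (mult a c) (mult b d))) (D y)) (D x)"
    by (rule tlift_cong) (simp_all add: x y Fc kp linear_mapD(1)[OF L] tlift_commute[OF kmodule_H kmodule_H _ kp L] tlift_tp[OF kmodule_H kmodule_H kp F])
  also have "\<dots> = tlift H H P (\<lambda>a b. tlift H H P (\<lambda>c d. F (mult a c) (mult b d)) (D y)) (D x)"
    by (rule tlift_cong) (simp_all add: x y Fc kp linear_mapD(1)[OF L] tlift_tp[OF kmodule_H kmodule_H kp F],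
        rule tlift_cong, simp_all add: y Fc kp linear_mapD(1)[OF L] tlift_tp[OF kmodule_H kmodule_H kp F])
  finally show ?thesis .
qed

lemma sweedler_cong:
  assumes "kmodule P" "m \<in> mcarrier H"
    "\<And>a b. a \<in> mcarrier H \<Longrightarrow> b \<in> mcarrier H \<Longrightarrow> f a b = g a b"
    "\<And>a b. a \<in> mcarrier H \<Longrightarrow> b \<in> mcarrier H \<Longrightarrow> f a b \<in> mcarrier P"
  shows "tlift H H P f (D m) = tlift H H P g (D m)"
  using assms by (intro tlift_cong) simp_all

lemma sweedler_swap:
  assumes "kmodule P" "m \<in> mcarrier H" "n \<in> mcarrier H"
    "\<And>a b c d. a \<in> mcarrier H \<Longrightarrow> b \<in> mcarrier H \<Longrightarrow> c \<in> mcarrier H \<Longrightarrow> d \<in> mcarrier H \<Longrightarrow> f a b c d \<in> mcarrier P"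
  shows "tlift H H P (\<lambda>a b. tlift H H P (\<lambda>c d. f a b c d) (D n)) (D m)
       = tlift H H P (\<lambda>c d. tlift H H P (\<lambda>a b. f a b c d) (D m)) (D n)"
  using assms by (intro tlift_swap) simp_all

lemmas sweedler_rearrange = sweedler_coassoc sweedler_coassoc[symmetric] sweedler_swap sweedler_cong

lemma sweedler_counit_mult:
  assumes kp: "kmodule P" and F: "bilinear_map H H P F" and x: "x \<in> mcarrier H" and y: "y \<in> mcarrier H"
  shows "tlift H H P (\<lambda>x1 x2. tlift H H P (\<lambda>y1 y2. msmult P (e (mult x2 y2)) (F x1 y1)) (D y)) (D x) = F x y"
proof -
  note Fc = bilinear_mapD(1)[OF F]
  have "tlift H H P (\<lambda>x1 x2. tlift H H P (\<lambda>y1 y2. msmult P (e (mult x2 y2)) (F x1 y1)) (D y)) (D x)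
      = tlift H H P (\<lambda>x1 x2. msmult P (e x2) (F x1 y)) (D x)"
  proof (rule sweedler_cong[OF kp x])
    fix x1 x2 assume h: "x1 \<in> mcarrier H" "x2 \<in> mcarrier H"
    have "tlift H H P (\<lambda>y1 y2. msmult P (e (mult x2 y2)) (F x1 y1)) (D y)
        = msmult P (e x2) (tlift H H P (\<lambda>y1 y2. msmult P (e y2) (F x1 y1)) (D y))"
      using h y kp by (simp add: e_mult kmodule_smult_smult Fc tlift_smult_fun[symmetric] cong: sweedler_cong)
    then show "tlift H H P (\<lambda>y1 y2. msmult P (e (mult x2 y2)) (F x1 y1)) (D y) = msmult P (e x2) (F x1 y)"
      using sweedler_counit_right[OF kp bilinear_map_linear_right[OF F h(1)] y] by simp
  qed (simp add: kp Fc y)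
  also have "\<dots> = F x y"
    by (rule sweedler_counit_right[OF kp bilinear_map_linear_left[OF F y] x])
  finally show ?thesis .
qed

lemma sweedler_antipode_contract:
  assumes kp: "kmodule P" and F: "bilinear_map H H P F" and h: "h \<in> mcarrier H"
  shows "tlift H H P (\<lambda>u v. tlift H H P (\<lambda>v1 v2. F (mult (S u) v1) v2) (D v)) (D h) = F one h"
proof -
  have tri: "trilinear_map H H H P (\<lambda>u v1 v2. F (mult (S u) v1) v2)"
    by (intro trilinear_mapI linear_bilinear_left[OF F] linear_bilinear_right[OF F]
        linear_mult_left linear_mult_right linear_S linear_map_id) simp_all
  have "tlift H H P (\<lambda>u v. tlift H H P (\<lambda>v1 v2. F (mult (S u) v1) v2) (D v)) (D h)
      = tlift H H P (\<lambda>U v2. tlift H H P (\<lambda>u v1. F (mult (S u) v1) v2) (D U)) (D h)"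
    by (rule sweedler_coassoc[OF kp h tri, symmetric])
  also have "\<dots> = tlift H H P (\<lambda>U v2. msmult P (e U) (F one v2)) (D h)"
    using sweedler_antipode_left[OF kp bilinear_map_linear_left[OF F]]
    by (intro sweedler_cong) (simp_all add: kp h bilinear_mapD(1)[OF F])
  also have "\<dots> = F one h"
    by (rule sweedler_counit_left[OF kp bilinear_map_linear_right[OF F one_closed] h])
  finally show ?thesis .
qed

lemma S_mult:
  assumes x: "x \<in> mcarrier H" and y: "y \<in> mcarrier H"
  shows "S (mult x y) = mult (S y) (S x)"
proof -
  let ?T = "tlift H H H"
  have "mult (S y) (S x) = ?T (\<lambda>x1 x2. ?T (\<lambda>y1 y2. msmult H (e (mult x2 y2)) (mult (S y1) (S x1))) (D y)) (D x)"
    by (rule sweedler_counit_mult[symmetric]) (intro hopf_linear_intros | simp add: x y)+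
  also have "\<dots> = ?T (\<lambda>x1 x2. ?T (\<lambda>y1 y2. ?T (\<lambda>a b. ?T (\<lambda>c d.
      mult (S y1) (mult (mult (S x1) a) (mult c (S (mult b d))))) (D y2)) (D x2)) (D y)) (D x)"
  proof (intro sweedler_cong)
    fix x1 x2 y1 y2 assume h: "x1 \<in> mcarrier H" "x2 \<in> mcarrier H" "y1 \<in> mcarrier H" "y2 \<in> mcarrier H"
    let ?w = "mult (S y1) (S x1)"
    have "msmult H (e (mult x2 y2)) ?w = ?T (\<lambda>p q. mult ?w (mult p (S q))) (D (mult x2 y2))"
      using sweedler_antipode_right[OF kmodule_H linear_mult, of ?w "mult x2 y2"] h by simp
    also have "\<dots> = ?T (\<lambda>a b. ?T (\<lambda>c d. mult ?w (mult (mult a c) (S (mult b d)))) (D y2)) (D x2)"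
      by (rule sweedler_D_mult) (intro hopf_linear_intros | simp add: h)+
    also have "\<dots> = ?T (\<lambda>a b. ?T (\<lambda>c d. mult (S y1) (mult (mult (S x1) a) (mult c (S (mult b d))))) (D y2)) (D x2)"
      by (intro sweedler_cong) (simp_all add: h mult_assoc)
    finally show "msmult H (e (mult x2 y2)) ?w = \<dots>" .
  qed (simp_all add: x y)
  also have "\<dots> = ?T (\<lambda>x1 x2. ?T (\<lambda>a b. ?T (\<lambda>y1 y2. ?T (\<lambda>c d.
      mult (S y1) (mult (mult (S x1) a) (mult c (S (mult b d))))) (D y2)) (D y)) (D x2)) (D x)"
    by (intro sweedler_cong sweedler_swap) (simp_all add: x y)
  also have "\<dots> = ?T (\<lambda>y1 y2. ?T (\<lambda>c d. mult (S y1) (mult one (mult c (S (mult x d))))) (D y2)) (D y)"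
    by (rule sweedler_antipode_contract[where
          F = "\<lambda>w b. ?T (\<lambda>y1 y2. ?T (\<lambda>c d. mult (S y1) (mult w (mult c (S (mult b d))))) (D y2)) (D y)"])
       (intro hopf_linear_intros | simp add: x y)+
  also have "\<dots> = ?T (\<lambda>y1 y2. ?T (\<lambda>c d. mult (mult (S y1) c) (S (mult x d))) (D y2)) (D y)"
    by (intro sweedler_cong) (simp_all add: x y mult_assoc)
  also have "\<dots> = mult one (S (mult x y))"
    by (rule sweedler_antipode_contract[where F = "\<lambda>w d. mult w (S (mult x d))"])
       (intro hopf_linear_intros | simp add: x y)+
  finally show ?thesis using x y by simp
qed

lemma smult_e_expand:
  assumes kp: "kmodule P" and L: "linear_map (tensor H H) P L" and w: "w \<in> mcarrier H"
  shows "msmult P (e w) (L (tp H H one one)) = tlift H H P (\<lambda>a b. tlift H H P (\<lambda>a0 a1.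
      tlift H H P (\<lambda>c d. L (tp H H (mult a0 c) (mult a1 d))) (D (S b))) (D a)) (D w)"
proof -
  have "msmult P (e w) (L (tp H H one one)) = L (D (msmult H (e w) one))"
    by (simp add: D_one D_smult linear_mapD(3)[OF L])
  also have "\<dots> = L (D (tlift H H H (\<lambda>a b. mult a (S b)) (D w)))"
    by (simp add: antipode_right w)
  also have "\<dots> = tlift H H P (\<lambda>a b. L (D (mult a (S b)))) (D w)"
    by (rule tlift_commute[OF kmodule_H kmodule_H kmodule_H kp linear_map_comp[OF L D_linear]])
       (simp_all add: w)
  also have "\<dots> = tlift H H P (\<lambda>a b. tlift H H P (\<lambda>a0 a1.
      tlift H H P (\<lambda>c d. L (tp H H (mult a0 c) (mult a1 d))) (D (S b))) (D a)) (D w)"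
  proof (rule sweedler_cong[OF kp w])
    fix a b assume h: "a \<in> mcarrier H" "b \<in> mcarrier H"
    have "L (D (mult a (S b))) = tlift H H P (\<lambda>c d. L (tp H H c d)) (D (mult a (S b)))"
      by (rule linear_map_eq_tlift_tp[OF kmodule_H kmodule_H kp L]) (simp add: h)
    also have "\<dots> = tlift H H P (\<lambda>a0 a1.
        tlift H H P (\<lambda>c d. L (tp H H (mult a0 c) (mult a1 d))) (D (S b))) (D a)"
      by (rule sweedler_D_mult[OF kp _ h(1) S_closed[OF h(2)]])
         (intro bilinear_mapI linear_map_comp[OF L] linear_tp_left linear_tp_right linear_map_id; simp)
    finally show "L (D (mult a (S b))) = \<dots>" .
  qed (simp add: linear_mapD(1)[OF L])
  finally show ?thesis .
qed

lemma D_S: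
  assumes z: "z \<in> mcarrier H"
  shows "D (S z) = tlift H H (tensor H H) (\<lambda>u v. tp H H (S v) (S u)) (D z)"
proof -
  let ?T2 = "tlift H H (tensor H H)"
  have "?T2 (\<lambda>u v. tp H H (S v) (S u)) (D z)
      = ?T2 (\<lambda>u v. ?T2 (\<lambda>v0 v1. msmult (tensor H H) (e v1) (tp H H (S v0) (S u))) (D v)) (D z)"
  proof (rule sweedler_cong)
    fix u v assume h: "u \<in> mcarrier H" "v \<in> mcarrier H"
    have "linear_map H (tensor H H) (\<lambda>w. tp H H (S w) (S u))"
      by (intro hopf_linear_intros | simp add: h)+
    then show "tp H H (S v) (S u) = ?T2 (\<lambda>v0 v1. msmult (tensor H H) (e v1) (tp H H (S v0) (S u))) (D v)"
      by (rule sweedler_counit_right[OF kmodule_tensor _ h(2), symmetric])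
  qed (simp_all add: z)
  also have "\<dots> = ?T2 (\<lambda>u v. ?T2 (\<lambda>v0 v1. ?T2 (\<lambda>a b. ?T2 (\<lambda>a0 a1.
      ?T2 (\<lambda>c d. tp H H (mult (mult (S v0) a0) c) (mult (mult (S u) a1) d)) (D (S b))) (D a)) (D v1)) (D v)) (D z)"
  proof (intro sweedler_cong)
    fix u v v0 v1 assume h: "u \<in> mcarrier H" "v \<in> mcarrier H" "v0 \<in> mcarrier H" "v1 \<in> mcarrier H"
    let ?L = "?T2 (\<lambda>c d. tp H H (mult (S v0) c) (mult (S u) d))"
    have bl: "bilinear_map H H (tensor H H) (\<lambda>c d. tp H H (mult (S v0) c) (mult (S u) d))"
      by (intro hopf_linear_intros | simp add: h)+
    have "msmult (tensor H H) (e v1) (tp H H (S v0) (S u)) = msmult (tensor H H) (e v1) (?L (tp H H one one))"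
      using h by (simp add: tlift_tp[OF kmodule_H kmodule_H kmodule_tensor bl])
    also have "\<dots> = ?T2 (\<lambda>a b. ?T2 (\<lambda>a0 a1. ?T2 (\<lambda>c d. ?L (tp H H (mult a0 c) (mult a1 d))) (D (S b))) (D a)) (D v1)"
      by (rule smult_e_expand[OF kmodule_tensor tlift_linear[OF kmodule_H kmodule_H kmodule_tensor bl] h(4)])
    also have "\<dots> = ?T2 (\<lambda>a b. ?T2 (\<lambda>a0 a1.
        ?T2 (\<lambda>c d. tp H H (mult (mult (S v0) a0) c) (mult (mult (S u) a1) d)) (D (S b))) (D a)) (D v1)"
      by (intro sweedler_cong) (simp_all add: h tlift_tp[OF kmodule_H kmodule_H kmodule_tensor bl] mult_assoc)
    finally show "msmult (tensor H H) (e v1) (tp H H (S v0) (S u)) = \<dots>" .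
  qed (simp_all add: z)
  also have "\<dots> = ?T2 (\<lambda>u v. ?T2 (\<lambda>V b. ?T2 (\<lambda>v0 a. ?T2 (\<lambda>a0 a1.
      ?T2 (\<lambda>c d. tp H H (mult (mult (S v0) a0) c) (mult (mult (S u) a1) d)) (D (S b))) (D a)) (D V)) (D v)) (D z)"
    by (intro sweedler_cong sweedler_coassoc[symmetric]) (intro hopf_linear_intros | simp add: z)+
  also have "\<dots> = ?T2 (\<lambda>u v. ?T2 (\<lambda>V b. ?T2 (\<lambda>c d. tp H H (mult one c) (mult (mult (S u) V) d)) (D (S b))) (D v)) (D z)"
    by (intro sweedler_cong sweedler_antipode_contract[where
          F = "\<lambda>w a1. ?T2 (\<lambda>c d. tp H H (mult w c) (mult (mult (S _) a1) d)) (D (S _))"])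
       (intro hopf_linear_intros | simp add: z)+
  also have "\<dots> = ?T2 (\<lambda>c d. tp H H (mult one c) (mult one d)) (D (S z))"
    by (rule sweedler_antipode_contract[where F = "\<lambda>w b. ?T2 (\<lambda>c d. tp H H (mult one c) (mult w d)) (D (S b))"])
       (intro hopf_linear_intros | simp add: z)+
  also have "\<dots> = D (S z)"
    using z by (simp add: tlift_tp_id cong: sweedler_cong)
  finally show ?thesis by simp
qed

end

locale hopf_bij = hopf +
  assumes bij: "bij_betw S (mcarrier H) (mcarrier H)"
begin

definition Sinv where "Sinv = inv_into (mcarrier H) S"

lemma Sinv_closed[simp]: "z \<in> mcarrier H \<Longrightarrow> Sinv z \<in> mcarrier H"
  unfolding Sinv_def using bij by (metis bij_betw_def inv_into_into)

lemma S_Sinv[simp]: "z \<in> mcarrier H \<Longrightarrow> S (Sinv z) = z"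
  unfolding Sinv_def using bij by (meson bij_betw_inv_into_right)

lemma Sinv_S[simp]: "x \<in> mcarrier H \<Longrightarrow> Sinv (S x) = x"
  unfolding Sinv_def using bij by (meson bij_betw_inv_into_left)

lemma S_inj: "x \<in> mcarrier H \<Longrightarrow> y \<in> mcarrier H \<Longrightarrow> S x = S y \<Longrightarrow> x = y"
  by (metis Sinv_S)

lemma Sinv_linear: "linear_map H H Sinv"
proof (rule linear_mapI)
  show "Sinv x \<in> mcarrier H" if "x \<in> mcarrier H" for x using that by simp
  show "Sinv (madd H x y) = madd H (Sinv x) (Sinv y)" if "x \<in> mcarrier H" "y \<in> mcarrier H" for x y
    by (rule S_inj) (simp_all add: that linear_mapD(2)[OF S_linear])
  show "Sinv (msmult H r x) = msmult H r (Sinv x)" if "x \<in> mcarrier H" for r x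
    by (rule S_inj) (simp_all add: that S_smult)
qed

lemma Sinv_one[simp]: "Sinv one = one"
  using Sinv_S[OF one_closed] by simp

lemma Sinv_mult: "x \<in> mcarrier H \<Longrightarrow> y \<in> mcarrier H \<Longrightarrow> Sinv (mult x y) = mult (Sinv y) (Sinv x)"
  by (rule S_inj) (simp_all add: S_mult)

lemma e_Sinv[simp]: "z \<in> mcarrier H \<Longrightarrow> e (Sinv z) = e z"
  by (metis S_Sinv Sinv_closed e_S)

lemma linear_Sinv: "linear_map Q H g \<Longrightarrow> linear_map Q H (\<lambda>x. Sinv (g x))"
  by (rule linear_map_comp[OF Sinv_linear])

lemmas hopf_bij_linear_intros = hopf_linear_intros linear_Sinv Sinv_linear Sinv_closed

lemma D_Sinv:
  assumes z: "z \<in> mcarrier H"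
  shows "D (Sinv z) = tlift H H (tensor H H) (\<lambda>u v. tp H H (Sinv v) (Sinv u)) (D z)"
proof -
  let ?T2 = "tlift H H (tensor H H)"
  have kt: "kmodule (tensor H H)" by simp
  define L where "L = ?T2 (\<lambda>u v. tp H H (Sinv v) (Sinv u))"
  have Lb: "bilinear_map H H (tensor H H) (\<lambda>u v. tp H H (Sinv v) (Sinv u))"
    by (intro hopf_bij_linear_intros | simp)+
  have Ll: "linear_map (tensor H H) (tensor H H) L" unfolding L_def
    by (rule tlift_linear[OF kmodule_H kmodule_H kt Lb])
  have "L (D z) = L (D (S (Sinv z)))" using z by simp
  also have "\<dots> = L (?T2 (\<lambda>u v. tp H H (S v) (S u)) (D (Sinv z)))"
    using D_S[of "Sinv z"] z by simp
  also have "\<dots> = ?T2 (\<lambda>u v. L (tp H H (S v) (S u))) (D (Sinv z))"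
    by (rule tlift_commute[OF kmodule_H kmodule_H kt kt Ll]) (simp_all add: z)
  also have "\<dots> = ?T2 (tp H H) (D (Sinv z))"
    unfolding L_def by (rule tlift_cong) (simp_all add: z tlift_tp[OF kmodule_H kmodule_H kt Lb])
  also have "\<dots> = D (Sinv z)" by (rule tlift_tp_id) (simp_all add: z)
  finally show ?thesis unfolding L_def by simp
qed

lemma sweedler_Sinv_left:
  assumes kp: "kmodule P" and F: "linear_map H P F" and m: "m \<in> mcarrier H"
  shows "tlift H H P (\<lambda>u v. F (mult (Sinv v) u)) (D m) = msmult P (e m) (F one)"
proof -
  have FT: "linear_map H P (\<lambda>x. F (Sinv x))" by (rule linear_map_comp[OF F Sinv_linear])
  have "tlift H H P (\<lambda>u v. F (mult (Sinv v) u)) (D m) = tlift H H P (\<lambda>u v. F (Sinv (mult (S u) v))) (D m)"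
    by (rule tlift_cong) (simp_all add: m kp Sinv_mult linear_mapD(1)[OF F])
  also have "\<dots> = msmult P (e m) (F (Sinv one))"
    by (rule sweedler_antipode_left[OF kp FT m])
  finally show ?thesis by simp
qed

lemma sweedler_Sinv_right:
  assumes kp: "kmodule P" and F: "linear_map H P F" and m: "m \<in> mcarrier H"
  shows "tlift H H P (\<lambda>u v. F (mult v (Sinv u))) (D m) = msmult P (e m) (F one)"
proof -
  have FT: "linear_map H P (\<lambda>x. F (Sinv x))" by (rule linear_map_comp[OF F Sinv_linear])
  have "tlift H H P (\<lambda>u v. F (mult v (Sinv u))) (D m) = tlift H H P (\<lambda>u v. F (Sinv (mult u (S v)))) (D m)"
    by (rule tlift_cong) (simp_all add: m kp Sinv_mult linear_mapD(1)[OF F])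
  also have "\<dots> = msmult P (e m) (F (Sinv one))"
    by (rule sweedler_antipode_right[OF kp FT m])
  finally show ?thesis by simp
qed

lemma sweedler_D_Sinv:
  assumes kp: "kmodule P" and F: "bilinear_map H H P F" and z: "z \<in> mcarrier H"
  shows "tlift H H P F (D (Sinv z)) = tlift H H P (\<lambda>u v. F (Sinv v) (Sinv u)) (D z)"
proof -
  note L = tlift_linear[OF kmodule_H kmodule_H kp F]
  have "tlift H H P F (D (Sinv z)) = tlift H H P (\<lambda>u v. tlift H H P F (tp H H (Sinv v) (Sinv u))) (D z)"
    unfolding D_Sinv[OF z] by (rule tlift_commute[OF kmodule_H kmodule_H _ kp L]) (simp_all add: z)
  also have "\<dots> = tlift H H P (\<lambda>u v. F (Sinv v) (Sinv u)) (D z)"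
    by (rule tlift_cong) (simp_all add: z kp tlift_tp[OF kmodule_H kmodule_H kp F] bilinear_mapD(1)[OF F])
  finally show ?thesis .
qed

context
  fixes P and \<Psi>
  assumes kp[simp]: "kmodule P"
    and linear_1: "\<And>x2 x3 x4 x5 x6 x7 x8. {x2, x3, x4, x5, x6, x7, x8} \<subseteq> mcarrier H \<Longrightarrow>
      linear_map H P (\<lambda>x1. \<Psi> x1 x2 x3 x4 x5 x6 x7 x8)"
    and linear_2: "\<And>x1 x3 x4 x5 x6 x7 x8. {x1, x3, x4, x5, x6, x7, x8} \<subseteq> mcarrier H \<Longrightarrow>
      linear_map H P (\<lambda>x2. \<Psi> x1 x2 x3 x4 x5 x6 x7 x8)"
    and linear_3: "\<And>x1 x2 x4 x5 x6 x7 x8. {x1, x2, x4, x5, x6, x7, x8} \<subseteq> mcarrier H \<Longrightarrow>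
      linear_map H P (\<lambda>x3. \<Psi> x1 x2 x3 x4 x5 x6 x7 x8)"
    and linear_4: "\<And>x1 x2 x3 x5 x6 x7 x8. {x1, x2, x3, x5, x6, x7, x8} \<subseteq> mcarrier H \<Longrightarrow>
      linear_map H P (\<lambda>x4. \<Psi> x1 x2 x3 x4 x5 x6 x7 x8)"
    and linear_5: "\<And>x1 x2 x3 x4 x6 x7 x8. {x1, x2, x3, x4, x6, x7, x8} \<subseteq> mcarrier H \<Longrightarrow>
      linear_map H P (\<lambda>x5. \<Psi> x1 x2 x3 x4 x5 x6 x7 x8)"
    and linear_6: "\<And>x1 x2 x3 x4 x5 x7 x8. {x1, x2, x3, x4, x5, x7, x8} \<subseteq> mcarrier H \<Longrightarrow>
      linear_map H P (\<lambda>x6. \<Psi> x1 x2 x3 x4 x5 x6 x7 x8)"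
    and linear_7: "\<And>x1 x2 x3 x4 x5 x6 x8. {x1, x2, x3, x4, x5, x6, x8} \<subseteq> mcarrier H \<Longrightarrow>
      linear_map H P (\<lambda>x7. \<Psi> x1 x2 x3 x4 x5 x6 x7 x8)"
    and linear_8: "\<And>x1 x2 x3 x4 x5 x6 x7. {x1, x2, x3, x4, x5, x6, x7} \<subseteq> mcarrier H \<Longrightarrow>
      linear_map H P (\<lambda>x8. \<Psi> x1 x2 x3 x4 x5 x6 x7 x8)"
begin

private lemma linear_Psi:
  assumes "linear_map Q H \<phi>"
  shows
    "\<And>x2 x3 x4 x5 x6 x7 x8. {x2, x3, x4, x5, x6, x7, x8} \<subseteq> mcarrier H \<Longrightarrow>
      linear_map Q P (\<lambda>x. \<Psi> (\<phi> x) x2 x3 x4 x5 x6 x7 x8)"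
    "\<And>x1 x3 x4 x5 x6 x7 x8. {x1, x3, x4, x5, x6, x7, x8} \<subseteq> mcarrier H \<Longrightarrow>
      linear_map Q P (\<lambda>x. \<Psi> x1 (\<phi> x) x3 x4 x5 x6 x7 x8)"
    "\<And>x1 x2 x4 x5 x6 x7 x8. {x1, x2, x4, x5, x6, x7, x8} \<subseteq> mcarrier H \<Longrightarrow>
      linear_map Q P (\<lambda>x. \<Psi> x1 x2 (\<phi> x) x4 x5 x6 x7 x8)"
    "\<And>x1 x2 x3 x5 x6 x7 x8. {x1, x2, x3, x5, x6, x7, x8} \<subseteq> mcarrier H \<Longrightarrow>
      linear_map Q P (\<lambda>x. \<Psi> x1 x2 x3 (\<phi> x) x5 x6 x7 x8)"
    "\<And>x1 x2 x3 x4 x6 x7 x8. {x1, x2, x3, x4, x6, x7, x8} \<subseteq> mcarrier H \<Longrightarrow>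
      linear_map Q P (\<lambda>x. \<Psi> x1 x2 x3 x4 (\<phi> x) x6 x7 x8)"
    "\<And>x1 x2 x3 x4 x5 x7 x8. {x1, x2, x3, x4, x5, x7, x8} \<subseteq> mcarrier H \<Longrightarrow>
      linear_map Q P (\<lambda>x. \<Psi> x1 x2 x3 x4 x5 (\<phi> x) x7 x8)"
    "\<And>x1 x2 x3 x4 x5 x6 x8. {x1, x2, x3, x4, x5, x6, x8} \<subseteq> mcarrier H \<Longrightarrow>
      linear_map Q P (\<lambda>x. \<Psi> x1 x2 x3 x4 x5 x6 (\<phi> x) x8)"
    "\<And>x1 x2 x3 x4 x5 x6 x7. {x1, x2, x3, x4, x5, x6, x7} \<subseteq> mcarrier H \<Longrightarrow>
      linear_map Q P (\<lambda>x. \<Psi> x1 x2 x3 x4 x5 x6 x7 (\<phi> x))"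
  by (intro linear_map_comp[OF linear_1] linear_map_comp[OF linear_2] linear_map_comp[OF linear_3]
      linear_map_comp[OF linear_4] linear_map_comp[OF linear_5] linear_map_comp[OF linear_6]
      linear_map_comp[OF linear_7] linear_map_comp[OF linear_8] assms; simp)+

private lemma Psi_closed[simp]:
  "{x1, x2, x3, x4, x5, x6, x7, x8} \<subseteq> mcarrier H \<Longrightarrow> \<Psi> x1 x2 x3 x4 x5 x6 x7 x8 \<in> mcarrier P"
  using linear_mapD(1)[OF linear_1] by simp

private lemma sweedler_Sinv_left_counit:
  assumes "a \<in> mcarrier H" "b \<in> mcarrier H" "c \<in> mcarrier H" "d \<in> mcarrier H" "Y \<in> mcarrier H"
  shows "tlift H H P (\<lambda>Z Q. tlift H H P (\<lambda>y11 p1. tlift H H P (\<lambda>p2 q. tlift H H P (\<lambda>q1 q2.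
      \<Psi> a b c d p2 (mult (Sinv p1) y11) q1 q2) (D q)) (D Q)) (D Z)) (D Y)
    = tlift H H P (\<lambda>p2 q. tlift H H P (\<lambda>q1 q2. \<Psi> a b c d p2 one q1 q2) (D q)) (D Y)"
proof -
  let ?F = "\<lambda>Q k. tlift H H P (\<lambda>p2 q. tlift H H P (\<lambda>q1 q2. \<Psi> a b c d p2 k q1 q2) (D q)) (D Q)"
  have "tlift H H P (\<lambda>Z Q. tlift H H P (\<lambda>y11 p1. ?F Q (mult (Sinv p1) y11)) (D Z)) (D Y)
      = tlift H H P (\<lambda>Z Q. msmult P (e Z) (?F Q one)) (D Y)"
    using assms by (intro sweedler_cong sweedler_Sinv_left kp) (intro hopf_bij_linear_intros linear_Psi | simp)+
  also have "\<dots> = ?F Y one"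
    using assms by (intro sweedler_counit_left kp) (intro hopf_bij_linear_intros linear_Psi | simp)+
  finally show ?thesis .
qed

private lemma sweedler_Sinv_cancel:
  assumes g: "g \<in> mcarrier H"
  shows
   "tlift H H P (\<lambda>x y. tlift H H P (\<lambda>x1 x2. tlift H H P (\<lambda>y1 y2. tlift H H P (\<lambda>y10 y11. tlift H H P (\<lambda>s0 s1.
      tlift H H P (\<lambda>p q. tlift H H P (\<lambda>p1 p2. tlift H H P (\<lambda>q1 q2.
        \<Psi> s0 s1 x2 y10 p2 (mult (Sinv p1) y11) q1 q2) (D q)) (D p)) (D y2)) (D x1)) (D y1)) (D y)) (D x)) (D g)
    = tlift H H P (\<lambda>x y. tlift H H P (\<lambda>s0 U. tlift H H P (\<lambda>s1 x2. tlift H H P (\<lambda>y10 Y.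
      tlift H H P (\<lambda>p2 q. tlift H H P (\<lambda>q1 q2. \<Psi> s0 s1 x2 y10 p2 one q1 q2) (D q)) (D Y)) (D y)) (D U)) (D x)) (D g)" (is "?L = _")
proof -
  let ?T = "tlift H H P"
  have "?L = ?T (\<lambda>x y. ?T (\<lambda>x1 x2. ?T (\<lambda>y1 y2. ?T (\<lambda>s0 s1. ?T (\<lambda>y10 y11.
      ?T (\<lambda>p q. ?T (\<lambda>p1 p2. ?T (\<lambda>q1 q2.
        \<Psi> s0 s1 x2 y10 p2 (mult (Sinv p1) y11) q1 q2) (D q)) (D p)) (D y2)) (D y1)) (D x1)) (D y)) (D x)) (D g)"
    by (intro sweedler_rearrange hopf_bij_linear_intros linear_Psi | simp add: g)+
  also have "\<dots> = ?T (\<lambda>x y. ?T (\<lambda>x1 x2. ?T (\<lambda>s0 s1. ?T (\<lambda>y1 y2. ?T (\<lambda>y10 y11.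
      ?T (\<lambda>p q. ?T (\<lambda>p1 p2. ?T (\<lambda>q1 q2.
        \<Psi> s0 s1 x2 y10 p2 (mult (Sinv p1) y11) q1 q2) (D q)) (D p)) (D y2)) (D y1)) (D y)) (D x1)) (D x)) (D g)"
    by (intro sweedler_rearrange hopf_bij_linear_intros linear_Psi | simp add: g)+
  also have "\<dots> = ?T (\<lambda>x y. ?T (\<lambda>s0 U. ?T (\<lambda>s1 x2. ?T (\<lambda>y1 y2. ?T (\<lambda>y10 y11.
      ?T (\<lambda>p q. ?T (\<lambda>p1 p2. ?T (\<lambda>q1 q2. \<Psi> s0 s1 x2 y10 p2 (mult (Sinv p1) y11) q1 q2) (D q)) (D p)) (D y2)) (D y1)) (D y)) (D U)) (D x)) (D g)"
    by (intro sweedler_rearrange hopf_bij_linear_intros linear_Psi | simp add: g)+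
  also have "\<dots> = ?T (\<lambda>x y. ?T (\<lambda>s0 U. ?T (\<lambda>s1 x2. ?T (\<lambda>y1 y2. ?T (\<lambda>y10 y11.
      ?T (\<lambda>p1 Q. ?T (\<lambda>p2 q. ?T (\<lambda>q1 q2. \<Psi> s0 s1 x2 y10 p2 (mult (Sinv p1) y11) q1 q2) (D q)) (D Q)) (D y2)) (D y1)) (D y)) (D U)) (D x)) (D g)"
    by (intro sweedler_rearrange hopf_bij_linear_intros linear_Psi | simp add: g)+
  also have "\<dots> = ?T (\<lambda>x y. ?T (\<lambda>s0 U. ?T (\<lambda>s1 x2. ?T (\<lambda>y10 Y. ?T (\<lambda>y11 y2.
      ?T (\<lambda>p1 Q. ?T (\<lambda>p2 q. ?T (\<lambda>q1 q2. \<Psi> s0 s1 x2 y10 p2 (mult (Sinv p1) y11) q1 q2) (D q)) (D Q)) (D y2)) (D Y)) (D y)) (D U)) (D x)) (D g)"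
    by (intro sweedler_rearrange hopf_bij_linear_intros linear_Psi | simp add: g)+
  also have "\<dots> = ?T (\<lambda>x y. ?T (\<lambda>s0 U. ?T (\<lambda>s1 x2. ?T (\<lambda>y10 Y. ?T (\<lambda>Z Q.
      ?T (\<lambda>y11 p1. ?T (\<lambda>p2 q. ?T (\<lambda>q1 q2. \<Psi> s0 s1 x2 y10 p2 (mult (Sinv p1) y11) q1 q2) (D q)) (D Q)) (D Z)) (D Y)) (D y)) (D U)) (D x)) (D g)"
    by (intro sweedler_rearrange hopf_bij_linear_intros linear_Psi | simp add: g)+
  also have "\<dots> = ?T (\<lambda>x y. ?T (\<lambda>s0 U. ?T (\<lambda>s1 x2. ?T (\<lambda>y10 Y.
      ?T (\<lambda>p2 q. ?T (\<lambda>q1 q2. \<Psi> s0 s1 x2 y10 p2 one q1 q2) (D q)) (D Y)) (D y)) (D U)) (D x)) (D g)"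
    by (intro sweedler_Sinv_left_counit sweedler_cong) (simp_all add: g)
  finally show ?thesis .
qed

private lemma sweedler_regroup:
  assumes g: "g \<in> mcarrier H"
  shows "tlift H H P (\<lambda>x y. tlift H H P (\<lambda>s0 U. tlift H H P (\<lambda>s1 x2. tlift H H P (\<lambda>y10 Y.
      tlift H H P (\<lambda>p2 q. tlift H H P (\<lambda>q1 q2. \<Psi> s0 s1 x2 y10 p2 one q1 q2) (D q)) (D Y)) (D y)) (D U)) (D x)) (D g)
    = tlift H H P (\<lambda>x y. tlift H H P (\<lambda>x1 x2. tlift H H P (\<lambda>y1 y2. tlift H H P (\<lambda>u w.
      tlift H H P (\<lambda>u1 u2. tlift H H P (\<lambda>w1 w2. \<Psi> x1 u1 u2 w1 w2 one y1 y2) (D w)) (D u)) (D x2)) (D y)) (D x)) (D g)" (is "?L = _")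
proof -
  let ?T = "tlift H H P"
  have "?L = ?T (\<lambda>x y. ?T (\<lambda>s0 U. ?T (\<lambda>s1 x2. ?T (\<lambda>W q.
      ?T (\<lambda>y10 p2. ?T (\<lambda>q1 q2. \<Psi> s0 s1 x2 y10 p2 one q1 q2) (D q)) (D W)) (D y)) (D U)) (D x)) (D g)"
    by (intro sweedler_rearrange hopf_bij_linear_intros linear_Psi | simp add: g)+
  also have "\<dots> = ?T (\<lambda>x y. ?T (\<lambda>s0 U. ?T (\<lambda>W q. ?T (\<lambda>s1 x2.
      ?T (\<lambda>y10 p2. ?T (\<lambda>q1 q2. \<Psi> s0 s1 x2 y10 p2 one q1 q2) (D q)) (D W)) (D U)) (D y)) (D x)) (D g)"
    by (intro sweedler_rearrange hopf_bij_linear_intros linear_Psi | simp add: g)+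
  also have "\<dots> = ?T (\<lambda>x y. ?T (\<lambda>W q. ?T (\<lambda>s0 U. ?T (\<lambda>s1 x2.
      ?T (\<lambda>y10 p2. ?T (\<lambda>q1 q2. \<Psi> s0 s1 x2 y10 p2 one q1 q2) (D q)) (D W)) (D U)) (D x)) (D y)) (D g)"
    by (intro sweedler_rearrange hopf_bij_linear_intros linear_Psi | simp add: g)+
  also have "\<dots> = ?T (\<lambda>G1 q. ?T (\<lambda>x W. ?T (\<lambda>s0 U. ?T (\<lambda>s1 x2.
      ?T (\<lambda>y10 p2. ?T (\<lambda>q1 q2. \<Psi> s0 s1 x2 y10 p2 one q1 q2) (D q)) (D W)) (D U)) (D x)) (D G1)) (D g)"
    by (intro sweedler_rearrange hopf_bij_linear_intros linear_Psi | simp add: g)+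
  also have "\<dots> = ?T (\<lambda>G1 q. ?T (\<lambda>s0 V. ?T (\<lambda>U W. ?T (\<lambda>s1 x2.
      ?T (\<lambda>y10 p2. ?T (\<lambda>q1 q2. \<Psi> s0 s1 x2 y10 p2 one q1 q2) (D q)) (D W)) (D U)) (D V)) (D G1)) (D g)"
    by (intro sweedler_rearrange hopf_bij_linear_intros linear_Psi | simp add: g)+
  also have "\<dots> = ?T (\<lambda>G1 q. ?T (\<lambda>s0 V. ?T (\<lambda>U W. ?T (\<lambda>s1 x2.
      ?T (\<lambda>q1 q2. ?T (\<lambda>y10 p2. \<Psi> s0 s1 x2 y10 p2 one q1 q2) (D W)) (D q)) (D U)) (D V)) (D G1)) (D g)"
    by (intro sweedler_rearrange hopf_bij_linear_intros linear_Psi | simp add: g)+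
  also have "\<dots> = ?T (\<lambda>G1 q. ?T (\<lambda>s0 V. ?T (\<lambda>U W. ?T (\<lambda>q1 q2.
      ?T (\<lambda>s1 x2. ?T (\<lambda>y10 p2. \<Psi> s0 s1 x2 y10 p2 one q1 q2) (D W)) (D U)) (D q)) (D V)) (D G1)) (D g)"
    by (intro sweedler_rearrange hopf_bij_linear_intros linear_Psi | simp add: g)+
  also have "\<dots> = ?T (\<lambda>G1 q. ?T (\<lambda>s0 V. ?T (\<lambda>q1 q2. ?T (\<lambda>U W.
      ?T (\<lambda>s1 x2. ?T (\<lambda>y10 p2. \<Psi> s0 s1 x2 y10 p2 one q1 q2) (D W)) (D U)) (D V)) (D q)) (D G1)) (D g)"
    by (intro sweedler_rearrange hopf_bij_linear_intros linear_Psi | simp add: g)+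
  finally show ?thesis .
qed


lemma sweedler_Sinv_contract:
  assumes g: "g \<in> mcarrier H"
  shows
   "tlift H H P (\<lambda>x y. tlift H H P (\<lambda>x1 x2. tlift H H P (\<lambda>y1 y2. tlift H H P (\<lambda>y10 y11. tlift H H P (\<lambda>s0 s1.
      tlift H H P (\<lambda>p q. tlift H H P (\<lambda>p1 p2. tlift H H P (\<lambda>q1 q2.
        \<Psi> s0 s1 x2 y10 p2 (mult (Sinv p1) y11) q1 q2) (D q)) (D p)) (D y2)) (D x1)) (D y1)) (D y)) (D x)) (D g)
  = tlift H H P (\<lambda>x y. tlift H H P (\<lambda>x1 x2. tlift H H P (\<lambda>y1 y2. tlift H H P (\<lambda>u w.
      tlift H H P (\<lambda>u1 u2. tlift H H P (\<lambda>w1 w2. \<Psi> x1 u1 u2 w1 w2 one y1 y2) (D w)) (D u)) (D x2)) (D y)) (D x)) (D g)"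
  using sweedler_Sinv_cancel[OF g] sweedler_regroup[OF g] by simp

end

end

section \<open>The smash coalgebra\<close>

locale smash = hopf_bij H mult one D e S for H mult one D e S +
  fixes C and DC and eC and act
  assumes mc: "module_coalgebra H mult one D e C DC eC act"
begin

lemma coalgebra_C: "coalgebra C DC eC" using mc unfolding module_coalgebra_def by blast

lemma kmodule_C[simp]: "kmodule C" using coalgebraD(1)[OF coalgebra_C] .

lemma DC_linear: "linear_map C (tensor C C) DC" using coalgebraD(2)[OF coalgebra_C] .

lemma eC_linear: "linear_map C kself eC" using coalgebraD(3)[OF coalgebra_C] .

lemma act_bilinear: "bilinear_map H C C act" using mc unfolding module_coalgebra_def by blast

lemma act_mult: "g \<in> mcarrier H \<Longrightarrow> h \<in> mcarrier H \<Longrightarrow> c \<in> mcarrier C \<Longrightarrow> act (mult g h) c = act g (act h c)"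
  using mc unfolding module_coalgebra_def by blast

lemma act_one[simp]: "c \<in> mcarrier C \<Longrightarrow> act one c = c"
  using mc unfolding module_coalgebra_def by blast

lemma DC_act: "h \<in> mcarrier H \<Longrightarrow> c \<in> mcarrier C \<Longrightarrow>
    DC (act h c) = tlift H H (tensor C C) (\<lambda>h0 h1. tmap C C C C (act h0) (act h1) (DC c)) (D h)"
  using mc unfolding module_coalgebra_def by blast

lemma eC_act: "h \<in> mcarrier H \<Longrightarrow> c \<in> mcarrier C \<Longrightarrow> eC (act h c) = e h * eC c"
  using mc unfolding module_coalgebra_def by blast

lemma act_closed[simp]: "h \<in> mcarrier H \<Longrightarrow> c \<in> mcarrier C \<Longrightarrow> act h c \<in> mcarrier C"
  using bilinear_mapD(1)[OF act_bilinear] .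

lemma DC_closed[simp]: "c \<in> mcarrier C \<Longrightarrow> DC c \<in> mcarrier (tensor C C)"
  using linear_mapD(1)[OF DC_linear] .

lemma linear_act_left: "linear_map Q H g \<Longrightarrow> c \<in> mcarrier C \<Longrightarrow> linear_map Q C (\<lambda>x. act (g x) c)"
  by (rule linear_bilinear_left[OF act_bilinear])

lemma linear_act_right: "h \<in> mcarrier H \<Longrightarrow> linear_map Q C g \<Longrightarrow> linear_map Q C (\<lambda>x. act h (g x))"
  by (rule linear_bilinear_right[OF act_bilinear])

lemma linear_act: "h \<in> mcarrier H \<Longrightarrow> linear_map C C (act h)"
  using bilinear_map_linear_right[OF act_bilinear] by simp

lemma linear_DC: "linear_map Q C g \<Longrightarrow> linear_map Q (tensor C C) (\<lambda>x. DC (g x))"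
  by (rule linear_map_comp[OF DC_linear])

lemma linear_eC: "linear_map Q C g \<Longrightarrow> linear_map Q kself (\<lambda>x. eC (g x))"
  by (rule linear_map_comp[OF eC_linear])

lemmas smash_linear_intros = hopf_bij_linear_intros linear_act_left linear_act_right linear_act DC_linear eC_linear linear_DC linear_eC act_closed DC_closed kmodule_C

lemma sweedler_DC_act:
  assumes kp: "kmodule P" and F: "bilinear_map C C P F" and h: "h \<in> mcarrier H" and c: "c \<in> mcarrier C"
  shows "tlift C C P F (DC (act h c)) = tlift H H P (\<lambda>h0 h1. tlift C C P (\<lambda>c0 c1. F (act h0 c0) (act h1 c1)) (DC c)) (D h)"
proof -
  have kt: "kmodule (tensor C C)" by simp
  note L = tlift_linear[OF kmodule_C kmodule_C kp F]
  have "tlift C C P F (DC (act h c)) = tlift H H P (\<lambda>h0 h1. tlift C C P F (tmap C C C C (act h0) (act h1) (DC c))) (D h)"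
    unfolding DC_act[OF h c]
    by (rule tlift_commute[OF kmodule_H kmodule_H kt kp L]) (simp_all add: h c tmap_def)
  also have "\<dots> = tlift H H P (\<lambda>h0 h1. tlift C C P (\<lambda>c0 c1. F (act h0 c0) (act h1 c1)) (DC c)) (D h)"
    by (rule tlift_cong) (simp_all add: h c kp tlift_tmap[OF kmodule_C kmodule_C kmodule_C kmodule_C kp F] linear_act bilinear_mapD(1)[OF F])
  finally show ?thesis .
qed

lemma sweedler_cong_C:
  assumes "kmodule P" "m \<in> mcarrier C"
    "\<And>a b. a \<in> mcarrier C \<Longrightarrow> b \<in> mcarrier C \<Longrightarrow> f a b = g a b"
    "\<And>a b. a \<in> mcarrier C \<Longrightarrow> b \<in> mcarrier C \<Longrightarrow> f a b \<in> mcarrier P"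
  shows "tlift C C P f (DC m) = tlift C C P g (DC m)"
  using assms by (intro tlift_cong) simp_all

lemma sweedler_swap_C:
  assumes "kmodule P" "m \<in> mcarrier H" "n \<in> mcarrier C"
    "\<And>a b c d. a \<in> mcarrier H \<Longrightarrow> b \<in> mcarrier H \<Longrightarrow> c \<in> mcarrier C \<Longrightarrow> d \<in> mcarrier C \<Longrightarrow> f a b c d \<in> mcarrier P"
  shows "tlift H H P (\<lambda>a b. tlift C C P (\<lambda>c d. f a b c d) (DC n)) (D m)
       = tlift C C P (\<lambda>c d. tlift H H P (\<lambda>a b. f a b c d) (D m)) (DC n)"
  using assms by (intro tlift_swap) simp_all

lemmas smash_rearrange = sweedler_rearrange sweedler_cong_C sweedler_swap_C

abbreviation "CH \<equiv> tensor C H"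

abbreviation "CH2 \<equiv> tensor CH CH"

abbreviation "CH3 \<equiv> tensor CH CH2"

text \<open>The value of the comultiplication on \<open>a \<otimes> g\<close>, with \<open>S'(g0 S(g2))\<close> already
  rewritten as \<open>g2 S'(g0)\<close>.\<close>

definition Delta_simple where
  "Delta_simple a g = tlift C C CH2 (\<lambda>a0 a1. tlift H H CH2 (\<lambda>x y. tlift H H CH2 (\<lambda>x1 x2. tlift H H CH2 (\<lambda>y1 y2.
       tp CH CH (tp C H a0 x2) (tp C H (act (mult y1 (Sinv x1)) a1) y2)) (D y)) (D x)) (D g)) (DC a)"

lemma smash_comult_simple_eq_Delta_simple:
  assumes a: "a \<in> mcarrier C" and g: "g \<in> mcarrier H"
  shows "smash_comult_simple H mult D S C DC act a g = Delta_simple a g"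
  unfolding smash_comult_simple_def Let_def Delta_simple_def Sinv_def[symmetric]
  by (intro tlift_cong) (simp_all add: a g Sinv_mult)

lemma Delta_simple_bilinear: "bilinear_map C H CH2 Delta_simple"
  unfolding Delta_simple_def by (intro smash_linear_intros | simp)+

lemma Delta_simple_closed[simp]: "a \<in> mcarrier C \<Longrightarrow> g \<in> mcarrier H \<Longrightarrow> Delta_simple a g \<in> mcarrier CH2"
  using bilinear_mapD(1)[OF Delta_simple_bilinear] .

lemma linear_map_Delta_simple:
  assumes kq: "kmodule Q" and L: "linear_map CH2 Q L" and a: "a \<in> mcarrier C" and g: "g \<in> mcarrier H"
  shows "L (Delta_simple a g) = tlift C C Q (\<lambda>a0 a1. tlift H H Q (\<lambda>x y. tlift H H Q (\<lambda>x1 x2. tlift H H Q (\<lambda>y1 y2.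
       L (tp CH CH (tp C H a0 x2) (tp C H (act (mult y1 (Sinv x1)) a1) y2))) (D y)) (D x)) (D g)) (DC a)"
  unfolding Delta_simple_def
  apply (subst tlift_commute[OF kmodule_C kmodule_C kmodule_tensor kq L], simp_all add: a g)
  apply (rule sweedler_cong_C; (simp add: a g kq linear_mapD(1)[OF L]; fail)?)
  apply (subst tlift_commute[OF kmodule_H kmodule_H kmodule_tensor kq L], simp_all add: a g)
  apply (rule sweedler_cong; (simp add: a g kq linear_mapD(1)[OF L]; fail)?)
  apply (subst tlift_commute[OF kmodule_H kmodule_H kmodule_tensor kq L], simp_all add: a g)
  apply (rule sweedler_cong; (simp add: a g kq linear_mapD(1)[OF L]; fail)?)
  apply (subst tlift_commute[OF kmodule_H kmodule_H kmodule_tensor kq L], simp_all add: a g)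
  done

abbreviation "Delta \<equiv> smash_comult H mult D S C DC act"

abbreviation "eps \<equiv> smash_counit H e C eC"

lemma Delta_eq: "X \<in> mcarrier CH \<Longrightarrow> Delta X = tlift C H CH2 Delta_simple X"
  unfolding smash_comult_def
  by (rule tlift_cong) (simp_all add: smash_comult_simple_eq_Delta_simple)

lemma Delta_linear: "linear_map CH CH2 Delta"
  using tlift_linear[OF kmodule_C kmodule_H kmodule_tensor Delta_simple_bilinear] Delta_eq
  unfolding linear_map_def by simp

lemma Delta_closed[simp]: "X \<in> mcarrier CH \<Longrightarrow> Delta X \<in> mcarrier CH2"
  using linear_mapD(1)[OF Delta_linear] .

lemma Delta_tp: "a \<in> mcarrier C \<Longrightarrow> g \<in> mcarrier H \<Longrightarrow> Delta (tp C H a g) = Delta_simple a g"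
  by (simp add: Delta_eq tlift_tp[OF kmodule_C kmodule_H kmodule_tensor Delta_simple_bilinear])

lemma eps_bilinear: "bilinear_map C H kself (\<lambda>a g. eC a * e g)"
  by (intro smash_linear_intros | simp)+

lemma eps_linear: "linear_map CH kself eps"
  unfolding smash_counit_def by (rule tlift_linear[OF kmodule_C kmodule_H kmodule_kself eps_bilinear])

lemma eps_tp: "a \<in> mcarrier C \<Longrightarrow> g \<in> mcarrier H \<Longrightarrow> eps (tp C H a g) = eC a * e g"
  unfolding smash_counit_def by (rule tlift_tp[OF kmodule_C kmodule_H kmodule_kself eps_bilinear])


lemma smash_counit_left_tp:
  assumes a: "a \<in> mcarrier C" and g: "g \<in> mcarrier H"
  shows "tlift CH CH CH (\<lambda>x y. msmult CH (eps x) y) (Delta_simple a g) = tp C H a g"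
proof -
  let ?F = "\<lambda>x y. msmult CH (eps x) y" and ?TH = "tlift H H CH" and ?TC = "tlift C C CH"
  have F: "bilinear_map CH CH CH ?F"
    by (intro bilinear_mapI linear_smult_left linear_smult_right eps_linear linear_map_id; simp)
  have "tlift CH CH CH ?F (Delta_simple a g) = ?TC (\<lambda>a0 a1. ?TH (\<lambda>x y. ?TH (\<lambda>x1 x2. ?TH (\<lambda>y1 y2.
      tlift CH CH CH ?F (tp CH CH (tp C H a0 x2) (tp C H (act (mult y1 (Sinv x1)) a1) y2))) (D y)) (D x)) (D g)) (DC a)"
    by (rule linear_map_Delta_simple[OF kmodule_tensor tlift_linear[OF kmodule_tensor kmodule_tensor kmodule_tensor F] a g])
  also have "\<dots> = ?TC (\<lambda>a0 a1. ?TH (\<lambda>x y. ?TH (\<lambda>x1 x2. ?TH (\<lambda>y1 y2.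
      msmult CH (e x2) (msmult CH (eC a0) (tp C H (act (mult y1 (Sinv x1)) a1) y2))) (D y)) (D x)) (D g)) (DC a)"
    using a g by (intro smash_rearrange)
      (simp_all add: tlift_tp[OF kmodule_tensor kmodule_tensor kmodule_tensor F] eps_tp
        kmodule_smult_smult[symmetric] mult.commute)
  also have "\<dots> = ?TC (\<lambda>a0 a1. ?TH (\<lambda>x y. ?TH (\<lambda>y1 y2. ?TH (\<lambda>x1 x2.
      msmult CH (e x2) (msmult CH (eC a0) (tp C H (act (mult y1 (Sinv x1)) a1) y2))) (D x)) (D y)) (D g)) (DC a)"
    using a g by (intro smash_rearrange) simp_all
  also have "\<dots> = ?TC (\<lambda>a0 a1. ?TH (\<lambda>x y. ?TH (\<lambda>y1 y2.
      msmult CH (eC a0) (tp C H (act (mult y1 (Sinv x)) a1) y2)) (D y)) (D g)) (DC a)"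
    using a g by (intro sweedler_counit_right smash_rearrange) (intro smash_linear_intros | simp)+
  also have "\<dots> = ?TC (\<lambda>a0 a1. ?TH (\<lambda>X y2. ?TH (\<lambda>x y1.
      msmult CH (eC a0) (tp C H (act (mult y1 (Sinv x)) a1) y2)) (D X)) (D g)) (DC a)"
    using a g by (intro smash_rearrange) (intro smash_linear_intros | simp)+
  also have "\<dots> = ?TC (\<lambda>a0 a1. ?TH (\<lambda>X y2. msmult CH (e X) (msmult CH (eC a0) (tp C H (act one a1) y2))) (D g)) (DC a)"
    using a g by (intro sweedler_Sinv_right[where F = "\<lambda>k. msmult CH (eC _) (tp C H (act k _) _)"] smash_rearrange)
      (intro smash_linear_intros | simp)+
  also have "\<dots> = ?TC (\<lambda>a0 a1. msmult CH (eC a0) (tp C H (act one a1) g)) (DC a)"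
    using a g by (intro sweedler_counit_left smash_rearrange) (intro smash_linear_intros | simp)+
  also have "\<dots> = tp C H (act one a) g"
    using a g by (intro coalgebra_sweedler_counit_left[OF coalgebra_C]) (intro smash_linear_intros | simp)+
  finally show ?thesis using a by simp
qed


lemma smash_counit_right_tp:
  assumes a: "a \<in> mcarrier C" and g: "g \<in> mcarrier H"
  shows "tlift CH CH CH (\<lambda>x y. msmult CH (eps y) x) (Delta_simple a g) = tp C H a g"
proof -
  let ?F = "\<lambda>x y. msmult CH (eps y) x" and ?TH = "tlift H H CH" and ?TC = "tlift C C CH"
  have F: "bilinear_map CH CH CH ?F"
    by (intro bilinear_mapI linear_smult_left linear_smult_right eps_linear linear_map_id; simp)
  have "tlift CH CH CH ?F (Delta_simple a g) = ?TC (\<lambda>a0 a1. ?TH (\<lambda>x y. ?TH (\<lambda>x1 x2. ?TH (\<lambda>y1 y2.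
      tlift CH CH CH ?F (tp CH CH (tp C H a0 x2) (tp C H (act (mult y1 (Sinv x1)) a1) y2))) (D y)) (D x)) (D g)) (DC a)"
    by (rule linear_map_Delta_simple[OF kmodule_tensor tlift_linear[OF kmodule_tensor kmodule_tensor kmodule_tensor F] a g])
  also have "\<dots> = ?TC (\<lambda>a0 a1. ?TH (\<lambda>x y. ?TH (\<lambda>x1 x2. ?TH (\<lambda>y1 y2.
      msmult CH (e y1) (msmult CH (e x1) (msmult CH (e y2) (msmult CH (eC a1) (tp C H a0 x2))))) (D y)) (D x)) (D g)) (DC a)"
    using a g by (intro smash_rearrange)
      (simp_all add: tlift_tp[OF kmodule_tensor kmodule_tensor kmodule_tensor F] eps_tp eC_act e_mult
        kmodule_smult_smult[symmetric] mult_ac)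
  also have "\<dots> = ?TC (\<lambda>a0 a1. ?TH (\<lambda>x y. ?TH (\<lambda>x1 x2.
      msmult CH (e x1) (msmult CH (e y) (msmult CH (eC a1) (tp C H a0 x2)))) (D x)) (D g)) (DC a)"
    using a g by (intro sweedler_counit_left smash_rearrange) (intro smash_linear_intros | simp)+
  also have "\<dots> = ?TC (\<lambda>a0 a1. ?TH (\<lambda>x y. msmult CH (e y) (msmult CH (eC a1) (tp C H a0 x))) (D g)) (DC a)"
    using a g by (intro sweedler_counit_left smash_rearrange) (intro smash_linear_intros | simp)+
  also have "\<dots> = ?TC (\<lambda>a0 a1. msmult CH (eC a1) (tp C H a0 g)) (DC a)"
    using a g by (intro sweedler_counit_right smash_rearrange) (intro smash_linear_intros | simp)+
  also have "\<dots> = tp C H a g"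
    using a g by (intro coalgebra_sweedler_counit_right[OF coalgebra_C]) (intro smash_linear_intros | simp)+
  finally show ?thesis .
qed


definition Delta_tensor_id where
  "Delta_tensor_id = tlift CH CH (tensor CH2 CH) (\<lambda>x y. tp CH2 CH (Delta x) y)"

definition id_tensor_Delta where
  "id_tensor_Delta = tlift CH CH CH3 (\<lambda>x y. tp CH CH2 x (Delta y))"

lemma Delta_tensor_id_bilinear: "bilinear_map CH CH (tensor CH2 CH) (\<lambda>x y. tp CH2 CH (Delta x) y)"
  by (intro bilinear_mapI linear_tp_left linear_tp_right Delta_linear linear_map_id; simp)

lemma id_tensor_Delta_bilinear: "bilinear_map CH CH CH3 (\<lambda>x y. tp CH CH2 x (Delta y))"
  by (intro bilinear_mapI linear_tp_left linear_tp_right Delta_linear linear_map_id; simp)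

lemma tassoc_Delta_tensor_id_linear: "linear_map CH2 CH3 (\<lambda>z. tassoc CH CH CH (Delta_tensor_id z))"
  unfolding Delta_tensor_id_def
  by (intro linear_map_comp[OF tassoc_linear] tlift_linear[OF kmodule_tensor kmodule_tensor kmodule_tensor
        Delta_tensor_id_bilinear]) simp_all

lemma id_tensor_Delta_linear: "linear_map CH2 CH3 id_tensor_Delta"
  unfolding id_tensor_Delta_def
  by (rule tlift_linear[OF kmodule_tensor kmodule_tensor kmodule_tensor id_tensor_Delta_bilinear])

text \<open>Both sides of coassociativity on \<open>a \<otimes> g\<close> become sums of terms
  \<open>(c0 \<otimes> u2) \<otimes> (w1 S'(u1)\<cdot>c1 \<otimes> w2) \<otimes> (y1 k S'(x1)\<cdot>c2 \<otimes> y2)\<close> over coproducts of \<open>a\<close>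
  and \<open>g\<close>; the slot \<open>k\<close> is \<open>1\<close> on the left and \<open>S'(h1) h0\<close> on the right.\<close>

definition coassoc_summand where
  "coassoc_summand c0 c1 c2 x1 u1 u2 w1 w2 k y1 y2 = tp CH CH2 (tp C H c0 u2)
     (tp CH CH (tp C H (act (mult w1 (Sinv u1)) c1) w2) (tp C H (act (mult y1 (mult k (Sinv x1))) c2) y2))"

lemma coassoc_summand_closed[simp]:
  "{c0, c1, c2} \<subseteq> mcarrier C \<Longrightarrow> {x1, u1, u2, w1, w2, k, y1, y2} \<subseteq> mcarrier H \<Longrightarrow>
    coassoc_summand c0 c1 c2 x1 u1 u2 w1 w2 k y1 y2 \<in> mcarrier CH3"
  by (simp add: coassoc_summand_def)

definition coassoc_sum where
  "coassoc_sum c0 c1 c2 g = tlift H H CH3 (\<lambda>x y. tlift H H CH3 (\<lambda>x1 x2. tlift H H CH3 (\<lambda>y1 y2.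
     tlift H H CH3 (\<lambda>u w. tlift H H CH3 (\<lambda>u1 u2. tlift H H CH3 (\<lambda>w1 w2.
       coassoc_summand c0 c1 c2 x1 u1 u2 w1 w2 one y1 y2) (D w)) (D u)) (D x2)) (D y)) (D x)) (D g)"

lemma tassoc_Delta_tensor_id_tp:
  assumes a0: "a0 \<in> mcarrier C" and x2: "x2 \<in> mcarrier H" and a1: "a1 \<in> mcarrier C"
    and y1: "y1 \<in> mcarrier H" and x1: "x1 \<in> mcarrier H" and y2: "y2 \<in> mcarrier H"
  shows "tassoc CH CH CH (Delta_tensor_id (tp CH CH (tp C H a0 x2) (tp C H (act (mult y1 (Sinv x1)) a1) y2))) =
    tlift C C CH3 (\<lambda>b0 b1. tlift H H CH3 (\<lambda>u w. tlift H H CH3 (\<lambda>u1 u2. tlift H H CH3 (\<lambda>w1 w2.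
       coassoc_summand b0 b1 a1 x1 u1 u2 w1 w2 one y1 y2) (D w)) (D u)) (D x2)) (DC a0)"
proof -
  let ?v = "tp C H (act (mult y1 (Sinv x1)) a1) y2"
  have v: "?v \<in> mcarrier CH" using a1 y1 x1 y2 by simp
  have bl: "bilinear_map CH CH CH3 (\<lambda>x y. tp CH CH2 x (tp CH CH y ?v))"
    by (intro bilinear_mapI linear_tp_left linear_tp_right linear_map_id; simp add: v)
  have "tassoc CH CH CH (Delta_tensor_id (tp CH CH (tp C H a0 x2) ?v))
      = tlift CH CH CH3 (\<lambda>x y. tp CH CH2 x (tp CH CH y ?v)) (Delta_simple a0 x2)"
    using a0 x2 v unfolding Delta_tensor_id_def
    by (simp add: tlift_tp[OF kmodule_tensor kmodule_tensor kmodule_tensor Delta_tensor_id_bilinear]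
        Delta_tp tassoc_tp)
  also have "\<dots> = tlift C C CH3 (\<lambda>b0 b1. tlift H H CH3 (\<lambda>u w. tlift H H CH3 (\<lambda>u1 u2. tlift H H CH3 (\<lambda>w1 w2.
       tlift CH CH CH3 (\<lambda>x y. tp CH CH2 x (tp CH CH y ?v))
         (tp CH CH (tp C H b0 u2) (tp C H (act (mult w1 (Sinv u1)) b1) w2))) (D w)) (D u)) (D x2)) (DC a0)"
    by (rule linear_map_Delta_simple[OF kmodule_tensor tlift_linear[OF kmodule_tensor kmodule_tensor kmodule_tensor bl] a0 x2])
  also have "\<dots> = tlift C C CH3 (\<lambda>b0 b1. tlift H H CH3 (\<lambda>u w. tlift H H CH3 (\<lambda>u1 u2. tlift H H CH3 (\<lambda>w1 w2.
       coassoc_summand b0 b1 a1 x1 u1 u2 w1 w2 one y1 y2) (D w)) (D u)) (D x2)) (DC a0)"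
    using a0 x2 a1 y1 x1 y2 v
    by (intro smash_rearrange) (simp_all add: tlift_tp[OF kmodule_tensor kmodule_tensor _ bl] coassoc_summand_def)
  finally show ?thesis .
qed

lemma id_tensor_Delta_tp:
  assumes a0: "a0 \<in> mcarrier C" and x2: "x2 \<in> mcarrier H" and a1: "a1 \<in> mcarrier C"
    and y1: "y1 \<in> mcarrier H" and x1: "x1 \<in> mcarrier H" and y2: "y2 \<in> mcarrier H"
  shows "id_tensor_Delta (tp CH CH (tp C H a0 x2) (tp C H (act (mult y1 (Sinv x1)) a1) y2)) =
    tlift H H CH3 (\<lambda>y10 y11. tlift H H CH3 (\<lambda>s0 s1. tlift C C CH3 (\<lambda>b0 b1. tlift H H CH3 (\<lambda>p q.
      tlift H H CH3 (\<lambda>p1 p2. tlift H H CH3 (\<lambda>q1 q2.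
        coassoc_summand a0 b0 b1 s0 s1 x2 y10 p2 (mult (Sinv p1) y11) q1 q2) (D q)) (D p)) (D y2)) (DC a1)) (D x1)) (D y1)"
proof -
  let ?u = "tp C H a0 x2" and ?h = "mult y1 (Sinv x1)"
  let ?G = "\<lambda>c0 c1. tlift H H CH3 (\<lambda>p q. tlift H H CH3 (\<lambda>p1 p2. tlift H H CH3 (\<lambda>q1 q2.
        tp CH CH2 ?u (tp CH CH (tp C H c0 p2) (tp C H (act (mult q1 (Sinv p1)) c1) q2))) (D q)) (D p)) (D y2)"
  let ?K = "\<lambda>h0 h1. tlift C C CH3 (\<lambda>b0 b1. ?G (act h0 b0) (act h1 b1)) (DC a1)"
  have Gb: "bilinear_map C C CH3 ?G" by (intro smash_linear_intros | simp add: a0 x2 y2)+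
  have Kb: "bilinear_map H H CH3 ?K" by (intro smash_linear_intros | simp add: a0 x2 y2 a1)+
  have "id_tensor_Delta (tp CH CH ?u (tp C H (act ?h a1) y2)) = tp CH CH2 ?u (Delta_simple (act ?h a1) y2)"
    unfolding id_tensor_Delta_def using a0 x2 a1 y1 x1 y2
    by (simp add: tlift_tp[OF kmodule_tensor kmodule_tensor kmodule_tensor id_tensor_Delta_bilinear] Delta_tp)
  also have "\<dots> = tlift C C CH3 ?G (DC (act ?h a1))"
    using a0 x2 a1 y1 x1 y2 by (subst linear_map_Delta_simple[OF _ bilinear_map_linear_right[OF tp_bilinear]]) simp_all
  also have "\<dots> = tlift H H CH3 ?K (D ?h)"
    using a1 y1 x1 by (intro sweedler_DC_act Gb) simp_all
  also have "\<dots> = tlift H H CH3 (\<lambda>y10 y11. tlift H H CH3 (\<lambda>t0 t1. ?K (mult y10 t0) (mult y11 t1)) (D (Sinv x1))) (D y1)"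
    using y1 x1 by (intro sweedler_D_mult Kb) simp_all
  also have "\<dots> = tlift H H CH3 (\<lambda>y10 y11. tlift H H CH3 (\<lambda>s0 s1. ?K (mult y10 (Sinv s1)) (mult y11 (Sinv s0))) (D x1)) (D y1)"
    using a0 x2 a1 y1 x1 y2 by (intro sweedler_cong sweedler_D_Sinv) (intro smash_linear_intros | simp)+
  also have "\<dots> = tlift H H CH3 (\<lambda>y10 y11. tlift H H CH3 (\<lambda>s0 s1. tlift C C CH3 (\<lambda>b0 b1. tlift H H CH3 (\<lambda>p q.
      tlift H H CH3 (\<lambda>p1 p2. tlift H H CH3 (\<lambda>q1 q2.
        coassoc_summand a0 b0 b1 s0 s1 x2 y10 p2 (mult (Sinv p1) y11) q1 q2) (D q)) (D p)) (D y2)) (DC a1)) (D x1)) (D y1)"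
    using a0 x2 a1 y1 x1 y2 by (intro smash_rearrange) (simp_all add: coassoc_summand_def act_mult mult_assoc)
  finally show ?thesis .
qed


lemma tassoc_Delta_tensor_id_Delta_simple:
  assumes a: "a \<in> mcarrier C" and g: "g \<in> mcarrier H"
  shows "tassoc CH CH CH (Delta_tensor_id (Delta_simple a g))
    = tlift C C CH3 (\<lambda>a0 a1. tlift C C CH3 (\<lambda>b0 b1. coassoc_sum a0 b0 b1 g) (DC a1)) (DC a)"
proof -
  let ?TH = "tlift H H CH3" and ?TC = "tlift C C CH3"
  let ?s = "\<lambda>b0 b1 a1 x1 x2 y1 y2. ?TH (\<lambda>u w. ?TH (\<lambda>u1 u2. ?TH (\<lambda>w1 w2.
    coassoc_summand b0 b1 a1 x1 u1 u2 w1 w2 one y1 y2) (D w)) (D u)) (D x2)"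
  have "tassoc CH CH CH (Delta_tensor_id (Delta_simple a g)) = ?TC (\<lambda>a0 a1. ?TH (\<lambda>x y. ?TH (\<lambda>x1 x2. ?TH (\<lambda>y1 y2.
      tassoc CH CH CH (Delta_tensor_id (tp CH CH (tp C H a0 x2) (tp C H (act (mult y1 (Sinv x1)) a1) y2))))
      (D y)) (D x)) (D g)) (DC a)"
    by (rule linear_map_Delta_simple[OF kmodule_tensor tassoc_Delta_tensor_id_linear a g])
  also have "\<dots> = ?TC (\<lambda>a0 a1. ?TH (\<lambda>x y. ?TH (\<lambda>x1 x2. ?TH (\<lambda>y1 y2.
      ?TC (\<lambda>b0 b1. ?s b0 b1 a1 x1 x2 y1 y2) (DC a0)) (D y)) (D x)) (D g)) (DC a)"
    using a g by (intro smash_rearrange) (simp_all add: tassoc_Delta_tensor_id_tp)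
  also have "\<dots> = ?TC (\<lambda>a0 a1. ?TH (\<lambda>x y. ?TH (\<lambda>x1 x2. ?TC (\<lambda>b0 b1.
      ?TH (\<lambda>y1 y2. ?s b0 b1 a1 x1 x2 y1 y2) (D y)) (DC a0)) (D x)) (D g)) (DC a)"
    using a g by (intro smash_rearrange) simp_all
  also have "\<dots> = ?TC (\<lambda>a0 a1. ?TH (\<lambda>x y. ?TC (\<lambda>b0 b1. ?TH (\<lambda>x1 x2.
      ?TH (\<lambda>y1 y2. ?s b0 b1 a1 x1 x2 y1 y2) (D y)) (D x)) (DC a0)) (D g)) (DC a)"
    using a g by (intro smash_rearrange) simp_all
  also have "\<dots> = ?TC (\<lambda>a0 a1. ?TC (\<lambda>b0 b1. coassoc_sum b0 b1 a1 g) (DC a0)) (DC a)"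
    unfolding coassoc_sum_def using a g by (intro smash_rearrange) simp_all
  also have "\<dots> = ?TC (\<lambda>a0 a1. ?TC (\<lambda>b0 b1. coassoc_sum a0 b0 b1 g) (DC a1)) (DC a)"
    using a g unfolding coassoc_sum_def coassoc_summand_def
    by (intro coalgebra_sweedler_coassoc[OF coalgebra_C]) (intro smash_linear_intros | simp)+
  finally show ?thesis .
qed

lemma id_tensor_Delta_Delta_simple:
  assumes a: "a \<in> mcarrier C" and g: "g \<in> mcarrier H"
  shows "id_tensor_Delta (Delta_simple a g)
    = tlift C C CH3 (\<lambda>a0 a1. tlift C C CH3 (\<lambda>b0 b1. coassoc_sum a0 b0 b1 g) (DC a1)) (DC a)"
proof -
  let ?TH = "tlift H H CH3" and ?TC = "tlift C C CH3"
  let ?r = "\<lambda>a0 b0 b1 x2 y2 y10 y11 s0 s1. ?TH (\<lambda>p q. ?TH (\<lambda>p1 p2. ?TH (\<lambda>q1 q2.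
    coassoc_summand a0 b0 b1 s0 s1 x2 y10 p2 (mult (Sinv p1) y11) q1 q2) (D q)) (D p)) (D y2)"
  have "id_tensor_Delta (Delta_simple a g) = ?TC (\<lambda>a0 a1. ?TH (\<lambda>x y. ?TH (\<lambda>x1 x2. ?TH (\<lambda>y1 y2.
      id_tensor_Delta (tp CH CH (tp C H a0 x2) (tp C H (act (mult y1 (Sinv x1)) a1) y2))) (D y)) (D x)) (D g)) (DC a)"
    by (rule linear_map_Delta_simple[OF kmodule_tensor id_tensor_Delta_linear a g])
  also have "\<dots> = ?TC (\<lambda>a0 a1. ?TH (\<lambda>x y. ?TH (\<lambda>x1 x2. ?TH (\<lambda>y1 y2. ?TH (\<lambda>y10 y11. ?TH (\<lambda>s0 s1.
      ?TC (\<lambda>b0 b1. ?r a0 b0 b1 x2 y2 y10 y11 s0 s1) (DC a1)) (D x1)) (D y1)) (D y)) (D x)) (D g)) (DC a)"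
    using a g by (intro smash_rearrange) (simp_all add: id_tensor_Delta_tp)
  also have "\<dots> = ?TC (\<lambda>a0 a1. ?TH (\<lambda>x y. ?TH (\<lambda>x1 x2. ?TH (\<lambda>y1 y2. ?TH (\<lambda>y10 y11. ?TC (\<lambda>b0 b1.
      ?TH (\<lambda>s0 s1. ?r a0 b0 b1 x2 y2 y10 y11 s0 s1) (D x1)) (DC a1)) (D y1)) (D y)) (D x)) (D g)) (DC a)"
    using a g by (intro smash_rearrange) simp_all
  also have "\<dots> = ?TC (\<lambda>a0 a1. ?TH (\<lambda>x y. ?TH (\<lambda>x1 x2. ?TH (\<lambda>y1 y2. ?TC (\<lambda>b0 b1. ?TH (\<lambda>y10 y11.
      ?TH (\<lambda>s0 s1. ?r a0 b0 b1 x2 y2 y10 y11 s0 s1) (D x1)) (D y1)) (DC a1)) (D y)) (D x)) (D g)) (DC a)"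
    using a g by (intro smash_rearrange) simp_all
  also have "\<dots> = ?TC (\<lambda>a0 a1. ?TH (\<lambda>x y. ?TH (\<lambda>x1 x2. ?TC (\<lambda>b0 b1. ?TH (\<lambda>y1 y2. ?TH (\<lambda>y10 y11.
      ?TH (\<lambda>s0 s1. ?r a0 b0 b1 x2 y2 y10 y11 s0 s1) (D x1)) (D y1)) (D y)) (DC a1)) (D x)) (D g)) (DC a)"
    using a g by (intro smash_rearrange) simp_all
  also have "\<dots> = ?TC (\<lambda>a0 a1. ?TH (\<lambda>x y. ?TC (\<lambda>b0 b1. ?TH (\<lambda>x1 x2. ?TH (\<lambda>y1 y2. ?TH (\<lambda>y10 y11.
      ?TH (\<lambda>s0 s1. ?r a0 b0 b1 x2 y2 y10 y11 s0 s1) (D x1)) (D y1)) (D y)) (D x)) (DC a1)) (D g)) (DC a)"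
    using a g by (intro smash_rearrange) simp_all
  also have "\<dots> = ?TC (\<lambda>a0 a1. ?TC (\<lambda>b0 b1. ?TH (\<lambda>x y. ?TH (\<lambda>x1 x2. ?TH (\<lambda>y1 y2. ?TH (\<lambda>y10 y11.
      ?TH (\<lambda>s0 s1. ?r a0 b0 b1 x2 y2 y10 y11 s0 s1) (D x1)) (D y1)) (D y)) (D x)) (D g)) (DC a1)) (DC a)"
    using a g by (intro smash_rearrange) simp_all
  also have "\<dots> = ?TC (\<lambda>a0 a1. ?TC (\<lambda>b0 b1. coassoc_sum a0 b0 b1 g) (DC a1)) (DC a)"
    unfolding coassoc_sum_def using a g
    by (intro sweedler_Sinv_contract[where \<Psi> = "coassoc_summand _ _ _"] smash_rearrange)
      (intro smash_linear_intros | simp add: coassoc_summand_def)+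
  finally show ?thesis .
qed

lemma smash_coalgebra: "coalgebra CH Delta eps"
  unfolding coalgebra_def
proof (intro conjI ballI)
  show "kmodule CH" "linear_map CH CH2 Delta" "linear_map CH kself eps"
    by (simp_all add: Delta_linear eps_linear)
  fix m assume m: "m \<in> mcarrier CH"
  have tensor_ext_CH: "L1 m = L2 m" if "linear_map CH (tensor M N) L1" "linear_map CH (tensor M N) L2"
    "\<And>a g. a \<in> mcarrier C \<Longrightarrow> g \<in> mcarrier H \<Longrightarrow> L1 (tp C H a g) = L2 (tp C H a g)" for M N L1 L2
    by (rule tensor_ext[OF kmodule_C kmodule_H kmodule_tensor that m])
  have counit: "bilinear_map CH CH CH (\<lambda>x y. msmult CH (eps x) y)" "bilinear_map CH CH CH (\<lambda>x y. msmult CH (eps y) x)"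
    by (intro bilinear_mapI linear_smult_left linear_smult_right eps_linear linear_map_id; simp)+
  show "tlift CH CH CH (\<lambda>x y. msmult CH (eps x) y) (Delta m) = m"
    by (rule tensor_ext_CH[OF linear_map_comp[OF tlift_linear[OF kmodule_tensor kmodule_tensor kmodule_tensor counit(1)]
          Delta_linear] linear_map_id])
      (simp add: Delta_tp smash_counit_left_tp)
  show "tlift CH CH CH (\<lambda>x y. msmult CH (eps y) x) (Delta m) = m"
    by (rule tensor_ext_CH[OF linear_map_comp[OF tlift_linear[OF kmodule_tensor kmodule_tensor kmodule_tensor counit(2)]
          Delta_linear] linear_map_id])
      (simp add: Delta_tp smash_counit_right_tp)
  have "tassoc CH CH CH (Delta_tensor_id (Delta m)) = id_tensor_Delta (Delta m)"
    by (rule tensor_ext_CH[OF linear_map_comp[OF tassoc_Delta_tensor_id_linear Delta_linear]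
          linear_map_comp[OF id_tensor_Delta_linear Delta_linear]])
      (simp add: Delta_tp tassoc_Delta_tensor_id_Delta_simple id_tensor_Delta_Delta_simple)
  then show "tassoc CH CH CH (tlift CH CH (tensor CH2 CH) (\<lambda>x y. tp CH2 CH (Delta x) y) (Delta m)) =
      tlift CH CH CH3 (\<lambda>x y. tp CH CH2 x (Delta y)) (Delta m)"
    by (simp add: Delta_tensor_id_def id_tensor_Delta_def)
qed

end

theorem mainTheorem2:
  fixes H :: "('k::comm_ring_1, 'h) kmod"
    and mult :: "'h \<Rightarrow> 'h \<Rightarrow> 'h" and one :: 'h
    and D :: "'h \<Rightarrow> ('k, 'h, 'h) tens" and e :: "'h \<Rightarrow> 'k" and S :: "'h \<Rightarrow> 'h"
    and C :: "('k, 'c) kmod" and DC :: "'c \<Rightarrow> ('k, 'c, 'c) tens" and eC :: "'c \<Rightarrow> 'k"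
    and act :: "'h \<Rightarrow> 'c \<Rightarrow> 'c"
  assumes "hopf_algebra H mult one D e S"
    and "bij_betw S (mcarrier H) (mcarrier H)"
    and "module_coalgebra H mult one D e C DC eC act"
  shows "coalgebra (tensor C H) (smash_comult H mult D S C DC act) (smash_counit H e C eC)"
proof -
  interpret smash H mult one D e S C DC eC act
    using assms by (simp add: smash_def hopf_bij_def hopf_def hopf_bij_axioms_def smash_axioms_def)
  show ?thesis by (rule smash_coalgebra)
qed

end
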